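(* Let $K$ be a field, and let $R \in \mathfrak R_K$ be of countable type, of Loewy length $\sigma + 1$, and of top layer dimension $n$, where $0 < n < \omega$. Then there is a $K$-algebra isomorphism $R \cong B_{\sigma,n}$.
   Context: Socle sequence of a ring $R$ (as a right module over itself): $S_0 = 0$, $S_{\alpha+1}/S_\alpha = \mathrm{Soc}(R/S_\alpha)$, and $S_\alpha = \bigcup_{\beta<\alpha} S_\beta$ for limit $\alpha$. $R$ is semiartinian if $S_\tau = R$ for some ordinal $\tau$; the least such $\tau$ is the Loewy length, which for $R \neq 0$ has the form $\sigma+1$. The layers are $L_\alpha = S_{\alpha+1}/S_\alpha$ for $\alpha \le \sigma$. For a field $K$ and a cardinal $\lambda$, $K^{(\lambda)}$ denotes the direct sum of $\lambda$ copies of $K$ with componentwise operations, regarded as a $K$-algebra without unit. $\mathfrak R_K$ is the class of all commutative von Neumann regular semiartinian $K$-algebras $R$ (of Loewy length $\sigma+1$) such that for each $\alpha \le \sigma$ there are a cardinal $\lambda_\alpha>0$ and a $K$-linear isomorphism of $K$-algebras without unit $L_\alpha \cong K^{(\lambda_\alpha)}$. Here $\lambda_\sigma$ is finite and is called the top layer dimension of $R$. $R \in \mathfrak R_K$ is of countable type if $\sigma$ is countable and all $\lambda_\alpha$ ($\alpha\le\sigma$) are countable. For a field $K$, an infinite cardinal (or infinite index set) $\kappa$ and a sequence $\mathcal R = (R_\alpha \mid \alpha<\kappa)$ of $K$-algebras, let $P = \prod_{\alpha<\kappa} R_\alpha$, $I = \bigoplus_{\alpha<\kappa} R_\alpha \subseteq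 P$, and let $R(\kappa,K,\mathcal R)$ denote the $K$-subalgebra $I \oplus 1_P\cdot K$ of $P$. $\boxplus$ denotes the ring direct product. The $K$-algebras $B_{\alpha,n}$ ($\alpha$ an ordinal, $0<n<\omega$) are defined recursively: $B_{0,1} = K$; for $\alpha = \beta+1$, $B_{\alpha,1} = R(\aleph_0,K,\mathcal R)$ where $\mathcal R$ is the constant sequence $R_m = B_{\beta,1}$ ($m<\aleph_0$); for limit $\alpha$, $B_{\alpha,1} = R(\alpha,K,(B_{\beta,1}\mid \beta<\alpha))$; and for $1<n<\omega$, $B_{\alpha,n} = B_{\alpha,1}\boxplus\cdots\boxplus B_{\alpha,1}$ ($n$ copies). *)

theory Defs
  imports "HOL-Algebra.Ideal" "HOL-Algebra.AbelCoset" "HOL-Library.Countable_Set"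
begin

definition K_algebra :: "('a, 'b) ring_scheme \<Rightarrow> ('k::field \<Rightarrow> 'a \<Rightarrow> 'a) \<Rightarrow> bool" where
  "K_algebra R sm \<longleftrightarrow> cring R \<and>
     (\<forall>c. \<forall>x\<in>carrier R. sm c x \<in> carrier R) \<and>
     (\<forall>c. \<forall>x\<in>carrier R. \<forall>y\<in>carrier R. sm c (x \<oplus>\<^bsub>R\<^esub> y) = sm c x \<oplus>\<^bsub>R\<^esub> sm c y) \<and>
     (\<forall>c d. \<forall>x\<in>carrier R. sm (c + d) x = sm c x \<oplus>\<^bsub>R\<^esub> sm d x) \<and>
     (\<forall>c d. \<forall>x\<in>carrier R. sm (c * d) x = sm c (sm d x)) \<and>
     (\<forall>x\<in>carrier R. sm 1 x = x) \<and>
     (\<forall>c. \<forall>x\<in>carrier R. \<forall>y\<in>carrier R. sm c (x \<otimes>\<^bsub>R\<^esub> y) = sm c x \<otimes>\<^bsub>R\<^esub> y)"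

definition von_Neumann_regular :: "('a, 'b) ring_scheme \<Rightarrow> bool" where
  "von_Neumann_regular R \<longleftrightarrow>
     (\<forall>a\<in>carrier R. \<exists>x\<in>carrier R. a = a \<otimes>\<^bsub>R\<^esub> x \<otimes>\<^bsub>R\<^esub> a)"

section \<open>Socle sequence, indexed by a well-order standing for the ordinals\<close>

text \<open>soc_over R S is the preimage in R of Soc(R/S): the sum of S and of all ideals I
  such that I/S is a simple submodule of the module R/S, i.e. S is properly contained
  in I and there is no ideal strictly between S and I.\<close>

definition minimal_over :: "('a, 'b) ring_scheme \<Rightarrow> 'a set \<Rightarrow> 'a set \<Rightarrow> bool" where
  "minimal_over R S I \<longleftrightarrow> ideal I R \<and> S \<subset> I \<and>
     (\<forall>J. ideal J R \<longrightarrow> S \<subseteq> J \<longrightarrow> J \<subseteq> I \<longrightarrow> J = S \<or> J = I)"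

definition soc_over :: "('a, 'b) ring_scheme \<Rightarrow> 'a set \<Rightarrow> 'a set" where
  "soc_over R S = genideal R (S \<union> \<Union> {I. minimal_over R S I})"

definition rless :: "'i rel \<Rightarrow> 'i \<Rightarrow> 'i \<Rightarrow> bool" where
  "rless r a b \<longleftrightarrow> (a, b) \<in> r \<and> a \<noteq> b"

definition is_zero_pt :: "'i rel \<Rightarrow> 'i \<Rightarrow> bool" where
  "is_zero_pt r a \<longleftrightarrow> a \<in> Field r \<and> \<not> (\<exists>b. rless r b a)"

definition is_succ_of :: "'i rel \<Rightarrow> 'i \<Rightarrow> 'i \<Rightarrow> bool" where
  "is_succ_of r b a \<longleftrightarrow> rless r b a \<and> \<not> (\<exists>c. rless r b c \<and> rless r c a)"

definition is_limit_pt :: "'i rel \<Rightarrow> 'i \<Rightarrow> bool" where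
  "is_limit_pt r a \<longleftrightarrow> a \<in> Field r \<and> \<not> is_zero_pt r a \<and> \<not> (\<exists>b. is_succ_of r b a)"

definition socle_seq :: "('a, 'b) ring_scheme \<Rightarrow> 'i rel \<Rightarrow> ('i \<Rightarrow> 'a set) \<Rightarrow> bool" where
  "socle_seq R r S \<longleftrightarrow>
     (\<forall>a. is_zero_pt r a \<longrightarrow> S a = {\<zero>\<^bsub>R\<^esub>}) \<and>
     (\<forall>a b. is_succ_of r b a \<longrightarrow> S a = soc_over R (S b)) \<and>
     (\<forall>a. is_limit_pt r a \<longrightarrow> S a = \<Union> {S b | b. rless r b a})"

definition fin_supp :: "'l set \<Rightarrow> ('l \<Rightarrow> 'k::zero) set" where
  "fin_supp L = {f. finite {i. f i \<noteq> 0} \<and> (\<forall>i. i \<notin> L \<longrightarrow> f i = 0)}"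

text \<open>The layer T/S (T = S_{alpha+1}, S = S_alpha) is K-linearly isomorphic, as a K-algebra
  without unit, to K^(L) with componentwise operations.\<close>
definition layer_iso :: "('a, 'b) ring_scheme \<Rightarrow> ('k::field \<Rightarrow> 'a \<Rightarrow> 'a) \<Rightarrow> 'a set \<Rightarrow> 'a set
    \<Rightarrow> 'l set \<Rightarrow> bool" where
  "layer_iso R sm S T L \<longleftrightarrow> (\<exists>\<phi>.
     bij_betw \<phi> {S +>\<^bsub>R\<^esub> x | x. x \<in> T} (fin_supp L) \<and>
     (\<forall>x\<in>T. \<forall>y\<in>T. \<phi> (S +>\<^bsub>R\<^esub> (x \<oplus>\<^bsub>R\<^esub> y)) = (\<lambda>i. \<phi> (S +>\<^bsub>R\<^esub> x) i + \<phi> (S +>\<^bsub>R\<^esub> y) i)) \<and>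
     (\<forall>x\<in>T. \<forall>y\<in>T. \<phi> (S +>\<^bsub>R\<^esub> (x \<otimes>\<^bsub>R\<^esub> y)) = (\<lambda>i. \<phi> (S +>\<^bsub>R\<^esub> x) i * \<phi> (S +>\<^bsub>R\<^esub> y) i)) \<and>
     (\<forall>c. \<forall>x\<in>T. \<phi> (S +>\<^bsub>R\<^esub> (sm c x)) = (\<lambda>i. c * \<phi> (S +>\<^bsub>R\<^esub> x) i)))"

text \<open>Every B_{alpha,1} is realised concretely as an algebra of K-valued functions on a set of
  "leaves" (paths), with pointwise operations: B_{0,1} = K lives on the single path [],
  a product prod_{j} R_j lives on the disjoint union of the leaf sets (path j # p),
  where j = Inr m (m < aleph_0) for successor steps and j = Inl beta (beta < alpha) for
  limit steps. Functions are required to vanish outside the leaf set.\<close>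

inductive Bleaf :: "'i rel \<Rightarrow> 'i \<Rightarrow> ('i + nat) list \<Rightarrow> bool" for r where
  leaf_zero: "is_zero_pt r a \<Longrightarrow> Bleaf r a []"
| leaf_succ: "is_succ_of r b a \<Longrightarrow> Bleaf r b p \<Longrightarrow> Bleaf r a (Inr m # p)"
| leaf_lim: "is_limit_pt r a \<Longrightarrow> rless r b a \<Longrightarrow> Bleaf r b p \<Longrightarrow> Bleaf r a (Inl b # p)"

definition Bone :: "'i rel \<Rightarrow> 'i \<Rightarrow> ('i + nat) list \<Rightarrow> 'k::field" where
  "Bone r a p = (if Bleaf r a p then 1 else 0)"

text \<open>At a successor a = b+1 this is
  R(aleph_0, K, (B_{b,1})_m) = (direct sum) + K 1_P: all components lie in B_{b,1} and all
  but finitely many components equal c * 1 for a single scalar c; similarly at limits.\<close>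
inductive Bcar :: "'i rel \<Rightarrow> 'i \<Rightarrow> (('i + nat) list \<Rightarrow> 'k::field) \<Rightarrow> bool" for r where
  car_zero: "is_zero_pt r a \<Longrightarrow> (\<forall>p. p \<noteq> [] \<longrightarrow> x p = 0) \<Longrightarrow> Bcar r a x"
| car_succ: "is_succ_of r b a \<Longrightarrow>
     (\<forall>p. (\<not> (\<exists>m q. p = Inr m # q)) \<longrightarrow> x p = 0) \<Longrightarrow>
     (\<forall>m. Bcar r b (\<lambda>q. x (Inr m # q))) \<Longrightarrow>
     (\<exists>c. finite {m. (\<lambda>q. x (Inr m # q)) \<noteq> (\<lambda>q. c * Bone r b q)}) \<Longrightarrow> Bcar r a x"
| car_lim: "is_limit_pt r a \<Longrightarrow>
     (\<forall>p. (\<not> (\<exists>b q. rless r b a \<and> p = Inl b # q)) \<longrightarrow> x p = 0) \<Longrightarrow>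
     (\<forall>b. rless r b a \<longrightarrow> Bcar r b (\<lambda>q. x (Inl b # q))) \<Longrightarrow>
     (\<exists>c. finite {b. rless r b a \<and> (\<lambda>q. x (Inl b # q)) \<noteq> (\<lambda>q. c * Bone r b q)}) \<Longrightarrow> Bcar r a x"

text \<open>B_{a,n}: the ring direct product of n copies of B_{a,1}, realised on index pairs (k, p), k < n.\<close>
definition Bn_car :: "'i rel \<Rightarrow> 'i \<Rightarrow> nat \<Rightarrow> (nat \<times> ('i + nat) list \<Rightarrow> 'k::field) set" where
  "Bn_car r a n = {y. (\<forall>k<n. Bcar r a (\<lambda>p. y (k, p))) \<and> (\<forall>k p. n \<le> k \<longrightarrow> y (k, p) = 0)}"

definition Bn_one :: "'i rel \<Rightarrow> 'i \<Rightarrow> nat \<Rightarrow> nat \<times> ('i + nat) list \<Rightarrow> 'k::field" where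
  "Bn_one r a n = (\<lambda>(k, p). if k < n then Bone r a p else 0)"

definition iso_to_Bn :: "('a, 'b) ring_scheme \<Rightarrow> ('k::field \<Rightarrow> 'a \<Rightarrow> 'a) \<Rightarrow> 'i rel \<Rightarrow> 'i \<Rightarrow> nat
    \<Rightarrow> bool" where
  "iso_to_Bn R sm r a n \<longleftrightarrow> (\<exists>\<phi> :: 'a \<Rightarrow> nat \<times> ('i + nat) list \<Rightarrow> 'k.
     bij_betw \<phi> (carrier R) (Bn_car r a n) \<and>
     (\<forall>x\<in>carrier R. \<forall>y\<in>carrier R. \<phi> (x \<oplus>\<^bsub>R\<^esub> y) = (\<lambda>i. \<phi> x i + \<phi> y i)) \<and>
     (\<forall>x\<in>carrier R. \<forall>y\<in>carrier R. \<phi> (x \<otimes>\<^bsub>R\<^esub> y) = (\<lambda>i. \<phi> x i * \<phi> y i)) \<and>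
     (\<forall>c. \<forall>x\<in>carrier R. \<phi> (sm c x) = (\<lambda>i. c * \<phi> x i)) \<and>
     \<phi> \<one>\<^bsub>R\<^esub> = Bn_one r a n)"

end

(* Call an idempotent e an atom at level a if e lies in S (a + 1) and its image in the layer
   S (a + 1) / S a = K^(Lambda_a) is a coordinate vector. By transfinite induction on a, the corner
   eR of an atom at level a is isomorphic to B_(a,1). At level 0 the corner is K. At a successor
   a = b + 1 (resp. a limit a), e is split into infinitely many orthogonal atoms at level b (resp.
   one atom at each level b < a) whose finite sums absorb every element of S a below e; then eR is
   the algebra of families in the product of their corners that are eventually a constant multiple
   of the unit, which is R(aleph_0, K, B_(b,1)) (resp. R(a, K, (B_(b,1))_b)). Atoms below an
   idempotent outside S a exist because R is semiartinian and von Neumann regular, and countability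
   lets the family be built by absorbing an enumeration of the basis idempotents below a one at a
   time. Finally 1 is a sum of n orthogonal atoms at level sigma, so R = B_(sigma,n). *)

theory Submission
  imports Defs "HOL-Algebra.Ring_Divisibility"
begin

section \<open>Ideals and the socle sequence\<close>

lemma (in cring) idealI_closed:
  assumes "I \<subseteq> carrier R" "\<zero> \<in> I" "\<And>x y. x \<in> I \<Longrightarrow> y \<in> I \<Longrightarrow> x \<oplus> y \<in> I"
    "\<And>x. x \<in> I \<Longrightarrow> \<ominus> x \<in> I" "\<And>x y. x \<in> I \<Longrightarrow> y \<in> carrier R \<Longrightarrow> x \<otimes> y \<in> I"
  shows "ideal I R"
proof (rule idealI)
  show "ring R" by (rule ring_axioms)
  show "subgroup I (add_monoid R)"
  proof (rule subgroup.intro)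
    show "I \<subseteq> carrier (add_monoid R)" using assms(1) by simp
    show "\<And>x y. x \<in> I \<Longrightarrow> y \<in> I \<Longrightarrow> x \<otimes>\<^bsub>add_monoid R\<^esub> y \<in> I" using assms(3) by simp
    show "\<one>\<^bsub>add_monoid R\<^esub> \<in> I" using assms(2) by simp
    show "\<And>x. x \<in> I \<Longrightarrow> inv\<^bsub>add_monoid R\<^esub> x \<in> I" using assms(4) by (simp add: a_inv_def)
  qed
  show "y \<otimes> x \<in> I" if "x \<in> I" "y \<in> carrier R" for x y
    using assms(1,5) that m_comm by (metis subsetD)
qed (use assms in auto)

lemma (in ring) rcos_eq_iff_minus:
  assumes "ideal I R" "x \<in> carrier R" "y \<in> carrier R"
  shows "(I +> x = I +> y) \<longleftrightarrow> x \<ominus> y \<in> I"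
proof -
  interpret I: ideal I R by (rule assms(1))
  show ?thesis
  proof
    assume "I +> x = I +> y"
    moreover have "x \<in> I +> x" using I.a_rcos_self[OF assms(2)] .
    ultimately have "x \<in> I +> y" by simp
    thus "x \<ominus> y \<in> I" using I.a_rcos_module_minus[OF ring_axioms assms(3) assms(2)] by simp
  next
    assume "x \<ominus> y \<in> I"
    hence "x \<in> I +> y" using I.a_rcos_module_minus[OF ring_axioms assms(3) assms(2)] by simp
    thus "I +> x = I +> y" using I.a_repr_independence'[of x y] assms(3) by simp
  qed
qed

lemma (in ring) soc_over_ideal:
  assumes "ideal I R" shows "ideal (soc_over R I) R" and "I \<subseteq> soc_over R I"
    and "minimal_over R I J \<Longrightarrow> J \<subseteq> soc_over R I"
proof -
  have sub: "I \<union> \<Union> {J. minimal_over R I J} \<subseteq> carrier R"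
    using assms by (auto simp: minimal_over_def dest: ideal.Icarr)
  show "ideal (soc_over R I) R" unfolding soc_over_def by (rule genideal_ideal[OF sub])
  show "I \<subseteq> soc_over R I" unfolding soc_over_def using genideal_self[OF sub] by blast
  show "minimal_over R I J \<Longrightarrow> J \<subseteq> soc_over R I"
    unfolding soc_over_def using genideal_self[OF sub] by blast
qed

lemma fin_supp_outside: "z \<in> fin_supp L \<Longrightarrow> i \<notin> L \<Longrightarrow> z i = 0"
  unfolding fin_supp_def by blast
lemma fin_supp_finite: "z \<in> fin_supp L \<Longrightarrow> finite {i. z i \<noteq> 0}"
  unfolding fin_supp_def by blast

definition unit_vec :: "'l \<Rightarrow> 'l \<Rightarrow> 'k::zero_neq_one" where
  "unit_vec i = (\<lambda>j. if j = i then 1 else 0)"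

lemma unit_vec_fin_supp: "i \<in> L \<Longrightarrow> unit_vec i \<in> fin_supp L"
  unfolding fin_supp_def unit_vec_def by (auto intro: finite_subset[of _ "{i}"])

text \<open>The images of the coordinate vectors are nonzero and pairwise orthogonal, so choosing a
  point in the support of each image injects A into B.\<close>
lemma fin_supp_embedding_card_le:
  fixes \<rho> :: "(nat \<Rightarrow> 'k::field) \<Rightarrow> (nat \<Rightarrow> 'k)"
  assumes inj: "inj_on \<rho> (fin_supp A)" and img: "\<rho> ` fin_supp A \<subseteq> fin_supp B"
    and mult: "\<And>z z'. z \<in> fin_supp A \<Longrightarrow> z' \<in> fin_supp A \<Longrightarrow> \<rho> (\<lambda>i. z i * z' i) = (\<lambda>i. \<rho> z i * \<rho> z' i)"
    and add: "\<And>z z'. z \<in> fin_supp A \<Longrightarrow> z' \<in> fin_supp A \<Longrightarrow> \<rho> (\<lambda>i. z i + z' i) = (\<lambda>i. \<rho> z i + \<rho> z' i)"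
    and finB: "finite B"
  shows "finite A \<and> card A \<le> card B"
proof -
  have z0: "(\<lambda>i. 0::'k) \<in> fin_supp A" unfolding fin_supp_def by simp
  have indA: "unit_vec i \<in> fin_supp A" if "i \<in> A" for i
    using that by (rule unit_vec_fin_supp)
  have "\<rho> (\<lambda>i. 0) = (\<lambda>j. \<rho> (\<lambda>i. 0) j + \<rho> (\<lambda>i. 0) j)" using add[OF z0 z0] by simp
  hence "\<rho> (\<lambda>i. 0) j + 0 = \<rho> (\<lambda>i. 0) j + \<rho> (\<lambda>i. 0) j" for j by (metis add.right_neutral)
  hence r0: "\<rho> (\<lambda>i. 0) = (\<lambda>j. 0)" using add_left_imp_eq by (metis ext)
  have nz: "\<exists>j. \<rho> (unit_vec i) j \<noteq> 0" if iA: "i \<in> A" for i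
  proof (rule ccontr)
    assume "\<not> ?thesis"
    hence "\<rho> (unit_vec i) = \<rho> (\<lambda>i. 0)" using r0 by auto
    hence "unit_vec i = (\<lambda>i. 0::'k)" using inj_onD[OF inj _ indA[OF iA] z0] by blast
    thus False unfolding unit_vec_def by (metis one_neq_zero)
  qed
  define f where "f i = (SOME j. \<rho> (unit_vec i) j \<noteq> 0)" for i
  have fi: "\<rho> (unit_vec i) (f i) \<noteq> 0" if "i \<in> A" for i
    unfolding f_def using nz[OF that] by (rule someI_ex)
  have fB: "f i \<in> B" if iA: "i \<in> A" for i
  proof -
    have "\<rho> (unit_vec i) \<in> fin_supp B" using img indA[OF iA] by blast
    thus ?thesis using fi[OF iA] unfolding fin_supp_def by blast
  qed
  have finj: "inj_on f A"
  proof (rule inj_onI)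
    fix i i' assume iA: "i \<in> A" and i'A: "i' \<in> A" and eq: "f i = f i'"
    show "i = i'"
    proof (rule ccontr)
      assume ne: "i \<noteq> i'"
      have "(\<lambda>j. unit_vec i j * unit_vec i' j) = (\<lambda>j. 0::'k)" unfolding unit_vec_def using ne by auto
      hence "(\<lambda>j. \<rho> (unit_vec i) j * \<rho> (unit_vec i') j) = (\<lambda>j. 0)" using mult[OF indA[OF iA] indA[OF i'A]] r0 by simp
      hence "\<rho> (unit_vec i) (f i) * \<rho> (unit_vec i') (f i) = 0" by metis
      thus False using fi[OF iA] fi[OF i'A] eq by simp
    qed
  qed
  have "f ` A \<subseteq> B" using fB by blast
  hence "finite (f ` A)" using finB finite_subset by blast
  hence fA: "finite A" using finite_imageD[OF _ finj] by blast
  have "card A \<le> card B" using card_inj_on_le[OF finj _ finB] fB by blast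
  thus ?thesis using fA by blast
qed

locale layered_algebra = cring R for R (structure) +
  fixes sm :: "'k::field \<Rightarrow> 'a \<Rightarrow> 'a" and r :: "'i rel" and S :: "'i \<Rightarrow> 'a set" and \<sigma> :: 'i
  assumes alg: "K_algebra R sm" and vnr: "von_Neumann_regular R" and wo: "Well_order r"
   and top: "\<sigma> \<in> Field r" "\<forall>a\<in>Field r. (a,\<sigma>) \<in> r" and soc: "socle_seq R r S"
   and topsoc: "soc_over R (S \<sigma>) = carrier R"
   and cnt: "countable (Field r)"
   and layers: "\<forall>a\<in>Field r. \<exists>L::nat set. L \<noteq> {} \<and> layer_iso R sm (S a) (soc_over R (S a)) L"
begin

abbreviation lt where "lt a b \<equiv> rless r a b"
abbreviation Snext where "Snext a \<equiv> soc_over R (S a)"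

interpretation W: wo_rel r using wo by (simp add: wo_rel_def)

lemma lt_Field: "lt a b \<Longrightarrow> a \<in> Field r \<and> b \<in> Field r"
  by (auto simp: rless_def Field_def)

lemma lt_trans: "lt a b \<Longrightarrow> lt b c \<Longrightarrow> lt a c"
  unfolding rless_def using W.TRANS W.ANTISYM by (metis antisymD transD)

lemma lt_asym: "lt a b \<Longrightarrow> \<not> lt b a"
  unfolding rless_def using W.ANTISYM by (metis antisymD)

lemma lt_irrefl: "\<not> lt a a"
  unfolding rless_def by simp

lemma lt_total: "a \<in> Field r \<Longrightarrow> b \<in> Field r \<Longrightarrow> lt a b \<or> a = b \<or> lt b a"
  unfolding rless_def using W.TOTALS by blast

lemma lt_induct: "(\<And>a. (\<And>b. lt b a \<Longrightarrow> P b) \<Longrightarrow> P a) \<Longrightarrow> P a"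
  using W.well_order_induct[of P a] unfolding rless_def by blast

lemma zero_not_lt: "is_zero_pt r a \<Longrightarrow> \<not> lt b a"
  by (simp add: is_zero_pt_def)

lemma succ_lt: "is_succ_of r b a \<Longrightarrow> lt b a"
  by (simp add: is_succ_of_def)

lemma succ_below: "is_succ_of r b a \<Longrightarrow> lt c a \<Longrightarrow> c = b \<or> lt c b"
  unfolding is_succ_of_def using lt_total lt_Field by blast

lemma succ_unique: assumes "is_succ_of r b a" "is_succ_of r b' a" shows "b = b'"
proof -
  have "b' = b \<or> lt b' b" using succ_below[OF assms(1) succ_lt[OF assms(2)]] .
  moreover have "b = b' \<or> lt b b'" using succ_below[OF assms(2) succ_lt[OF assms(1)]] .
  ultimately show ?thesis using lt_asym by blast
qed

lemma zero_succ_or_limit: "a \<in> Field r \<Longrightarrow> is_zero_pt r a \<or> (\<exists>b. is_succ_of r b a) \<or> is_limit_pt r a"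
  unfolding is_limit_pt_def by blast

lemma zero_not_succ: "is_zero_pt r a \<Longrightarrow> \<not> is_succ_of r b a"
  using zero_not_lt succ_lt by blast

lemma limit_not_zero: "is_limit_pt r a \<Longrightarrow> \<not> is_zero_pt r a"
  by (simp add: is_limit_pt_def)

lemma limit_not_succ: "is_limit_pt r a \<Longrightarrow> \<not> is_succ_of r b a"
  by (simp add: is_limit_pt_def)

lemma limit_between: assumes "is_limit_pt r a" "lt b a" shows "\<exists>c. lt b c \<and> lt c a"
proof -
  let ?B = "{c \<in> Field r. lt b c}"
  have aB: "a \<in> ?B" using assms lt_Field by auto
  have sub: "?B \<subseteq> Field r" by auto
  define c where "c = W.minim ?B"
  have cB: "c \<in> ?B" unfolding c_def using W.minim_in[OF sub] aB by blast
  have ca: "(c, a) \<in> r" unfolding c_def using W.minim_least[OF sub aB] .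
  have "c \<noteq> a"
  proof
    assume "c = a"
    hence "is_succ_of r b a"
      unfolding is_succ_of_def using assms(2)
      by (metis (mono_tags, lifting) W.minim_least c_def lt_Field lt_asym mem_Collect_eq rless_def sub)
    thus False using assms(1) limit_not_succ by blast
  qed
  thus ?thesis using cB ca unfolding rless_def by blast
qed

lemma limit_has_below: "is_limit_pt r a \<Longrightarrow> \<exists>b. lt b a"
  unfolding is_limit_pt_def is_zero_pt_def by blast

lemma S_zero: "is_zero_pt r a \<Longrightarrow> S a = {\<zero>}"
  using soc unfolding socle_seq_def by blast
lemma S_succ: "is_succ_of r b a \<Longrightarrow> S a = Snext b"
  using soc unfolding socle_seq_def by blast
lemma S_limit: "is_limit_pt r a \<Longrightarrow> S a = \<Union> {S b | b. lt b a}"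
  using soc unfolding socle_seq_def by blast

lemma S_ideal_Snext_sub: "a \<in> Field r \<Longrightarrow> ideal (S a) R \<and> (\<forall>b. lt b a \<longrightarrow> Snext b \<subseteq> S a)"
proof (induction a rule: lt_induct)
  case (1 a)
  consider "is_zero_pt r a" | b where "is_succ_of r b a" | "is_limit_pt r a"
    using zero_succ_or_limit[OF "1.prems"] by blast
  then show ?case
  proof cases
    case 1
    then show ?thesis using S_zero[OF 1] zeroideal zero_not_lt[OF 1] by simp
  next
    case (2 b)
    have lb: "lt b a" using 2 succ_lt by blast
    have ib: "ideal (S b) R" and IH: "\<forall>c. lt c b \<longrightarrow> Snext c \<subseteq> S b"
      using "1.IH"[OF lb] lt_Field[OF lb] by auto
    have "Snext c \<subseteq> S a" if "lt c a" for c
      using succ_below[OF 2 that] S_succ[OF 2] IH soc_over_ideal(2)[OF ib] by blast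
    thus ?thesis using S_succ[OF 2] soc_over_ideal(1)[OF ib] by simp
  next
    case 3
    have IH: "ideal (S b) R \<and> (\<forall>c. lt c b \<longrightarrow> Snext c \<subseteq> S b)" if "lt b a" for b
      using "1.IH"[OF that] lt_Field[OF that] by blast
    have mono: "S b \<subseteq> S c" if "lt b c" "lt c a" for b c
      using IH[OF lt_trans[OF that]] IH[OF that(2)] that(1) soc_over_ideal(2) by blast
    have "subset.chain {I. ideal I R} {S b | b. lt b a}"
      unfolding subset_chain_def
    proof (intro conjI ballI)
      show "{S b | b. lt b a} \<subseteq> {I. ideal I R}" using IH by blast
      fix X Y assume "X \<in> {S b | b. lt b a}" "Y \<in> {S b | b. lt b a}"
      then obtain b c where "X = S b" "Y = S c" "lt b a" "lt c a" by blast
      thus "X \<subseteq> Y \<or> Y \<subseteq> X" using lt_total[of b c] lt_Field mono by blast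
    qed
    moreover have "{S b | b. lt b a} \<noteq> {}" using limit_has_below[OF 3] by blast
    ultimately have "ideal (S a) R"
      using chain_Union_is_ideal[of "{S b | b. lt b a}"] S_limit[OF 3] by argo
    moreover have "Snext b \<subseteq> S a" if ba: "lt b a" for b
    proof -
      obtain c where "lt b c" "lt c a" using limit_between[OF 3 ba] by blast
      thus ?thesis using IH S_limit[OF 3] by blast
    qed
    ultimately show ?thesis by blast
  qed
qed

lemma S_ideal: "a \<in> Field r \<Longrightarrow> ideal (S a) R"
  using S_ideal_Snext_sub by blast
lemma Snext_ideal: "a \<in> Field r \<Longrightarrow> ideal (Snext a) R"
  by (rule soc_over_ideal(1)[OF S_ideal])
lemma S_sub_Snext: "a \<in> Field r \<Longrightarrow> S a \<subseteq> Snext a"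
  by (rule soc_over_ideal(2)[OF S_ideal])
lemma Snext_sub_S: "lt b a \<Longrightarrow> Snext b \<subseteq> S a"
  using S_ideal_Snext_sub lt_Field by blast
lemma S_mono: "lt b a \<Longrightarrow> S b \<subseteq> S a"
  using Snext_sub_S[of b a] S_sub_Snext[of b] lt_Field[of b a] by simp
lemma S_carr: "a \<in> Field r \<Longrightarrow> S a \<subseteq> carrier R"
  using ideal.Icarr[OF S_ideal] by auto
lemma Snext_carr: "a \<in> Field r \<Longrightarrow> Snext a \<subseteq> carrier R"
  using ideal.Icarr[OF Snext_ideal] by auto

lemma S_below: assumes "a \<in> Field r" "x \<in> S a" shows "x = \<zero> \<or> (\<exists>b. lt b a \<and> x \<in> Snext b)"
proof -
  consider "is_zero_pt r a" | b where "is_succ_of r b a" | "is_limit_pt r a"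
    using zero_succ_or_limit[OF assms(1)] by blast
  thus ?thesis
  proof cases
    case 1 thus ?thesis using S_zero assms by auto
  next
    case (2 b) thus ?thesis using S_succ assms succ_lt by blast
  next
    case 3
    then obtain b where "lt b a" "x \<in> S b" using S_limit assms by auto
    thus ?thesis using S_sub_Snext[of b] lt_Field[of b a] by auto
  qed
qed

section \<open>Coordinates in the layers\<close>

definition is_layer_map :: "'i \<Rightarrow> ('a set \<Rightarrow> nat \<Rightarrow> 'k) \<Rightarrow> nat set \<Rightarrow> bool" where
  "is_layer_map a \<phi> L \<longleftrightarrow> bij_betw \<phi> {S a +> x | x. x \<in> Snext a} (fin_supp L) \<and>
     (\<forall>x\<in>Snext a. \<forall>y\<in>Snext a. \<phi> (S a +> (x \<oplus> y)) = (\<lambda>i. \<phi> (S a +> x) i + \<phi> (S a +> y) i)) \<and>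
     (\<forall>x\<in>Snext a. \<forall>y\<in>Snext a. \<phi> (S a +> (x \<otimes> y)) = (\<lambda>i. \<phi> (S a +> x) i * \<phi> (S a +> y) i)) \<and>
     (\<forall>c. \<forall>x\<in>Snext a. \<phi> (S a +> (sm c x)) = (\<lambda>i. c * \<phi> (S a +> x) i))"

lemma layer_iso_iff_is_layer_map: "layer_iso R sm (S a) (Snext a) L \<longleftrightarrow> (\<exists>\<phi>. is_layer_map a \<phi> L)"
  unfolding layer_iso_def is_layer_map_def by (rule refl)

definition basis_idx :: "'i \<Rightarrow> nat set" where
  "basis_idx a = (SOME L. L \<noteq> {} \<and> layer_iso R sm (S a) (Snext a) L)"

definition layer_map :: "'i \<Rightarrow> 'a set \<Rightarrow> nat \<Rightarrow> 'k" where
  "layer_map a = (SOME \<phi>. is_layer_map a \<phi> (basis_idx a))"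

definition coord :: "'i \<Rightarrow> 'a \<Rightarrow> nat \<Rightarrow> 'k" where
  "coord a x = layer_map a (S a +> x)"

lemma basis_idx: assumes "a \<in> Field r"
  shows "basis_idx a \<noteq> {} \<and> layer_iso R sm (S a) (Snext a) (basis_idx a)"
  unfolding basis_idx_def using bspec[OF layers assms] by (rule someI_ex)

lemma is_layer_map_layer_map: assumes "a \<in> Field r" shows "is_layer_map a (layer_map a) (basis_idx a)"
proof -
  have "\<exists>\<phi>. is_layer_map a \<phi> (basis_idx a)"
    using basis_idx[OF assms] layer_iso_iff_is_layer_map by blast
  thus ?thesis unfolding layer_map_def by (rule someI_ex)
qed

lemmas layer_map_props = is_layer_map_layer_map[unfolded is_layer_map_def]

lemma coord_add: "a \<in> Field r \<Longrightarrow> x \<in> Snext a \<Longrightarrow> y \<in> Snext a \<Longrightarrow> coord a (x \<oplus> y) = (\<lambda>i. coord a x i + coord a y i)"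
  using layer_map_props unfolding coord_def by blast
lemma coord_mult: "a \<in> Field r \<Longrightarrow> x \<in> Snext a \<Longrightarrow> y \<in> Snext a \<Longrightarrow> coord a (x \<otimes> y) = (\<lambda>i. coord a x i * coord a y i)"
  using layer_map_props unfolding coord_def by blast
lemma coord_sm: "a \<in> Field r \<Longrightarrow> x \<in> Snext a \<Longrightarrow> coord a (sm c x) = (\<lambda>i. c * coord a x i)"
  using layer_map_props unfolding coord_def by blast
lemma coord_in_fin_supp: assumes "a \<in> Field r" "x \<in> Snext a" shows "coord a x \<in> fin_supp (basis_idx a)"
proof -
  have "bij_betw (layer_map a) {S a +> x | x. x \<in> Snext a} (fin_supp (basis_idx a))" using layer_map_props[OF assms(1)] by blast
  thus ?thesis unfolding coord_def bij_betw_def using assms(2) by blast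
qed
lemma coord_surj: assumes "a \<in> Field r" "z \<in> fin_supp (basis_idx a)" shows "\<exists>x\<in>Snext a. coord a x = z"
proof -
  have "bij_betw (layer_map a) {S a +> x | x. x \<in> Snext a} (fin_supp (basis_idx a))" using layer_map_props[OF assms(1)] by blast
  hence "z \<in> layer_map a ` {S a +> x | x. x \<in> Snext a}" using assms(2) unfolding bij_betw_def by blast
  thus ?thesis unfolding coord_def by blast
qed
lemma coord_eq: assumes "a \<in> Field r" "x \<in> Snext a" "y \<in> Snext a" shows "coord a x = coord a y \<longleftrightarrow> x \<ominus> y \<in> S a"
proof -
  have "inj_on (layer_map a) {S a +> x | x. x \<in> Snext a}" using layer_map_props[OF assms(1)] unfolding bij_betw_def by blast
  moreover have "S a +> x \<in> {S a +> x | x. x \<in> Snext a}" using assms(2) by blast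
  moreover have "S a +> y \<in> {S a +> x | x. x \<in> Snext a}" using assms(3) by blast
  ultimately have "coord a x = coord a y \<longleftrightarrow> S a +> x = S a +> y" unfolding coord_def by (rule inj_on_eq_iff)
  also have "\<dots> \<longleftrightarrow> x \<ominus> y \<in> S a"
    using rcos_eq_iff_minus[OF S_ideal[OF assms(1)] subsetD[OF Snext_carr[OF assms(1)] assms(2)] subsetD[OF Snext_carr[OF assms(1)] assms(3)]] .
  finally show ?thesis .
qed

lemma Snext_carrI: "a \<in> Field r \<Longrightarrow> x \<in> Snext a \<Longrightarrow> x \<in> carrier R"
  using Snext_carr by blast
lemma S_carrI: "a \<in> Field r \<Longrightarrow> x \<in> S a \<Longrightarrow> x \<in> carrier R"
  using S_carr by blast
lemma Snext_zero: "a \<in> Field r \<Longrightarrow> \<zero> \<in> Snext a"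
  by (rule additive_subgroup.zero_closed[OF ideal.axioms(1)[OF Snext_ideal]])
lemma Snext_add: "a \<in> Field r \<Longrightarrow> x \<in> Snext a \<Longrightarrow> y \<in> Snext a \<Longrightarrow> x \<oplus> y \<in> Snext a"
  by (rule additive_subgroup.a_closed[OF ideal.axioms(1)[OF Snext_ideal]])
lemma Snext_neg: "a \<in> Field r \<Longrightarrow> x \<in> Snext a \<Longrightarrow> \<ominus> x \<in> Snext a"
  by (rule additive_subgroup.a_inv_closed[OF ideal.axioms(1)[OF Snext_ideal]])
lemma Snext_minus: "a \<in> Field r \<Longrightarrow> x \<in> Snext a \<Longrightarrow> y \<in> Snext a \<Longrightarrow> x \<ominus> y \<in> Snext a"
  unfolding a_minus_def by (intro Snext_add Snext_neg)
lemma Snext_multr: "a \<in> Field r \<Longrightarrow> x \<in> Snext a \<Longrightarrow> y \<in> carrier R \<Longrightarrow> x \<otimes> y \<in> Snext a"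
  by (rule ideal.I_r_closed[OF Snext_ideal])
lemma Snext_multl: "a \<in> Field r \<Longrightarrow> x \<in> Snext a \<Longrightarrow> y \<in> carrier R \<Longrightarrow> y \<otimes> x \<in> Snext a"
  by (rule ideal.I_l_closed[OF Snext_ideal])
lemma zero_in_S: "a \<in> Field r \<Longrightarrow> \<zero> \<in> S a"
  by (rule additive_subgroup.zero_closed[OF ideal.axioms(1)[OF S_ideal]])
lemma S_add: "a \<in> Field r \<Longrightarrow> x \<in> S a \<Longrightarrow> y \<in> S a \<Longrightarrow> x \<oplus> y \<in> S a"
  by (rule additive_subgroup.a_closed[OF ideal.axioms(1)[OF S_ideal]])
lemma S_neg: "a \<in> Field r \<Longrightarrow> x \<in> S a \<Longrightarrow> \<ominus> x \<in> S a"
  by (rule additive_subgroup.a_inv_closed[OF ideal.axioms(1)[OF S_ideal]])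
lemma S_multr: "a \<in> Field r \<Longrightarrow> x \<in> S a \<Longrightarrow> y \<in> carrier R \<Longrightarrow> x \<otimes> y \<in> S a"
  by (rule ideal.I_r_closed[OF S_ideal])
lemma S_multl: "a \<in> Field r \<Longrightarrow> x \<in> S a \<Longrightarrow> y \<in> carrier R \<Longrightarrow> y \<otimes> x \<in> S a"
  by (rule ideal.I_l_closed[OF S_ideal])

lemma coord_zero: assumes "a \<in> Field r" shows "coord a \<zero> = (\<lambda>i. 0)"
proof -
  have "coord a \<zero> = (\<lambda>i. coord a \<zero> i + coord a \<zero> i)"
    using coord_add[OF assms Snext_zero[OF assms] Snext_zero[OF assms]] by simp
  hence h: "coord a \<zero> i + 0 = coord a \<zero> i + coord a \<zero> i" for i by (metis add.right_neutral)
  show ?thesis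
  proof
    fix i show "coord a \<zero> i = 0" using add_left_imp_eq[OF h[of i]] by simp
  qed
qed

lemma coord_zero_iff: assumes "a \<in> Field r" "x \<in> Snext a" shows "coord a x = (\<lambda>i. 0) \<longleftrightarrow> x \<in> S a"
proof -
  have "x \<ominus> \<zero> = x" using Snext_carrI[OF assms] by (simp add: a_minus_def)
  thus ?thesis using coord_eq[OF assms Snext_zero[OF assms(1)]] coord_zero[OF assms(1)] by simp
qed

definition scal :: "'k \<Rightarrow> 'a" where "scal c = sm c \<one>"

lemma sm_props:
  "\<And>c x. x\<in>carrier R \<Longrightarrow> sm c x \<in> carrier R"
  "\<And>c x y. x\<in>carrier R \<Longrightarrow> y\<in>carrier R \<Longrightarrow> sm c (x \<oplus> y) = sm c x \<oplus> sm c y"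
  "\<And>c d x. x\<in>carrier R \<Longrightarrow> sm (c + d) x = sm c x \<oplus> sm d x"
  "\<And>c d x. x\<in>carrier R \<Longrightarrow> sm (c * d) x = sm c (sm d x)"
  "\<And>x. x\<in>carrier R \<Longrightarrow> sm 1 x = x"
  "\<And>c x y. x\<in>carrier R \<Longrightarrow> y\<in>carrier R \<Longrightarrow> sm c (x \<otimes> y) = sm c x \<otimes> y"
  using alg unfolding K_algebra_def by blast+

lemma scal_closed[simp]: "scal c \<in> carrier R"
  unfolding scal_def using sm_props(1) by simp

lemma sm_eq: "x \<in> carrier R \<Longrightarrow> sm c x = scal c \<otimes> x"
  unfolding scal_def using sm_props(6)[of \<one> x c] by simp

lemma scal_add: "scal (c + d) = scal c \<oplus> scal d"
  unfolding scal_def using sm_props(3) by simp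
lemma scal_mult: "scal (c * d) = scal c \<otimes> scal d"
  unfolding scal_def using sm_props(4)[of \<one> c d] sm_eq[of "sm d \<one>" c] sm_props(1)
  by (simp add: scal_def)
lemma scal_one[simp]: "scal 1 = \<one>"
  unfolding scal_def using sm_props(5) by simp
lemma scal_zero[simp]: "scal 0 = \<zero>"
proof -
  have "scal 0 = scal 0 \<oplus> scal 0" using scal_add[of 0 0] by simp
  hence "scal 0 \<oplus> scal 0 \<ominus> scal 0 = scal 0 \<ominus> scal 0" by simp
  moreover have "scal 0 \<oplus> scal 0 \<ominus> scal 0 = scal 0" using scal_closed by algebra
  moreover have "scal 0 \<ominus> scal 0 = \<zero>" using scal_closed by algebra
  ultimately show ?thesis by simp
qed
lemma scal_inv: "c \<noteq> 0 \<Longrightarrow> scal (inverse c) \<otimes> scal c = \<one>"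
  using scal_mult[of "inverse c" c] by simp
lemma scal_neg: "scal (- c) = \<ominus> scal c"
proof -
  have "scal (- c) \<oplus> scal c = \<zero>" using scal_add[of "-c" c] by simp
  thus ?thesis by (simp add: minus_equality)
qed

lemma coord_scal: assumes "a \<in> Field r" "x \<in> Snext a" shows "coord a (scal c \<otimes> x) = (\<lambda>i. c * coord a x i)"
  using coord_sm[OF assms, of c] sm_eq[OF Snext_carrI[OF assms], of c] by simp

section \<open>Idempotents and atoms\<close>

definition idem :: "'a \<Rightarrow> bool" where "idem e \<longleftrightarrow> e \<in> carrier R \<and> e \<otimes> e = e"

lemma idem_carr: "idem e \<Longrightarrow> e \<in> carrier R" unfolding idem_def by blast
lemma idem_sq: "idem e \<Longrightarrow> e \<otimes> e = e" unfolding idem_def by blast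

lemma idem_absorb: assumes "idem f" "X \<in> carrier R" shows "f \<otimes> (f \<otimes> X) = f \<otimes> X"
proof -
  have fc: "f \<in> carrier R" using idem_carr[OF assms(1)] .
  have "f \<otimes> (f \<otimes> X) = (f \<otimes> f) \<otimes> X" using fc assms(2) by (simp add: m_assoc)
  also have "\<dots> = f \<otimes> X" using idem_sq[OF assms(1)] by simp
  finally show ?thesis .
qed

lemma idem_zero: "idem \<zero>" unfolding idem_def by simp

lemma idem_mult: assumes "idem x" "idem y" shows "idem (x \<otimes> y)"
proof -
  have xc: "x \<in> carrier R" and yc: "y \<in> carrier R" using assms idem_carr by auto
  have "(x \<otimes> y) \<otimes> (x \<otimes> y) = (x \<otimes> x) \<otimes> (y \<otimes> y)" using xc yc by algebra
  thus ?thesis using idem_sq assms xc yc unfolding idem_def by simp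
qed

lemma idem_add: assumes "idem x" "idem y" "x \<otimes> y = \<zero>" shows "idem (x \<oplus> y)"
proof -
  have xc: "x \<in> carrier R" and yc: "y \<in> carrier R" using assms idem_carr by auto
  have "(x \<oplus> y) \<otimes> (x \<oplus> y) = x \<otimes> x \<oplus> (x \<otimes> y \<oplus> x \<otimes> y) \<oplus> y \<otimes> y" using xc yc by algebra
  thus ?thesis using idem_sq assms xc yc unfolding idem_def by simp
qed

lemma idem_minus: assumes e: "idem e" and G: "idem G" and eG: "e \<otimes> G = G"
  shows "idem (e \<ominus> G)" "(e \<ominus> G) \<otimes> G = \<zero>" "e \<otimes> (e \<ominus> G) = e \<ominus> G"
proof -
  have ec: "e \<in> carrier R" and Gc: "G \<in> carrier R" using e G idem_carr by auto
  have ee: "e \<otimes> e = e" and GG: "G \<otimes> G = G" using e G idem_sq by auto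
  have "(e \<ominus> G) \<otimes> (e \<ominus> G) = e \<otimes> e \<ominus> (e \<otimes> G \<oplus> e \<otimes> G) \<oplus> G \<otimes> G" using ec Gc by algebra
  also have "\<dots> = e \<ominus> (G \<oplus> G) \<oplus> G" using ee GG eG by simp
  also have "\<dots> = e \<ominus> G" using ec Gc by algebra
  finally show "idem (e \<ominus> G)" unfolding idem_def using ec Gc by simp
  have "(e \<ominus> G) \<otimes> G = e \<otimes> G \<ominus> G \<otimes> G" using ec Gc by algebra
  thus "(e \<ominus> G) \<otimes> G = \<zero>" using eG GG Gc by (simp add: a_minus_def r_neg)
  have "e \<otimes> (e \<ominus> G) = e \<otimes> e \<ominus> e \<otimes> G" using ec Gc by algebra
  thus "e \<otimes> (e \<ominus> G) = e \<ominus> G" using ee eG by simp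
qed

definition supp :: "(nat \<Rightarrow> 'k) \<Rightarrow> nat set" where "supp f = {i. f i \<noteq> 0}"

definition atom_at :: "'i \<Rightarrow> 'a \<Rightarrow> bool" where
  "atom_at a g \<longleftrightarrow> a \<in> Field r \<and> idem g \<and> g \<in> Snext a \<and> card (supp (coord a g)) = 1"

lemma supp_unit_vec: "supp (unit_vec i) = {i}"
  unfolding supp_def unit_vec_def by auto

lemma von_Neumann_regularD: "a \<in> carrier R \<Longrightarrow> \<exists>x\<in>carrier R. a = a \<otimes> x \<otimes> a"
  using vnr unfolding von_Neumann_regular_def by blast

lemma coord_minus: assumes "a \<in> Field r" "x \<in> Snext a" "y \<in> Snext a"
  shows "coord a (x \<ominus> y) = (\<lambda>i. coord a x i - coord a y i)"
proof -
  have xc: "x \<in> carrier R" and yc: "y \<in> carrier R" using Snext_carrI assms by auto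
  have "x \<ominus> y = x \<oplus> scal (-1) \<otimes> y" using xc yc scal_neg[of 1] by (simp add: a_minus_def l_minus)
  moreover have "scal (-1) \<otimes> y \<in> Snext a" using Snext_multl[OF assms(1,3)] by simp
  ultimately have "coord a (x \<ominus> y) = (\<lambda>i. coord a x i + coord a (scal (-1) \<otimes> y) i)"
    using coord_add[OF assms(1,2)] by simp
  also have "\<dots> = (\<lambda>i. coord a x i - coord a y i)" using coord_scal[OF assms(1,3), of "-1"] by simp
  finally show ?thesis .
qed

lemma coord_absorb: assumes "a \<in> Field r" "e \<in> Snext a" "idem e" "y \<in> carrier R"
  shows "coord a (e \<otimes> y) = (\<lambda>i. coord a e i * coord a (e \<otimes> y) i)"
proof -
  have ec: "e \<in> carrier R" using assms(3) unfolding idem_def by blast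
  have ee: "e \<otimes> e = e" using assms(3) unfolding idem_def by blast
  have "e \<otimes> (e \<otimes> y) = (e \<otimes> e) \<otimes> y" using ec assms(4) by (simp add: m_assoc)
  also have "\<dots> = e \<otimes> y" using ee by simp
  finally have eq: "e \<otimes> y = e \<otimes> (e \<otimes> y)" by simp
  have eyT: "e \<otimes> y \<in> Snext a" using Snext_multr[OF assms(1,2,4)] .
  have "coord a (e \<otimes> y) = coord a (e \<otimes> (e \<otimes> y))" using eq by (rule arg_cong)
  also have "\<dots> = (\<lambda>i. coord a e i * coord a (e \<otimes> y) i)" by (rule coord_mult[OF assms(1,2) eyT])
  finally show ?thesis .
qed

lemma supp_absorb: assumes "a \<in> Field r" "e \<in> Snext a" "idem e" "y \<in> carrier R"
  shows "supp (coord a (e \<otimes> y)) \<subseteq> supp (coord a e)"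
proof
  fix i assume "i \<in> supp (coord a (e \<otimes> y))"
  thus "i \<in> supp (coord a e)" using fun_cong[OF coord_absorb[OF assms], of i] unfolding supp_def by auto
qed

lemma supp_finite: "a \<in> Field r \<Longrightarrow> x \<in> Snext a \<Longrightarrow> finite (supp (coord a x))"
  unfolding supp_def by (rule fin_supp_finite[OF coord_in_fin_supp])

lemma supp_subset_basis_idx: assumes "a \<in> Field r" "x \<in> Snext a" shows "supp (coord a x) \<subseteq> basis_idx a"
proof
  fix i assume "i \<in> supp (coord a x)"
  hence "coord a x i \<noteq> 0" by (simp add: supp_def)
  thus "i \<in> basis_idx a" using fin_supp_outside[OF coord_in_fin_supp[OF assms]] by blast
qed

lemma supp_empty_iff: "a \<in> Field r \<Longrightarrow> x \<in> Snext a \<Longrightarrow> supp (coord a x) = {} \<longleftrightarrow> x \<in> S a"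
  using coord_zero_iff[of a x] unfolding supp_def by (auto simp: fun_eq_iff)

lemma lift_idem: assumes aF: "a \<in> Field r" and uT: "u \<in> Snext a" and ui: "(\<lambda>i. coord a u i * coord a u i) = coord a u"
  shows "\<exists>f w. idem f \<and> f \<in> Snext a \<and> coord a f = coord a u \<and> w \<in> carrier R \<and> f = u \<otimes> w"
proof -
  have uc: "u \<in> carrier R" using Snext_carrI[OF aF uT] .
  obtain w where wc: "w \<in> carrier R" and uwu: "u = u \<otimes> w \<otimes> u" using von_Neumann_regularD[OF uc] by blast
  define f where "f = u \<otimes> w"
  have fc: "f \<in> carrier R" unfolding f_def using uc wc by simp
  have ff: "f \<otimes> f = f"
  proof -
    have "f \<otimes> f = (u \<otimes> w \<otimes> u) \<otimes> w" unfolding f_def using uc wc by algebra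
    thus ?thesis using uwu unfolding f_def by simp
  qed
  have fT: "f \<in> Snext a" unfolding f_def using Snext_multr[OF aF uT wc] .
  have uuT: "u \<otimes> u \<in> Snext a" using Snext_multr[OF aF uT uc] .
  have "coord a (u \<otimes> u) = coord a u" using coord_mult[OF aF uT uT] ui by simp
  hence d1: "u \<otimes> u \<ominus> u \<in> S a" using coord_eq[OF aF uuT uT] by simp
  have "(u \<otimes> u \<ominus> u) \<otimes> w \<in> S a" using S_multr[OF aF d1 wc] .
  moreover have "(u \<otimes> u \<ominus> u) \<otimes> w = u \<otimes> f \<ominus> f" unfolding f_def using uc wc by algebra
  ultimately have "u \<otimes> f \<ominus> f \<in> S a" by simp
  moreover have ufT: "u \<otimes> f \<in> Snext a" using Snext_multr[OF aF uT fc] .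
  ultimately have "coord a (u \<otimes> f) = coord a f" using coord_eq[OF aF ufT fT] by simp
  hence e1: "coord a f = (\<lambda>i. coord a u i * coord a f i)" using coord_mult[OF aF uT fT] by simp
  have "f \<otimes> u = u" using uwu unfolding f_def by simp
  hence e2: "coord a u = (\<lambda>i. coord a f i * coord a u i)" using coord_mult[OF aF fT uT] by simp
  have "coord a f = coord a u"
  proof
    fix i show "coord a f i = coord a u i" using fun_cong[OF e1, of i] fun_cong[OF e2, of i] by (simp add: mult.commute)
  qed
  thus ?thesis using ff fc fT wc unfolding idem_def f_def by blast
qed

lemma coord_idem_vals: assumes "a \<in> Field r" "e \<in> Snext a" "idem e" shows "coord a e i = 0 \<or> coord a e i = 1"
proof -
  have "coord a e = (\<lambda>i. coord a e i * coord a e i)"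
    using coord_mult[OF assms(1,2,2)] assms(3) unfolding idem_def by simp
  hence "coord a e i * coord a e i = coord a e i" by metis
  thus ?thesis by (metis mult_cancel_left2 mult_zero_right)
qed

definition basis_idem :: "'i \<Rightarrow> nat \<Rightarrow> 'a" where
  "basis_idem a i = (SOME f. idem f \<and> f \<in> Snext a \<and> coord a f = unit_vec i)"

lemma basis_idem: assumes "a \<in> Field r" "i \<in> basis_idx a" shows "idem (basis_idem a i) \<and> basis_idem a i \<in> Snext a \<and> coord a (basis_idem a i) = unit_vec i"
proof -
  obtain u where uT: "u \<in> Snext a" and pu: "coord a u = unit_vec i" using coord_surj[OF assms(1) unit_vec_fin_supp[OF assms(2)]] by blast
  have ui: "(\<lambda>j. coord a u j * coord a u j) = coord a u" unfolding pu unit_vec_def by auto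
  obtain f w where f: "idem f \<and> f \<in> Snext a \<and> coord a f = coord a u \<and> w \<in> carrier R \<and> f = u \<otimes> w"
    using lift_idem[OF assms(1) uT ui] by (elim exE)
  have f1: "idem f" and f2: "f \<in> Snext a" and f3: "coord a f = coord a u" using f by blast+
  have "idem f \<and> f \<in> Snext a \<and> coord a f = unit_vec i" using f1 f2 f3 pu by simp
  hence "\<exists>f. idem f \<and> f \<in> Snext a \<and> coord a f = unit_vec i" by (rule exI)
  thus ?thesis unfolding basis_idem_def by (rule someI_ex)
qed

lemma basis_idem_carr: "a \<in> Field r \<Longrightarrow> i \<in> basis_idx a \<Longrightarrow> basis_idem a i \<in> carrier R"
  using basis_idem unfolding idem_def by blast

lemma supp_induct:
  assumes aF: "a \<in> Field r" and xT: "x \<in> Snext a"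
    and base: "\<And>x. x \<in> S a \<Longrightarrow> P x"
    and step: "\<And>x i c. x \<in> Snext a \<Longrightarrow> P x \<Longrightarrow> i \<in> basis_idx a \<Longrightarrow> P (x \<oplus> scal c \<otimes> basis_idem a i)"
  shows "P x"
proof -
  have "\<forall>x. x \<in> Snext a \<longrightarrow> card (supp (coord a x)) = n \<longrightarrow> P x" for n
  proof (induction n)
    case 0
    show ?case
    proof (intro allI impI)
      fix x assume xT: "x \<in> Snext a" and c: "card (supp (coord a x)) = 0"
      hence "supp (coord a x) = {}" using supp_finite[OF aF xT] by simp
      thus "P x" using supp_empty_iff[OF aF xT] base by blast
    qed
  next
    case (Suc n)
    show ?case
    proof (intro allI impI)
      fix x assume xT: "x \<in> Snext a" and c: "card (supp (coord a x)) = Suc n"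
      then obtain i where i: "i \<in> supp (coord a x)" by fastforce
      have iL: "i \<in> basis_idx a" using supp_subset_basis_idx[OF aF xT] i by blast
      define c where "c = coord a x i"
      have uT: "basis_idem a i \<in> Snext a" and pu: "coord a (basis_idem a i) = unit_vec i" using basis_idem[OF aF iL] by auto
      have kuT: "scal c \<otimes> basis_idem a i \<in> Snext a" using Snext_multl[OF aF uT] by simp
      define x' where "x' = x \<ominus> scal c \<otimes> basis_idem a i"
      have x'T: "x' \<in> Snext a" unfolding x'_def using Snext_minus[OF aF xT kuT] .
      have "coord a x' = (\<lambda>j. coord a x j - c * unit_vec i j)"
        unfolding x'_def using coord_minus[OF aF xT kuT] coord_scal[OF aF uT] pu by simp
      hence "supp (coord a x') = supp (coord a x) - {i}"
        unfolding supp_def unit_vec_def c_def by auto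
      hence "card (supp (coord a x')) = n" using c i supp_finite[OF aF xT] by simp
      hence "P x'" using Suc.IH x'T by blast
      hence "P (x' \<oplus> scal c \<otimes> basis_idem a i)" using step[OF x'T _ iL] by blast
      moreover have "x' \<oplus> scal c \<otimes> basis_idem a i = x"
        unfolding x'_def using Snext_carrI[OF aF xT] Snext_carrI[OF aF uT] scal_closed[of c] by algebra
      ultimately show "P x" by simp
    qed
  qed
  thus ?thesis using xT by blast
qed

definition S_line :: "'i \<Rightarrow> 'a \<Rightarrow> 'a set" where
  "S_line a y = {z \<in> carrier R. \<exists>c. z \<ominus> scal c \<otimes> y \<in> S a}"

lemma S_line_ideal:
  assumes aF: "a \<in> Field r" and yc: "y \<in> carrier R"
    and stable: "\<And>q. q \<in> carrier R \<Longrightarrow> \<exists>c. y \<otimes> q \<ominus> scal c \<otimes> y \<in> S a"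
  shows "ideal (S_line a y) R"
proof (rule idealI_closed)
  show "S_line a y \<subseteq> carrier R" unfolding S_line_def by blast
  have "\<zero> \<ominus> scal 0 \<otimes> y = \<zero>" using yc by simp algebra
  thus "\<zero> \<in> S_line a y" unfolding S_line_def using zero_in_S[OF aF] by (metis (mono_tags, lifting) mem_Collect_eq zero_closed)
  show "z1 \<oplus> z2 \<in> S_line a y" if z1: "z1 \<in> S_line a y" and z2: "z2 \<in> S_line a y" for z1 z2
  proof -
    obtain c1 where c1: "z1 \<in> carrier R" "z1 \<ominus> scal c1 \<otimes> y \<in> S a" using z1 unfolding S_line_def by blast
    obtain c2 where c2: "z2 \<in> carrier R" "z2 \<ominus> scal c2 \<otimes> y \<in> S a" using z2 unfolding S_line_def by blast
    have "(z1 \<oplus> z2) \<ominus> scal (c1 + c2) \<otimes> y = (z1 \<ominus> scal c1 \<otimes> y) \<oplus> (z2 \<ominus> scal c2 \<otimes> y)"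
      unfolding scal_add using c1(1) c2(1) yc scal_closed[of c1] scal_closed[of c2] by algebra
    hence "(z1 \<oplus> z2) \<ominus> scal (c1 + c2) \<otimes> y \<in> S a" using S_add[OF aF c1(2) c2(2)] by simp
    thus ?thesis unfolding S_line_def using c1(1) c2(1) by blast
  qed
  show "\<ominus> z \<in> S_line a y" if z: "z \<in> S_line a y" for z
  proof -
    obtain c where c: "z \<in> carrier R" "z \<ominus> scal c \<otimes> y \<in> S a" using z unfolding S_line_def by blast
    have "\<ominus> z \<ominus> scal (- c) \<otimes> y = \<ominus> (z \<ominus> scal c \<otimes> y)"
      unfolding scal_neg using c(1) yc scal_closed[of c] by algebra
    hence "\<ominus> z \<ominus> scal (- c) \<otimes> y \<in> S a" using S_neg[OF aF c(2)] by simp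
    thus ?thesis unfolding S_line_def using c(1) by blast
  qed
  show "z \<otimes> q \<in> S_line a y" if z: "z \<in> S_line a y" and qc: "q \<in> carrier R" for z q
  proof -
    obtain c where c: "z \<in> carrier R" "z \<ominus> scal c \<otimes> y \<in> S a" using z unfolding S_line_def by blast
    obtain d where d: "y \<otimes> q \<ominus> scal d \<otimes> y \<in> S a" using stable[OF qc] by blast
    have "z \<otimes> q \<ominus> scal (c * d) \<otimes> y = (z \<ominus> scal c \<otimes> y) \<otimes> q \<oplus> scal c \<otimes> (y \<otimes> q \<ominus> scal d \<otimes> y)"
      unfolding scal_mult using c(1) yc qc scal_closed[of c] scal_closed[of d] by algebra
    moreover have "(z \<ominus> scal c \<otimes> y) \<otimes> q \<in> S a" using S_multr[OF aF c(2) qc] .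
    moreover have "scal c \<otimes> (y \<otimes> q \<ominus> scal d \<otimes> y) \<in> S a" using S_multl[OF aF d scal_closed] .
    ultimately have "z \<otimes> q \<ominus> scal (c * d) \<otimes> y \<in> S a" using S_add[OF aF] by simp
    thus ?thesis unfolding S_line_def using c(1) qc by blast
  qed
qed

lemma S_line_subset:
  assumes J: "ideal J R" and SJ: "S a \<subseteq> J" and yJ: "y \<in> J"
  shows "S_line a y \<subseteq> J"
proof
  fix w assume "w \<in> S_line a y"
  then obtain d where wc: "w \<in> carrier R" and d: "w \<ominus> scal d \<otimes> y \<in> S a" unfolding S_line_def by blast
  have "(w \<ominus> scal d \<otimes> y) \<oplus> scal d \<otimes> y \<in> J"
    using additive_subgroup.a_closed[OF ideal.axioms(1)[OF J] subsetD[OF SJ d]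
        ideal.I_l_closed[OF J yJ scal_closed]] .
  moreover have "(w \<ominus> scal d \<otimes> y) \<oplus> scal d \<otimes> y = w"
    using wc ideal.Icarr[OF J yJ] scal_closed[of d] by algebra
  ultimately show "w \<in> J" by simp
qed

lemma S_line_minimal_over:
  assumes aF: "a \<in> Field r" and yc: "y \<in> carrier R" and yS: "y \<notin> S a"
    and stable: "\<And>q. q \<in> carrier R \<Longrightarrow> \<exists>c. y \<otimes> q \<ominus> scal c \<otimes> y \<in> S a"
  shows "minimal_over R (S a) (S_line a y)"
  unfolding minimal_over_def
proof (intro conjI allI impI)
  show I: "ideal (S_line a y) R" using S_line_ideal[OF aF yc stable] .
  have "z \<ominus> scal 0 \<otimes> y \<in> S a" if "z \<in> S a" for z
    using that S_carrI[OF aF that] yc by (simp add: a_minus_def)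
  hence SI: "S a \<subseteq> S_line a y" unfolding S_line_def using S_carrI[OF aF] by blast
  have "y \<ominus> scal 1 \<otimes> y \<in> S a" using yc zero_in_S[OF aF] by (simp add: a_minus_def r_neg)
  hence "y \<in> S_line a y" unfolding S_line_def using yc by blast
  thus "S a \<subset> S_line a y" using SI yS by blast
  fix J assume J: "ideal J R" and SJ: "S a \<subseteq> J" and JI: "J \<subseteq> S_line a y"
  show "J = S a \<or> J = S_line a y"
  proof (cases "J \<subseteq> S a")
    case True thus ?thesis using SJ by blast
  next
    case False
    then obtain z where zJ: "z \<in> J" and zS: "z \<notin> S a" by blast
    obtain c where zc: "z \<in> carrier R" and c: "z \<ominus> scal c \<otimes> y \<in> S a"
      using JI zJ unfolding S_line_def by blast
    have c0: "c \<noteq> 0"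
    proof
      assume "c = 0"
      hence "z \<ominus> scal c \<otimes> y = z" using zc yc by simp algebra
      thus False using c zS by simp
    qed
    have "z \<ominus> (z \<ominus> scal c \<otimes> y) \<in> J"
      using additive_subgroup.a_closed[OF ideal.axioms(1)[OF J] zJ
        additive_subgroup.a_inv_closed[OF ideal.axioms(1)[OF J] subsetD[OF SJ c]]]
      unfolding a_minus_def .
    moreover have "z \<ominus> (z \<ominus> scal c \<otimes> y) = scal c \<otimes> y" using zc yc scal_closed[of c] by algebra
    ultimately have "scal (inverse c) \<otimes> (scal c \<otimes> y) \<in> J"
      using ideal.I_l_closed[OF J _ scal_closed] by simp
    moreover have "scal (inverse c) \<otimes> (scal c \<otimes> y) = y"
      using scal_inv[OF c0] yc by (simp add: m_assoc[symmetric])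
    ultimately have "y \<in> J" by simp
    thus ?thesis using S_line_subset[OF J SJ] JI by blast
  qed
qed

lemma exists_mult_in_layer: assumes aF: "a \<in> Field r" and xc: "x \<in> carrier R" and xS: "x \<notin> S a"
  shows "\<exists>t\<in>carrier R. x \<otimes> t \<in> Snext a \<and> x \<otimes> t \<notin> S a"
proof -
  define D where "D = {d \<in> Field r. \<exists>t\<in>Snext d. x \<otimes> t \<notin> S a}"
  have "\<one> \<in> Snext \<sigma>" using topsoc by simp
  moreover have "x \<otimes> \<one> \<notin> S a" using xc xS by simp
  ultimately have sD: "\<sigma> \<in> D" unfolding D_def using top(1) by blast
  have Dsub: "D \<subseteq> Field r" unfolding D_def by blast
  define \<delta> where "\<delta> = W.minim D"
  have dD: "\<delta> \<in> D" unfolding \<delta>_def using W.minim_in[OF Dsub] sD by blast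
  hence dF: "\<delta> \<in> Field r" unfolding D_def by blast
  have low: "x \<otimes> t \<in> S a" if bd: "lt b \<delta>" and tT: "t \<in> Snext b" for b t
  proof (rule ccontr)
    assume "x \<otimes> t \<notin> S a"
    hence "b \<in> D" unfolding D_def using lt_Field[OF bd] tT by blast
    hence "(\<delta>, b) \<in> r" unfolding \<delta>_def by (rule W.minim_least[OF Dsub])
    thus False using bd lt_asym unfolding rless_def by blast
  qed
  have lowS: "x \<otimes> s \<in> S a" if sS: "s \<in> S \<delta>" for s
    using S_below[OF dF sS] low xc zero_in_S[OF aF] by auto
  have "\<exists>i\<in>basis_idx \<delta>. x \<otimes> basis_idem \<delta> i \<notin> S a"
  proof (rule ccontr)
    assume "\<not> ?thesis"
    hence allu: "\<And>i. i \<in> basis_idx \<delta> \<Longrightarrow> x \<otimes> basis_idem \<delta> i \<in> S a" by blast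
    have "x \<otimes> t \<in> S a" if tT: "t \<in> Snext \<delta>" for t
      using dF tT
    proof (rule supp_induct)
      show "x \<otimes> s \<in> S a" if "s \<in> S \<delta>" for s using lowS that .
      fix t i c assume tT': "t \<in> Snext \<delta>" and IH: "x \<otimes> t \<in> S a" and iL: "i \<in> basis_idx \<delta>"
      have uc: "basis_idem \<delta> i \<in> carrier R" using basis_idem_carr[OF dF iL] .
      have tc: "t \<in> carrier R" using Snext_carrI[OF dF tT'] .
      have "x \<otimes> (t \<oplus> scal c \<otimes> basis_idem \<delta> i) = x \<otimes> t \<oplus> scal c \<otimes> (x \<otimes> basis_idem \<delta> i)"
        using xc uc tc scal_closed[of c] by algebra
      moreover have "scal c \<otimes> (x \<otimes> basis_idem \<delta> i) \<in> S a" using S_multl[OF aF allu[OF iL] scal_closed] .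
      ultimately show "x \<otimes> (t \<oplus> scal c \<otimes> basis_idem \<delta> i) \<in> S a" using S_add[OF aF IH] by simp
    qed
    thus False using dD unfolding D_def by blast
  qed
  then obtain i where iL: "i \<in> basis_idx \<delta>" and yS: "x \<otimes> basis_idem \<delta> i \<notin> S a" by blast
  define u where "u = basis_idem \<delta> i"
  have ui: "idem u" and uT: "u \<in> Snext \<delta>" and pu: "coord \<delta> u = unit_vec i"
    using basis_idem[OF dF iL] unfolding u_def by auto
  have uc: "u \<in> carrier R" using idem_carr[OF ui] .
  \<comment> \<open>Modulo S a, the element x u spans a one-dimensional R-submodule, because u does so modulo S \<delta>.\<close>
  have stable: "\<exists>c. (x \<otimes> u) \<otimes> q \<ominus> scal c \<otimes> (x \<otimes> u) \<in> S a" if qc: "q \<in> carrier R" for q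
  proof -
    define c where "c = coord \<delta> (u \<otimes> q) i"
    have uqT: "u \<otimes> q \<in> Snext \<delta>" using Snext_multr[OF dF uT qc] .
    have kuT: "scal c \<otimes> u \<in> Snext \<delta>" using Snext_multl[OF dF uT scal_closed] .
    have "coord \<delta> (u \<otimes> q) = (\<lambda>j. unit_vec i j * coord \<delta> (u \<otimes> q) j)" using coord_absorb[OF dF uT ui qc] pu by simp
    also have "\<dots> = (\<lambda>j. c * unit_vec i j)" unfolding c_def unit_vec_def by auto
    also have "\<dots> = coord \<delta> (scal c \<otimes> u)" using coord_scal[OF dF uT] pu by simp
    finally have "u \<otimes> q \<ominus> scal c \<otimes> u \<in> S \<delta>" using coord_eq[OF dF uqT kuT] by simp
    hence "x \<otimes> (u \<otimes> q \<ominus> scal c \<otimes> u) \<in> S a" using lowS by blast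
    moreover have "x \<otimes> (u \<otimes> q \<ominus> scal c \<otimes> u) = (x \<otimes> u) \<otimes> q \<ominus> scal c \<otimes> (x \<otimes> u)"
      using xc uc qc scal_closed[of c] by algebra
    ultimately show ?thesis by auto
  qed
  have "S_line a (x \<otimes> u) \<subseteq> Snext a"
    using soc_over_ideal(3)[OF S_ideal[OF aF] S_line_minimal_over[OF aF _ _ stable]] xc uc yS
    unfolding u_def by blast
  moreover have "x \<otimes> u \<in> S_line a (x \<otimes> u)"
    unfolding S_line_def using xc uc zero_in_S[OF aF] by (auto intro!: exI[of _ 1]) algebra
  ultimately show ?thesis using yS uc unfolding u_def by blast
qed

lemma atom_at_notS: assumes "atom_at a g" shows "g \<notin> S a"
proof
  assume "g \<in> S a"
  hence "supp (coord a g) = {}" using supp_empty_iff assms unfolding atom_at_def by blast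
  thus False using assms unfolding atom_at_def by simp
qed

lemma atom_at_coord: assumes "atom_at a g" shows "\<exists>i\<in>basis_idx a. coord a g = unit_vec i"
proof -
  have aF: "a \<in> Field r" and gi: "idem g" and gT: "g \<in> Snext a" and c: "card (supp (coord a g)) = 1"
    using assms unfolding atom_at_def by auto
  obtain i where si: "supp (coord a g) = {i}" using card_1_singletonE[OF c] by blast
  have iL: "i \<in> basis_idx a" using supp_subset_basis_idx[OF aF gT] si by blast
  have "coord a g = unit_vec i"
  proof
    fix j show "coord a g j = unit_vec i j"
    proof (cases "j = i")
      case True
      hence "coord a g j \<noteq> 0" using si unfolding supp_def by blast
      thus ?thesis using coord_idem_vals[OF aF gT gi, of j] True unfolding unit_vec_def by auto
    next
      case False
      hence "coord a g j = 0" using si unfolding supp_def by blast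
      thus ?thesis using False unfolding unit_vec_def by auto
    qed
  qed
  thus ?thesis using iL by blast
qed

lemma atom_atI: assumes "a \<in> Field r" "idem g" "g \<in> Snext a" "coord a g = unit_vec i" shows "atom_at a g"
  using assms supp_unit_vec unfolding atom_at_def by simp

lemma exists_atom_under: assumes aF: "a \<in> Field r" and f: "idem f" and fS: "f \<notin> S a"
  shows "\<exists>w. atom_at a w \<and> f \<otimes> w = w"
proof -
  have fc: "f \<in> carrier R" using idem_carr[OF f] .
  obtain t where tc: "t \<in> carrier R" and yT: "f \<otimes> t \<in> Snext a" and yS: "f \<otimes> t \<notin> S a"
    using exists_mult_in_layer[OF aF fc fS] by blast
  define y where "y = f \<otimes> t"
  have yc: "y \<in> carrier R" unfolding y_def using fc tc by simp
  have "supp (coord a y) \<noteq> {}" using supp_empty_iff[OF aF] yT yS unfolding y_def by blast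
  then obtain i where i: "i \<in> supp (coord a y)" by blast
  have iL: "i \<in> basis_idx a" using supp_subset_basis_idx[OF aF] yT i unfolding y_def by blast
  define c where "c = coord a y i"
  have c0: "c \<noteq> 0" using i unfolding c_def supp_def by simp
  have ui: "idem (basis_idem a i)" and uT: "basis_idem a i \<in> Snext a" and pu: "coord a (basis_idem a i) = unit_vec i" using basis_idem[OF aF iL] by auto
  have uc: "basis_idem a i \<in> carrier R" using idem_carr[OF ui] .
  define v where "v = scal (inverse c) \<otimes> (y \<otimes> basis_idem a i)"
  have yuT: "y \<otimes> basis_idem a i \<in> Snext a" using Snext_multl[OF aF uT yc] .
  have vT: "v \<in> Snext a" unfolding v_def using Snext_multl[OF aF yuT scal_closed] .
  have "coord a v = (\<lambda>j. inverse c * (coord a y j * unit_vec i j))"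
    unfolding v_def using coord_scal[OF aF yuT] coord_mult[OF aF _ uT] yT pu unfolding y_def by simp
  also have "\<dots> = unit_vec i" using c0 unfolding unit_vec_def c_def by (auto simp: fun_eq_iff)
  finally have pv: "coord a v = unit_vec i" .
  have vi: "(\<lambda>j. coord a v j * coord a v j) = coord a v" unfolding pv unit_vec_def by auto
  obtain g w where g: "idem g \<and> g \<in> Snext a \<and> coord a g = coord a v \<and> w \<in> carrier R \<and> g = v \<otimes> w"
    using lift_idem[OF aF vT vi] by (elim exE)
  have g1: "idem g" and g2: "g \<in> Snext a" and g3: "coord a g = unit_vec i" and wc: "w \<in> carrier R" and g5: "g = v \<otimes> w"
    using g pv by auto
  have "g = f \<otimes> (scal (inverse c) \<otimes> (t \<otimes> basis_idem a i) \<otimes> w)"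
    unfolding g5 v_def y_def using fc tc uc wc scal_closed[of "inverse c"] by algebra
  hence "f \<otimes> g = g" using idem_absorb[OF f] tc uc wc scal_closed[of "inverse c"] by simp
  moreover have "atom_at a g" using atom_atI[OF aF g1 g2 g3] .
  ultimately show ?thesis by blast
qed

section \<open>Generation of the socle sequence by basis idempotents\<close>

inductive_set rspan :: "'a set \<Rightarrow> 'a set" for X where
  rspan_zero: "\<zero> \<in> rspan X"
| rspan_step: "x \<in> rspan X \<Longrightarrow> u \<in> X \<Longrightarrow> q \<in> carrier R \<Longrightarrow> x \<oplus> u \<otimes> q \<in> rspan X"

lemma rspan_mono: "x \<in> rspan X \<Longrightarrow> X \<subseteq> Y \<Longrightarrow> x \<in> rspan Y"
  by (induction rule: rspan.induct) (auto intro: rspan.intros)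

lemma rspan_carr: "x \<in> rspan X \<Longrightarrow> X \<subseteq> carrier R \<Longrightarrow> x \<in> carrier R"
  by (induction rule: rspan.induct) auto

lemma rspan_mult_absorbed:
  assumes "x \<in> rspan U" "U \<subseteq> carrier R" "e \<in> carrier R" "G \<in> carrier R"
    and absorbed: "\<And>u. u \<in> U \<Longrightarrow> u \<otimes> e \<otimes> G = u \<otimes> e"
  shows "x \<otimes> e \<otimes> G = x \<otimes> e"
  using assms(1)
proof (induction rule: rspan.induct)
  case rspan_zero thus ?case using assms(3,4) by simp
next
  case (rspan_step x u q)
  have uc: "u \<in> carrier R" using rspan_step.hyps(2) assms(2) by blast
  have xc: "x \<in> carrier R" using rspan_carr[OF rspan_step.hyps(1) assms(2)] .
  have "(x \<oplus> u \<otimes> q) \<otimes> e \<otimes> G = x \<otimes> e \<otimes> G \<oplus> (u \<otimes> e \<otimes> G) \<otimes> q"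
    using xc uc assms(3,4) rspan_step.hyps(3) by algebra
  also have "\<dots> = x \<otimes> e \<oplus> (u \<otimes> e) \<otimes> q" using rspan_step.IH absorbed[OF rspan_step.hyps(2)] by simp
  also have "\<dots> = (x \<oplus> u \<otimes> q) \<otimes> e" using xc uc assms(3) rspan_step.hyps(3) by algebra
  finally show ?case .
qed

definition basis_upto :: "'i \<Rightarrow> 'a set" where
  "basis_upto a = {basis_idem b i | b i. (b = a \<or> lt b a) \<and> i \<in> basis_idx b}"
definition basis_below :: "'i \<Rightarrow> 'a set" where
  "basis_below a = {basis_idem b i | b i. lt b a \<and> i \<in> basis_idx b}"

lemma Snext_in_rspan: "a \<in> Field r \<longrightarrow> (\<forall>x. x \<in> Snext a \<longrightarrow> x \<in> rspan (basis_upto a))"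
proof (induction a rule: lt_induct)
  case (1 a)
  show ?case
  proof (intro impI allI)
    fix x assume aF: "a \<in> Field r" and xT: "x \<in> Snext a"
    show "x \<in> rspan (basis_upto a)"
      using aF xT
    proof (rule supp_induct)
      fix x assume xS: "x \<in> S a"
      from S_below[OF aF xS] show "x \<in> rspan (basis_upto a)"
      proof
        assume "x = \<zero>" thus ?thesis by (simp add: rspan_zero)
      next
        assume "\<exists>b. lt b a \<and> x \<in> Snext b"
        then obtain b where ba: "lt b a" and xb: "x \<in> Snext b" by blast
        have "x \<in> rspan (basis_upto b)" using "1.IH"[OF ba] lt_Field[OF ba] xb by blast
        moreover have "basis_upto b \<subseteq> basis_upto a" unfolding basis_upto_def using ba lt_trans by blast
        ultimately show ?thesis by (rule rspan_mono)
      qed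
    next
      fix x i c assume "x \<in> Snext a" and IH: "x \<in> rspan (basis_upto a)" and iL: "i \<in> basis_idx a"
      have "basis_idem a i \<in> basis_upto a" unfolding basis_upto_def using iL by blast
      hence "x \<oplus> basis_idem a i \<otimes> scal c \<in> rspan (basis_upto a)" using rspan_step[OF IH] scal_closed by blast
      thus "x \<oplus> scal c \<otimes> basis_idem a i \<in> rspan (basis_upto a)" using m_comm[OF scal_closed basis_idem_carr[OF aF iL]] by simp
    qed
  qed
qed

lemma S_in_rspan: assumes aF: "a \<in> Field r" and xS: "x \<in> S a" shows "x \<in> rspan (basis_below a)"
proof -
  from S_below[OF aF xS] show ?thesis
  proof
    assume "x = \<zero>" thus ?thesis by (simp add: rspan_zero)
  next
    assume "\<exists>b. lt b a \<and> x \<in> Snext b"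
    then obtain b where ba: "lt b a" and xb: "x \<in> Snext b" by blast
    have "x \<in> rspan (basis_upto b)" using Snext_in_rspan lt_Field[OF ba] xb by blast
    moreover have "basis_upto b \<subseteq> basis_below a" unfolding basis_upto_def basis_below_def using ba lt_trans by blast
    ultimately show ?thesis by (rule rspan_mono)
  qed
qed

lemma basis_below_countable: "countable (basis_below a)"
proof -
  have "basis_below a \<subseteq> (\<lambda>(b, i). basis_idem b i) ` (Field r \<times> (UNIV :: nat set))"
    unfolding basis_below_def using lt_Field by fastforce
  moreover have "countable (Field r \<times> (UNIV :: nat set))" using cnt by simp
  ultimately show ?thesis using countable_subset by blast
qed

lemma basis_below_props: assumes "u \<in> basis_below a" shows "\<exists>b i. lt b a \<and> i \<in> basis_idx b \<and> u = basis_idem b i"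
  using assms unfolding basis_below_def by blast

text \<open>An enumeration of the basis idempotents below a; the extra \<zero> keeps the enumerated set
  nonempty, as from_nat_into requires.\<close>
definition basis_seq :: "'i \<Rightarrow> nat \<Rightarrow> 'a" where
  "basis_seq a = from_nat_into (insert \<zero> (basis_below a))"

lemma basis_seq_range: "range (basis_seq a) = insert \<zero> (basis_below a)"
  unfolding basis_seq_def by (rule range_from_nat_into) (auto simp: basis_below_countable)

lemma rspan_finite_prefix: fixes c :: "nat \<Rightarrow> 'a" assumes "x \<in> rspan X" "X \<subseteq> range c" shows "\<exists>M. x \<in> rspan (c ` {..<M})"
  using assms
proof (induction rule: rspan.induct)
  case rspan_zero thus ?case using rspan.rspan_zero by blast
next
  case (rspan_step x u q)
  obtain M where M: "x \<in> rspan (c ` {..<M})" using rspan_step by blast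
  obtain k where k: "u = c k" using rspan_step by blast
  have "x \<in> rspan (c ` {..<max M (Suc k)})" using rspan_mono[OF M] by (auto simp: image_subset_iff)
  moreover have "u \<in> c ` {..<max M (Suc k)}" using k by auto
  ultimately show ?case using rspan.rspan_step[OF _ _ rspan_step.hyps(3)] by blast
qed

section \<open>The algebras B\<close>

lemma Bleaf_zero: "is_zero_pt r a \<Longrightarrow> Bleaf r a p \<longleftrightarrow> p = []"
  by (auto elim: Bleaf.cases intro: Bleaf.intros dest: zero_not_succ limit_not_zero)

lemma Bleaf_succ: assumes "is_succ_of r b a"
  shows "Bleaf r a p \<longleftrightarrow> (\<exists>m q. p = Inr m # q \<and> Bleaf r b q)"
proof
  assume "Bleaf r a p"
  thus "\<exists>m q. p = Inr m # q \<and> Bleaf r b q"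
  proof cases
    case leaf_zero thus ?thesis using zero_not_succ assms by blast
  next
    case (leaf_succ b' p' m) thus ?thesis using succ_unique[OF assms] by blast
  next
    case (leaf_lim b' p') thus ?thesis using limit_not_succ assms by blast
  qed
next
  assume "\<exists>m q. p = Inr m # q \<and> Bleaf r b q"
  thus "Bleaf r a p" using Bleaf.leaf_succ[OF assms] by blast
qed

lemma Bleaf_lim: assumes "is_limit_pt r a"
  shows "Bleaf r a p \<longleftrightarrow> (\<exists>b q. p = Inl b # q \<and> lt b a \<and> Bleaf r b q)"
proof
  assume "Bleaf r a p"
  thus "\<exists>b q. p = Inl b # q \<and> lt b a \<and> Bleaf r b q"
  proof cases
    case leaf_zero thus ?thesis using limit_not_zero assms by blast
  next
    case (leaf_succ b' p' m) thus ?thesis using limit_not_succ assms by blast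
  next
    case (leaf_lim b' p') thus ?thesis by blast
  qed
next
  assume "\<exists>b q. p = Inl b # q \<and> lt b a \<and> Bleaf r b q"
  thus "Bleaf r a p" using Bleaf.leaf_lim[OF assms] by blast
qed

lemma Bcar_zero_iff: assumes "is_zero_pt r a" shows "Bcar r a x \<longleftrightarrow> (\<forall>p. p \<noteq> [] \<longrightarrow> x p = 0)"
proof
  assume "Bcar r a x" thus "\<forall>p. p \<noteq> [] \<longrightarrow> x p = 0"
    by cases (use assms zero_not_succ limit_not_zero in blast)+
next
  assume "\<forall>p. p \<noteq> [] \<longrightarrow> x p = 0" thus "Bcar r a x" using Bcar.car_zero[OF assms] by blast
qed

lemma Bcar_succ_iff: assumes "is_succ_of r b a"
  shows "Bcar r a x \<longleftrightarrow> (\<forall>p. (\<not> (\<exists>m q. p = Inr m # q)) \<longrightarrow> x p = 0) \<and>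
     (\<forall>m. Bcar r b (\<lambda>q. x (Inr m # q))) \<and>
     (\<exists>c. finite {m. (\<lambda>q. x (Inr m # q)) \<noteq> (\<lambda>q. c * Bone r b q)})"
proof
  assume "Bcar r a x"
  thus "(\<forall>p. (\<not> (\<exists>m q. p = Inr m # q)) \<longrightarrow> x p = 0) \<and>
     (\<forall>m. Bcar r b (\<lambda>q. x (Inr m # q))) \<and>
     (\<exists>c. finite {m. (\<lambda>q. x (Inr m # q)) \<noteq> (\<lambda>q. c * Bone r b q)})"
  proof cases
    case car_zero thus ?thesis using zero_not_succ assms by blast
  next
    case (car_succ b') thus ?thesis using succ_unique[OF assms] by blast
  next
    case car_lim thus ?thesis using limit_not_succ assms by blast
  qed
next
  assume "(\<forall>p. (\<not> (\<exists>m q. p = Inr m # q)) \<longrightarrow> x p = 0) \<and>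
     (\<forall>m. Bcar r b (\<lambda>q. x (Inr m # q))) \<and>
     (\<exists>c. finite {m. (\<lambda>q. x (Inr m # q)) \<noteq> (\<lambda>q. c * Bone r b q)})"
  thus "Bcar r a x" using Bcar.car_succ[OF assms] by blast
qed

lemma Bcar_lim_iff: assumes "is_limit_pt r a"
  shows "Bcar r a x \<longleftrightarrow> (\<forall>p. (\<not> (\<exists>b q. lt b a \<and> p = Inl b # q)) \<longrightarrow> x p = 0) \<and>
     (\<forall>b. lt b a \<longrightarrow> Bcar r b (\<lambda>q. x (Inl b # q))) \<and>
     (\<exists>c. finite {b. lt b a \<and> (\<lambda>q. x (Inl b # q)) \<noteq> (\<lambda>q. c * Bone r b q)})"
proof
  assume "Bcar r a x"
  thus "(\<forall>p. (\<not> (\<exists>b q. lt b a \<and> p = Inl b # q)) \<longrightarrow> x p = 0) \<and>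
     (\<forall>b. lt b a \<longrightarrow> Bcar r b (\<lambda>q. x (Inl b # q))) \<and>
     (\<exists>c. finite {b. lt b a \<and> (\<lambda>q. x (Inl b # q)) \<noteq> (\<lambda>q. c * Bone r b q)})"
  proof cases
    case car_zero thus ?thesis using limit_not_zero assms by blast
  next
    case (car_succ b') thus ?thesis using limit_not_succ assms by blast
  next
    case car_lim thus ?thesis by blast
  qed
next
  assume "(\<forall>p. (\<not> (\<exists>b q. lt b a \<and> p = Inl b # q)) \<longrightarrow> x p = 0) \<and>
     (\<forall>b. lt b a \<longrightarrow> Bcar r b (\<lambda>q. x (Inl b # q))) \<and>
     (\<exists>c. finite {b. lt b a \<and> (\<lambda>q. x (Inl b # q)) \<noteq> (\<lambda>q. c * Bone r b q)})"
  thus "Bcar r a x" using Bcar.car_lim[OF assms] by blast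
qed

lemma Bone_zero: "is_zero_pt r a \<Longrightarrow> Bone r a p = (if p = [] then 1 else 0)"
  unfolding Bone_def using Bleaf_zero by simp

lemma Bone_succ_Inr: "is_succ_of r b a \<Longrightarrow> Bone r a (Inr m # q) = Bone r b q"
  unfolding Bone_def using Bleaf_succ by simp
lemma Bone_succ_other: "is_succ_of r b a \<Longrightarrow> \<not> (\<exists>m q. p = Inr m # q) \<Longrightarrow> Bone r a p = 0"
  unfolding Bone_def using Bleaf_succ by auto
lemma Bone_lim_Inl: "is_limit_pt r a \<Longrightarrow> lt b a \<Longrightarrow> Bone r a (Inl b # q) = Bone r b q"
  unfolding Bone_def using Bleaf_lim by simp
lemma Bone_lim_other: "is_limit_pt r a \<Longrightarrow> \<not> (\<exists>b q. lt b a \<and> p = Inl b # q) \<Longrightarrow> Bone r a p = 0"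
  unfolding Bone_def using Bleaf_lim by auto

section \<open>Corners and orthogonal families of atoms\<close>

definition corner :: "'a \<Rightarrow> 'a set" where
  "corner e = {x \<in> carrier R. e \<otimes> x = x}"

definition corner_iso :: "'a \<Rightarrow> 'i \<Rightarrow> ('a \<Rightarrow> ('i + nat) list \<Rightarrow> 'k) \<Rightarrow> bool" where
  "corner_iso e a \<psi> \<longleftrightarrow> bij_betw \<psi> (corner e) {z. Bcar r a z} \<and>
     (\<forall>x\<in>corner e. \<forall>y\<in>corner e. \<psi> (x \<oplus> y) = (\<lambda>p. \<psi> x p + \<psi> y p)) \<and>
     (\<forall>x\<in>corner e. \<forall>y\<in>corner e. \<psi> (x \<otimes> y) = (\<lambda>p. \<psi> x p * \<psi> y p)) \<and>
     (\<forall>c. \<forall>x\<in>corner e. \<psi> (scal c \<otimes> x) = (\<lambda>p. c * \<psi> x p)) \<and>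
     \<psi> e = Bone r a"

definition Bprod_car :: "'j set \<Rightarrow> ('j \<Rightarrow> 'i) \<Rightarrow> ('j \<Rightarrow> ('i + nat) list \<Rightarrow> 'k) set" where
  "Bprod_car I h = {Z. (\<forall>j\<in>I. Bcar r (h j) (Z j)) \<and> (\<forall>j. j \<notin> I \<longrightarrow> Z j = (\<lambda>p. 0)) \<and>
      (\<exists>c. finite {j\<in>I. Z j \<noteq> (\<lambda>q. c * Bone r (h j) q)})}"

definition corner_prod_iso :: "'a \<Rightarrow> 'j set \<Rightarrow> ('j \<Rightarrow> 'i) \<Rightarrow> ('a \<Rightarrow> 'j \<Rightarrow> ('i + nat) list \<Rightarrow> 'k) \<Rightarrow> bool" where
  "corner_prod_iso e I h \<Psi> \<longleftrightarrow> bij_betw \<Psi> (corner e) (Bprod_car I h) \<and>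
     (\<forall>x\<in>corner e. \<forall>y\<in>corner e. \<Psi> (x \<oplus> y) = (\<lambda>j p. \<Psi> x j p + \<Psi> y j p)) \<and>
     (\<forall>x\<in>corner e. \<forall>y\<in>corner e. \<Psi> (x \<otimes> y) = (\<lambda>j p. \<Psi> x j p * \<Psi> y j p)) \<and>
     (\<forall>c. \<forall>x\<in>corner e. \<Psi> (scal c \<otimes> x) = (\<lambda>j p. c * \<Psi> x j p)) \<and>
     \<Psi> e = (\<lambda>j. if j \<in> I then Bone r (h j) else (\<lambda>p. 0))"

lemma corner_I: "x \<in> carrier R \<Longrightarrow> e \<otimes> x = x \<Longrightarrow> x \<in> corner e"
  unfolding corner_def by blast
lemma corner_D: "x \<in> corner e \<Longrightarrow> x \<in> carrier R \<and> e \<otimes> x = x"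
  unfolding corner_def by blast
lemma corner_mult: "idem e \<Longrightarrow> x \<in> carrier R \<Longrightarrow> e \<otimes> x \<in> corner e"
  unfolding corner_def using idem_absorb idem_carr by auto

lemma orth_idem_finsum:
  fixes g :: "'j \<Rightarrow> 'a"
  assumes fin: "finite F" and FI: "F \<subseteq> I"
    and gi: "\<And>j. j \<in> I \<Longrightarrow> idem (g j)"
    and orth: "\<And>j j'. j \<in> I \<Longrightarrow> j' \<in> I \<Longrightarrow> j \<noteq> j' \<Longrightarrow> g j \<otimes> g j' = \<zero>"
    and f: "\<And>j. j \<in> F \<Longrightarrow> f j \<in> carrier R \<and> g j \<otimes> f j = f j"
    and k: "k \<in> I"
  shows "g k \<otimes> finsum R f F = (if k \<in> F then f k else \<zero>)"
  using fin FI f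
proof (induction F rule: finite_induct)
  case empty
  thus ?case using idem_carr[OF gi[OF k]] by simp
next
  case (insert j F)
  have fF: "f \<in> F \<rightarrow> carrier R" using insert.prems(2) by blast
  have fj: "f j \<in> carrier R" "g j \<otimes> f j = f j" using insert.prems(2) by auto
  have gkc: "g k \<in> carrier R" using idem_carr[OF gi[OF k]] .
  have gjc: "g j \<in> carrier R" using idem_carr[OF gi] insert.prems(1) by blast
  have IH: "g k \<otimes> finsum R f F = (if k \<in> F then f k else \<zero>)" using insert by blast
  have sc: "finsum R f F \<in> carrier R" using finsum_closed[OF fF] .
  have "finsum R f (insert j F) = f j \<oplus> finsum R f F"
    using finsum_insert[OF insert.hyps(1,2) fF fj(1)] .
  hence "g k \<otimes> finsum R f (insert j F) = g k \<otimes> f j \<oplus> g k \<otimes> finsum R f F"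
    using r_distr[OF fj(1) sc gkc] by simp
  moreover have "g k \<otimes> f j = (if k = j then f j else \<zero>)"
  proof (cases "k = j")
    case True thus ?thesis using fj(2) by simp
  next
    case False
    have "g k \<otimes> f j = (g k \<otimes> g j) \<otimes> f j" using fj(2) gkc gjc fj(1) by (metis m_assoc)
    also have "\<dots> = \<zero>" using orth[OF k _ False] insert.prems(1) fj(1) by simp
    finally show ?thesis using False by simp
  qed
  moreover have "k \<in> F \<Longrightarrow> f k \<in> carrier R" using insert.prems(2) by blast
  ultimately show ?case using IH insert.hyps(2) fj(1) by auto
qed

lemma corner_congruent_scalar: assumes e: "atom_at a e" and xc: "x \<in> corner e"
  shows "\<exists>c. x \<ominus> scal c \<otimes> e \<in> S a"
proof -
  have aF: "a \<in> Field r" and ei: "idem e" and eT: "e \<in> Snext a" using e unfolding atom_at_def by auto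
  obtain i where pe: "coord a e = unit_vec i" using atom_at_coord[OF e] by blast
  have xcar: "x \<in> carrier R" and ex: "e \<otimes> x = x" using corner_D[OF xc] by auto
  have xT: "x \<in> Snext a" using Snext_multr[OF aF eT xcar] ex by simp
  define c where "c = coord a x i"
  have "coord a x = coord a (e \<otimes> x)" using ex by simp
  also have "\<dots> = (\<lambda>j. coord a e j * coord a (e \<otimes> x) j)" using coord_absorb[OF aF eT ei xcar] .
  also have "\<dots> = (\<lambda>j. c * unit_vec i j)" using ex pe unfolding c_def unit_vec_def by (auto simp: fun_eq_iff)
  also have "\<dots> = coord a (scal c \<otimes> e)" using coord_scal[OF aF eT] pe by simp
  finally have "coord a x = coord a (scal c \<otimes> e)" .
  hence "x \<ominus> scal c \<otimes> e \<in> S a" using coord_eq[OF aF xT Snext_multl[OF aF eT scal_closed]] by simp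
  thus ?thesis by blast
qed

lemma corner_isoD: assumes "corner_iso e a \<psi>"
  shows "bij_betw \<psi> (corner e) {z. Bcar r a z}"
    "\<And>x y. x\<in>corner e \<Longrightarrow> y\<in>corner e \<Longrightarrow> \<psi> (x \<oplus> y) = (\<lambda>p. \<psi> x p + \<psi> y p)"
    "\<And>x y. x\<in>corner e \<Longrightarrow> y\<in>corner e \<Longrightarrow> \<psi> (x \<otimes> y) = (\<lambda>p. \<psi> x p * \<psi> y p)"
    "\<And>c x. x\<in>corner e \<Longrightarrow> \<psi> (scal c \<otimes> x) = (\<lambda>p. c * \<psi> x p)"
    "\<psi> e = Bone r a"
  using assms unfolding corner_iso_def by blast+

end

locale orth_corner_family = layered_algebra R sm r S \<sigma>
  for R :: "('a, 'b) ring_scheme" (structure) and sm :: "'k::field \<Rightarrow> 'a \<Rightarrow> 'a"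
    and r :: "'i rel" and S :: "'i \<Rightarrow> 'a set" and \<sigma> :: 'i +
  fixes a :: 'i and e :: 'a and I :: "'j set" and g :: "'j \<Rightarrow> 'a" and h :: "'j \<Rightarrow> 'i"
    and \<psi> :: "'j \<Rightarrow> 'a \<Rightarrow> ('i + nat) list \<Rightarrow> 'k"
  assumes atom: "atom_at a e" and infinite_I: "infinite I"
    and g_idem: "\<And>j. j \<in> I \<Longrightarrow> idem (g j)"
    and g_below: "\<And>j. j \<in> I \<Longrightarrow> e \<otimes> g j = g j"
    and g_nonzero: "\<And>j. j \<in> I \<Longrightarrow> g j \<noteq> \<zero>"
    and g_orth: "\<And>j j'. j \<in> I \<Longrightarrow> j' \<in> I \<Longrightarrow> j \<noteq> j' \<Longrightarrow> g j \<otimes> g j' = \<zero>"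
    and g_iso: "\<And>j. j \<in> I \<Longrightarrow> corner_iso (g j) (h j) (\<psi> j)"
    and S_covered: "\<And>s. s \<in> S a \<Longrightarrow> e \<otimes> s = s \<Longrightarrow> \<exists>F. finite F \<and> F \<subseteq> I \<and> s \<otimes> finsum R g F = s"
begin

definition Psi :: "'a \<Rightarrow> 'j \<Rightarrow> ('i + nat) list \<Rightarrow> 'k" where
  "Psi x j = (if j \<in> I then \<psi> j (g j \<otimes> x) else (\<lambda>p. 0))"

lemma e_idem: "idem e" and e_carr: "e \<in> carrier R"
  using atom idem_carr unfolding atom_at_def by auto

lemma g_carr: "j \<in> I \<Longrightarrow> g j \<in> carrier R"
  using g_idem idem_carr by blast

lemma g_sq: "j \<in> I \<Longrightarrow> g j \<otimes> g j = g j"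
  using g_idem idem_sq by blast

lemma g_e: "j \<in> I \<Longrightarrow> g j \<otimes> e = g j"
  using g_below g_carr e_carr m_comm by metis

lemma g_corner: "j \<in> I \<Longrightarrow> x \<in> carrier R \<Longrightarrow> g j \<otimes> x \<in> corner (g j)"
  using corner_mult g_idem by blast

lemma finsum_g_carr: "F \<subseteq> I \<Longrightarrow> finsum R g F \<in> carrier R"
  using g_carr by (intro finsum_closed) blast

lemmas g_isoD = corner_isoD[OF g_iso]

lemma g_mult_finsum:
  assumes "finite F" "F \<subseteq> I" "j \<in> I" "\<And>k. k \<in> F \<Longrightarrow> f k \<in> carrier R \<and> g k \<otimes> f k = f k"
  shows "g j \<otimes> finsum R f F = (if j \<in> F then f j else \<zero>)"
  by (rule orth_idem_finsum[where g=g, OF assms(1,2) g_idem g_orth assms(4,3)])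

lemma g_mult_finsum_g:
  assumes "finite F" "F \<subseteq> I" "j \<in> I"
  shows "g j \<otimes> finsum R g F = (if j \<in> F then g j else \<zero>)"
  using assms g_carr g_sq by (intro g_mult_finsum) auto

lemma corner_cofinite_scalar:
  assumes xc: "x \<in> corner e" and cS: "x \<ominus> scal c \<otimes> e \<in> S a"
  shows "\<exists>F. finite F \<and> F \<subseteq> I \<and> (\<forall>j\<in>I - F. g j \<otimes> x = scal c \<otimes> g j)"
proof -
  have xcar: "x \<in> carrier R" and ex: "e \<otimes> x = x" using corner_D[OF xc] by auto
  define s where "s = x \<ominus> scal c \<otimes> e"
  have sc: "s \<in> carrier R" unfolding s_def using xcar e_carr by simp
  have "e \<otimes> s = e \<otimes> x \<ominus> scal c \<otimes> (e \<otimes> e)" unfolding s_def using xcar e_carr scal_closed[of c] by algebra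
  hence es: "e \<otimes> s = s" unfolding s_def using ex idem_sq[OF e_idem] by simp
  obtain F where F: "finite F" "F \<subseteq> I" and sG: "s \<otimes> finsum R g F = s"
    using S_covered[OF cS[folded s_def] es] by blast
  have "g j \<otimes> x = scal c \<otimes> g j" if jIF: "j \<in> I - F" for j
  proof -
    have jI: "j \<in> I" using jIF by blast
    have gj: "g j \<in> carrier R" using g_carr[OF jI] .
    have Gc: "finsum R g F \<in> carrier R" using finsum_g_carr[OF F(2)] .
    have "g j \<otimes> s = s \<otimes> (g j \<otimes> finsum R g F)"
      using sG gj sc Gc by (metis m_assoc m_comm)
    also have "\<dots> = \<zero>" using g_mult_finsum_g[OF F jI] jIF sc by simp
    finally have "g j \<otimes> s = \<zero>" .
    moreover have "g j \<otimes> x = g j \<otimes> s \<oplus> scal c \<otimes> (g j \<otimes> e)"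
      unfolding s_def using gj xcar e_carr scal_closed[of c] by algebra
    ultimately show ?thesis using g_e[OF jI] gj by simp
  qed
  thus ?thesis using F by blast
qed

lemma Psi_in_Bprod_car: assumes xc: "x \<in> corner e" shows "Psi x \<in> Bprod_car I h"
proof -
  have xcar: "x \<in> carrier R" using corner_D[OF xc] by auto
  obtain c where cS: "x \<ominus> scal c \<otimes> e \<in> S a" using corner_congruent_scalar[OF atom xc] by blast
  obtain F where F: "finite F" "F \<subseteq> I" and gF: "\<forall>j\<in>I - F. g j \<otimes> x = scal c \<otimes> g j"
    using corner_cofinite_scalar[OF xc cS] by blast
  have "Psi x j = (\<lambda>q. c * Bone r (h j) q)" if "j \<in> I - F" for j
    using that gF g_isoD(4,5) corner_I[OF g_carr g_sq] unfolding Psi_def by auto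
  hence "{j\<in>I. Psi x j \<noteq> (\<lambda>q. c * Bone r (h j) q)} \<subseteq> F" by blast
  hence "finite {j\<in>I. Psi x j \<noteq> (\<lambda>q. c * Bone r (h j) q)}" using F(1) finite_subset by blast
  moreover have "\<forall>j\<in>I. Bcar r (h j) (Psi x j)"
    unfolding Psi_def using bij_betw_apply[OF g_isoD(1) g_corner[OF _ xcar]] by auto
  moreover have "\<forall>j. j \<notin> I \<longrightarrow> Psi x j = (\<lambda>p. 0)" unfolding Psi_def by simp
  ultimately show ?thesis unfolding Bprod_car_def by blast
qed

lemma Psi_add: "x \<in> corner e \<Longrightarrow> y \<in> corner e \<Longrightarrow> Psi (x \<oplus> y) = (\<lambda>j p. Psi x j p + Psi y j p)"
  using g_isoD(2)[OF _ g_corner g_corner] r_distr g_carr corner_D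
  unfolding Psi_def by (auto simp: fun_eq_iff)

lemma Psi_mult:
  assumes xc: "x \<in> corner e" and yc: "y \<in> corner e"
  shows "Psi (x \<otimes> y) = (\<lambda>j p. Psi x j p * Psi y j p)"
proof (rule ext)
  fix j
  have xcar: "x \<in> carrier R" and ycar: "y \<in> carrier R" using corner_D xc yc by auto
  show "Psi (x \<otimes> y) j = (\<lambda>p. Psi x j p * Psi y j p)"
  proof (cases "j \<in> I")
    case True
    have "(g j \<otimes> x) \<otimes> (g j \<otimes> y) = (g j \<otimes> g j) \<otimes> (x \<otimes> y)" using xcar ycar g_carr[OF True] by algebra
    hence "g j \<otimes> (x \<otimes> y) = (g j \<otimes> x) \<otimes> (g j \<otimes> y)" using g_sq[OF True] by simp
    thus ?thesis unfolding Psi_def using True g_isoD(3)[OF True g_corner[OF True xcar] g_corner[OF True ycar]] by simp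
  qed (simp add: Psi_def)
qed

lemma Psi_scal: "x \<in> corner e \<Longrightarrow> Psi (scal c \<otimes> x) = (\<lambda>j p. c * Psi x j p)"
  using g_isoD(4)[OF _ g_corner] g_carr corner_D scal_closed[of c]
  unfolding Psi_def by (auto simp: fun_eq_iff m_lcomm)

lemma Psi_e: "Psi e = (\<lambda>j. if j \<in> I then Bone r (h j) else (\<lambda>p. 0))"
  unfolding Psi_def using g_e g_isoD(5) by auto

text \<open>If all components of z vanish, the cofinite scalar of z is 0 (infinitely many g j are
  nonzero), so z lies in S a; then z is absorbed by finitely many g j, hence z = 0.\<close>
lemma Psi_inj: "inj_on Psi (corner e)"
proof (rule inj_onI)
  fix x y assume xc: "x \<in> corner e" and yc: "y \<in> corner e" and eq: "Psi x = Psi y"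
  have xcar: "x \<in> carrier R" and ex: "e \<otimes> x = x" using corner_D[OF xc] by auto
  have ycar: "y \<in> carrier R" and ey: "e \<otimes> y = y" using corner_D[OF yc] by auto
  define z where "z = x \<ominus> y"
  have zcar: "z \<in> carrier R" unfolding z_def using xcar ycar by simp
  have "e \<otimes> z = e \<otimes> x \<ominus> e \<otimes> y" unfolding z_def using xcar ycar e_carr by algebra
  hence zc: "z \<in> corner e" using ex ey zcar unfolding z_def corner_def by simp
  have gz: "g j \<otimes> z = \<zero>" if jI: "j \<in> I" for j
  proof -
    have "\<psi> j (g j \<otimes> x) = \<psi> j (g j \<otimes> y)" using fun_cong[OF eq, of j] jI unfolding Psi_def by simp
    hence "g j \<otimes> x = g j \<otimes> y" using bij_betw_imp_inj_on[OF g_isoD(1)[OF jI]] g_corner[OF jI xcar] g_corner[OF jI ycar]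
      by (simp add: inj_on_eq_iff)
    moreover have "g j \<otimes> z = g j \<otimes> x \<ominus> g j \<otimes> y" unfolding z_def using xcar ycar g_carr[OF jI] by algebra
    ultimately show ?thesis using g_carr[OF jI] ycar by (simp add: a_minus_def r_neg)
  qed
  obtain c where c: "z \<ominus> scal c \<otimes> e \<in> S a" using corner_congruent_scalar[OF atom zc] by blast
  obtain F where F: "finite F" "F \<subseteq> I" and gF: "\<forall>j\<in>I - F. g j \<otimes> z = scal c \<otimes> g j"
    using corner_cofinite_scalar[OF zc c] by blast
  obtain j where jIF: "j \<in> I - F" using Diff_infinite_finite[OF F(1) infinite_I] by (metis finite.emptyI ex_in_conv)
  hence jI: "j \<in> I" by blast
  have cg: "scal c \<otimes> g j = \<zero>" using gF jIF gz[OF jI] by simp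
  have "c = 0"
  proof (rule ccontr)
    assume "c \<noteq> 0"
    hence "g j = scal (inverse c) \<otimes> (scal c \<otimes> g j)"
      using scal_inv g_carr[OF jI] by (simp add: m_assoc[symmetric])
    thus False using cg g_nonzero[OF jI] by simp
  qed
  hence zS: "z \<in> S a" using c zcar e_carr by (simp add: a_minus_def)
  obtain G where G: "finite G" "G \<subseteq> I" and zG: "z \<otimes> finsum R g G = z"
    using S_covered[OF zS] zc unfolding corner_def by blast
  have "z = finsum R g G \<otimes> z" using zG m_comm[OF zcar finsum_g_carr[OF G(2)]] by simp
  also have "\<dots> = finsum R (\<lambda>j. g j \<otimes> z) G"
    using finsum_ldistr[OF G(1) zcar] g_carr G(2) by (auto simp: Pi_def)
  also have "\<dots> = finsum R (\<lambda>j. \<zero>) G" using G(2) gz by (intro finsum_cong') auto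
  also have "\<dots> = \<zero>" by simp
  finally have "z = \<zero>" .
  thus "x = y" unfolding z_def using xcar ycar
    by (metis minus_equality r_neg r_zero add.inv_closed a_minus_def add.m_closed a_assoc l_neg)
qed

text \<open>The preimage of a family equal to c times the unit outside a finite set E is c e plus,
  for each j in E, the preimage of its j-th component minus c g j.\<close>
lemma Psi_surj: "Bprod_car I h \<subseteq> Psi ` corner e"
proof
  fix Z assume Z: "Z \<in> Bprod_car I h"
  obtain c where Efin: "finite {j\<in>I. Z j \<noteq> (\<lambda>q. c * Bone r (h j) q)}" using Z unfolding Bprod_car_def by blast
  define E where "E = {j\<in>I. Z j \<noteq> (\<lambda>q. c * Bone r (h j) q)}"
  have EI: "E \<subseteq> I" unfolding E_def by blast
  have ZB: "\<And>j. j \<in> I \<Longrightarrow> Bcar r (h j) (Z j)" and Z0: "\<And>j. j \<notin> I \<Longrightarrow> Z j = (\<lambda>p. 0)"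
    using Z unfolding Bprod_car_def by blast+
  define yv where "yv j = inv_into (corner (g j)) (\<psi> j) (Z j)" for j
  have yv: "yv j \<in> corner (g j) \<and> \<psi> j (yv j) = Z j" if jI: "j \<in> I" for j
    unfolding yv_def using g_isoD(1)[OF jI] ZB[OF jI]
    by (metis bij_betw_imp_surj_on inv_into_into bij_betw_inv_into_right mem_Collect_eq)
  define f where "f j = yv j \<ominus> scal c \<otimes> g j" for j
  have f: "f j \<in> carrier R \<and> g j \<otimes> f j = f j" if jI: "j \<in> I" for j
  proof -
    have yc: "yv j \<in> carrier R" and gy: "g j \<otimes> yv j = yv j" using corner_D yv[OF jI] by auto
    have "g j \<otimes> f j = g j \<otimes> yv j \<ominus> scal c \<otimes> (g j \<otimes> g j)"
      unfolding f_def using yc g_carr[OF jI] scal_closed[of c] by algebra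
    thus ?thesis using gy g_sq[OF jI] yc g_carr[OF jI] unfolding f_def by simp
  qed
  have fE: "f \<in> E \<rightarrow> carrier R" using f EI by blast
  define x where "x = scal c \<otimes> e \<oplus> finsum R f E"
  have sc: "finsum R f E \<in> carrier R" using finsum_closed[OF fE] .
  have "e \<otimes> finsum R f E = finsum R (\<lambda>j. e \<otimes> f j) E"
    using finsum_rdistr[OF Efin[folded E_def] e_carr fE] .
  also have "\<dots> = finsum R f E"
  proof (intro finsum_cong')
    fix j assume "j \<in> E"
    hence jI: "j \<in> I" using EI by blast
    have "e \<otimes> f j = (e \<otimes> g j) \<otimes> f j" using f[OF jI] e_carr g_carr[OF jI] by (metis m_assoc)
    thus "e \<otimes> f j = f j" using g_below[OF jI] f[OF jI] by simp
  qed (use fE in simp_all)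
  finally have ef: "e \<otimes> finsum R f E = finsum R f E" .
  have "e \<otimes> x = scal c \<otimes> (e \<otimes> e) \<oplus> e \<otimes> finsum R f E"
    unfolding x_def using e_carr sc scal_closed[of c] by algebra
  hence "e \<otimes> x = x" using idem_sq[OF e_idem] ef unfolding x_def by simp
  hence xc: "x \<in> corner e" using sc e_carr unfolding x_def corner_def by simp
  have "Psi x j = Z j" for j
  proof (cases "j \<in> I")
    case False thus ?thesis unfolding Psi_def using Z0 by simp
  next
    case True
    have "g j \<otimes> finsum R f E = (if j \<in> E then f j else \<zero>)"
      using g_mult_finsum[OF Efin[folded E_def] EI True] f EI by blast
    moreover have "g j \<otimes> x = scal c \<otimes> (g j \<otimes> e) \<oplus> g j \<otimes> finsum R f E"
      unfolding x_def using e_carr sc g_carr[OF True] scal_closed[of c] by algebra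
    ultimately have gx: "g j \<otimes> x = scal c \<otimes> g j \<oplus> (if j \<in> E then f j else \<zero>)" using g_e[OF True] by simp
    show ?thesis
    proof (cases "j \<in> E")
      case jE: True
      have "yv j \<in> carrier R" using corner_D yv[OF True] by blast
      hence "scal c \<otimes> g j \<oplus> f j = yv j"
        unfolding f_def using g_carr[OF True] scal_closed[of c] by algebra
      thus ?thesis unfolding Psi_def using True yv[OF True] gx jE by simp
    next
      case jE: False
      have "g j \<otimes> x = scal c \<otimes> g j" using gx jE g_carr[OF True] by simp
      hence "Psi x j = (\<lambda>q. c * Bone r (h j) q)"
        unfolding Psi_def using True g_isoD(4,5)[OF True] corner_I[OF g_carr g_sq] by simp
      thus ?thesis using jE True unfolding E_def by simp
    qed
  qed
  hence "Psi x = Z" by blast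
  thus "Z \<in> Psi ` corner e" using xc by blast
qed

lemma corner_prod_iso_Psi: "corner_prod_iso e I h Psi"
proof -
  have "bij_betw Psi (corner e) (Bprod_car I h)"
    unfolding bij_betw_def using Psi_inj Psi_in_Bprod_car Psi_surj by blast
  thus ?thesis unfolding corner_prod_iso_def using Psi_add Psi_mult Psi_scal Psi_e by simp
qed

end

context layered_algebra begin

lemma corner_prod_iso_of_orth:
  fixes I :: "'j set" and g :: "'j \<Rightarrow> 'a" and h :: "'j \<Rightarrow> 'i"
    and \<psi> :: "'j \<Rightarrow> 'a \<Rightarrow> ('i + nat) list \<Rightarrow> 'k"
  assumes "atom_at a e" "infinite I"
    "\<And>j. j \<in> I \<Longrightarrow> idem (g j) \<and> e \<otimes> g j = g j \<and> g j \<noteq> \<zero>"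
    "\<And>j j'. j \<in> I \<Longrightarrow> j' \<in> I \<Longrightarrow> j \<noteq> j' \<Longrightarrow> g j \<otimes> g j' = \<zero>"
    "\<And>j. j \<in> I \<Longrightarrow> corner_iso (g j) (h j) (\<psi> j)"
    "\<And>s. s \<in> S a \<Longrightarrow> e \<otimes> s = s \<Longrightarrow> \<exists>F. finite F \<and> F \<subseteq> I \<and> s \<otimes> finsum R g F = s"
  shows "\<exists>\<Psi>. corner_prod_iso e I h \<Psi>"
proof -
  interpret orth_corner_family R sm r S \<sigma> a e I g h \<psi>
    by unfold_locales (use assms in blast)+
  show ?thesis using corner_prod_iso_Psi by blast
qed

definition enc_succ :: "(nat \<Rightarrow> ('i + nat) list \<Rightarrow> 'k) \<Rightarrow> ('i + nat) list \<Rightarrow> 'k" where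
  "enc_succ Z p = (case p of [] \<Rightarrow> 0 | t # q \<Rightarrow> (case t of Inl _ \<Rightarrow> 0 | Inr m \<Rightarrow> Z m q))"

definition enc_lim :: "('i \<Rightarrow> ('i + nat) list \<Rightarrow> 'k) \<Rightarrow> ('i + nat) list \<Rightarrow> 'k" where
  "enc_lim Z p = (case p of [] \<Rightarrow> 0 | t # q \<Rightarrow> (case t of Inl b \<Rightarrow> Z b q | Inr _ \<Rightarrow> 0))"

lemma enc_succ_Inr[simp]: "enc_succ Z (Inr m # q) = Z m q" unfolding enc_succ_def by simp
lemma enc_succ_other: "\<not> (\<exists>m q. p = Inr m # q) \<Longrightarrow> enc_succ Z p = 0"
  unfolding enc_succ_def by (cases p) (auto split: sum.split)
lemma enc_lim_Inl[simp]: "enc_lim Z (Inl b # q) = Z b q" unfolding enc_lim_def by simp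
lemma enc_lim_other: "\<not> (\<exists>b q. p = Inl b # q) \<Longrightarrow> enc_lim Z p = 0"
  unfolding enc_lim_def by (cases p) (auto split: sum.split)

lemma enc_succ_bij: assumes ba: "is_succ_of r b a"
  shows "bij_betw enc_succ (Bprod_car (UNIV :: nat set) (\<lambda>_. b)) {z. Bcar r a z}"
proof -
  have inj: "inj_on enc_succ (Bprod_car (UNIV :: nat set) (\<lambda>_. b))"
  proof (rule inj_onI)
    fix Z Z' :: "nat \<Rightarrow> ('i + nat) list \<Rightarrow> 'k" assume "enc_succ Z = enc_succ Z'"
    hence "\<And>m q. Z m q = Z' m q" by (metis enc_succ_Inr)
    thus "Z = Z'" by (intro ext)
  qed
  have into: "enc_succ Z \<in> {z. Bcar r a z}" if Z: "Z \<in> Bprod_car (UNIV :: nat set) (\<lambda>_. b)" for Z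
  proof -
    have Zb: "\<forall>m. Bcar r b (Z m)" and Zf: "\<exists>c. finite {m. Z m \<noteq> (\<lambda>q. c * Bone r b q)}"
      using Z unfolding Bprod_car_def by auto
    have e1: "(\<lambda>q. enc_succ Z (Inr m # q)) = Z m" for m by (simp add: fun_eq_iff)
    have v: "\<forall>p. (\<not> (\<exists>m q. p = Inr m # q)) \<longrightarrow> enc_succ Z p = 0" using enc_succ_other by blast
    show ?thesis unfolding mem_Collect_eq Bcar_succ_iff[OF ba] e1 using v Zb Zf by blast
  qed
  have onto: "{z. Bcar r a z} \<subseteq> enc_succ ` Bprod_car (UNIV :: nat set) (\<lambda>_. b)"
  proof
    fix z :: "('i + nat) list \<Rightarrow> 'k" assume "z \<in> {z. Bcar r a z}"
    hence z: "(\<forall>p. (\<not> (\<exists>m q. p = Inr m # q)) \<longrightarrow> z p = 0) \<and>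
     (\<forall>m. Bcar r b (\<lambda>q. z (Inr m # q))) \<and>
     (\<exists>c. finite {m. (\<lambda>q. z (Inr m # q)) \<noteq> (\<lambda>q. c * Bone r b q)})" using Bcar_succ_iff[OF ba, of z] by blast
    define Z where "Z = (\<lambda>m q. z (Inr m # q))"
    have "Z \<in> Bprod_car (UNIV :: nat set) (\<lambda>_. b)" unfolding Bprod_car_def Z_def using z by simp
    moreover have "enc_succ Z = z"
    proof
      fix p show "enc_succ Z p = z p"
      proof (cases "\<exists>m q. p = Inr m # q")
        case True thus ?thesis unfolding Z_def by auto
      next
        case False thus ?thesis using z enc_succ_other by simp
      qed
    qed
    ultimately show "z \<in> enc_succ ` Bprod_car (UNIV :: nat set) (\<lambda>_. b)" by blast
  qed
  show ?thesis unfolding bij_betw_def using inj into onto by blast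
qed

lemma enc_lim_bij: assumes al: "is_limit_pt r a"
  shows "bij_betw enc_lim (Bprod_car {b. lt b a} id) {z. Bcar r a z}"
proof -
  have inj: "inj_on enc_lim (Bprod_car {b. lt b a} id)"
  proof (rule inj_onI)
    fix Z Z' :: "'i \<Rightarrow> ('i + nat) list \<Rightarrow> 'k" assume "enc_lim Z = enc_lim Z'"
    hence "\<And>m q. Z m q = Z' m q" by (metis enc_lim_Inl)
    thus "Z = Z'" by (intro ext)
  qed
  have into: "enc_lim Z \<in> {z. Bcar r a z}" if Z: "Z \<in> Bprod_car {b. lt b a} id" for Z
  proof -
    have "\<forall>b. lt b a \<longrightarrow> Bcar r b (Z b)" and "\<exists>c. finite {b. lt b a \<and> Z b \<noteq> (\<lambda>q. c * Bone r b q)}"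
      and Z0: "\<forall>b. \<not> lt b a \<longrightarrow> Z b = (\<lambda>p. 0)"
      using Z unfolding Bprod_car_def by auto
    moreover have e1: "(\<lambda>q. enc_lim Z (Inl b # q)) = Z b" for b by (simp add: fun_eq_iff)
    moreover have "\<forall>p::('i + nat) list. (\<not> (\<exists>b q. lt b a \<and> p = Inl b # q)) \<longrightarrow> enc_lim Z p = 0"
    proof (intro allI impI)
      fix p :: "('i + nat) list" assume np: "\<not> (\<exists>b q. lt b a \<and> p = Inl b # q)"
      show "enc_lim Z p = 0"
      proof (cases "\<exists>b q. p = Inl b # q")
        case True
        then obtain b q where p: "p = Inl b # q" by blast
        hence "\<not> lt b a" using np by blast
        thus ?thesis using Z0 p by simp
      next
        case False thus ?thesis using enc_lim_other by simp
      qed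
    qed
    ultimately show ?thesis unfolding mem_Collect_eq Bcar_lim_iff[OF al] e1 by blast
  qed
  have onto: "{z. Bcar r a z} \<subseteq> enc_lim ` Bprod_car {b. lt b a} id"
  proof
    fix z :: "('i + nat) list \<Rightarrow> 'k" assume "z \<in> {z. Bcar r a z}"
    hence z: "(\<forall>p. (\<not> (\<exists>b q. lt b a \<and> p = Inl b # q)) \<longrightarrow> z p = 0) \<and>
     (\<forall>b. lt b a \<longrightarrow> Bcar r b (\<lambda>q. z (Inl b # q))) \<and>
     (\<exists>c. finite {b. lt b a \<and> (\<lambda>q. z (Inl b # q)) \<noteq> (\<lambda>q. c * Bone r b q)})" using Bcar_lim_iff[OF al, of z] by blast
    define Z where "Z = (\<lambda>b q. if lt b a then z (Inl b # q) else 0)"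
    have "Z \<in> Bprod_car {b. lt b a} id" unfolding Bprod_car_def Z_def using z by (simp cong: conj_cong)
    moreover have "enc_lim Z = z"
    proof
      fix p show "enc_lim Z p = z p"
      proof (cases "\<exists>b q. p = Inl b # q")
        case True
        then obtain b q where p: "p = Inl b # q" by blast
        show ?thesis
        proof (cases "lt b a")
          case True thus ?thesis unfolding Z_def p by simp
        next
          case False
          have "\<not> (\<exists>b' q'. lt b' a \<and> p = Inl b' # q')" using False p by blast
          hence "z p = 0" using z by blast
          thus ?thesis unfolding Z_def p using False by simp
        qed
      next
        case False thus ?thesis using z enc_lim_other by auto
      qed
    qed
    ultimately show "z \<in> enc_lim ` Bprod_car {b. lt b a} id" by blast
  qed
  show ?thesis unfolding bij_betw_def using inj into onto by blast
qed

lemma corner_iso_of_prod_succ: assumes ba: "is_succ_of r b a" and P: "corner_prod_iso e (UNIV :: nat set) (\<lambda>_. b) \<Psi>"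
  shows "corner_iso e a (\<lambda>x. enc_succ (\<Psi> x))"
proof -
  have bij: "bij_betw \<Psi> (corner e) (Bprod_car (UNIV :: nat set) (\<lambda>_. b))" using P unfolding corner_prod_iso_def by blast
  have "bij_betw (enc_succ \<circ> \<Psi>) (corner e) {z. Bcar r a z}" using bij_betw_trans[OF bij enc_succ_bij[OF ba]] .
  hence b1: "bij_betw (\<lambda>x. enc_succ (\<Psi> x)) (corner e) {z. Bcar r a z}" by (simp add: comp_def)
  have enc_succ_add: "enc_succ (\<lambda>j p. Z j p + Z' j p) = (\<lambda>p. enc_succ Z p + enc_succ Z' p)" for Z Z'
    unfolding enc_succ_def by (auto split: list.split sum.split)
  have enc_succ_mult: "enc_succ (\<lambda>j p. Z j p * Z' j p) = (\<lambda>p. enc_succ Z p * enc_succ Z' p)" for Z Z'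
    unfolding enc_succ_def by (auto split: list.split sum.split)
  have enc_succ_km: "enc_succ (\<lambda>j p. c * Z j p) = (\<lambda>p. c * enc_succ Z p)" for Z c
    unfolding enc_succ_def by (auto split: list.split sum.split)
  have "enc_succ (\<lambda>j. Bone r b) = Bone r a"
  proof
    fix p show "enc_succ (\<lambda>j. Bone r b) p = Bone r a p"
    proof (cases "\<exists>m q. p = Inr m # q")
      case True
      then obtain m q where p: "p = Inr m # q" by blast
      show ?thesis unfolding p enc_succ_Inr Bone_succ_Inr[OF ba] ..
    next
      case False thus ?thesis using Bone_succ_other[OF ba] enc_succ_other by simp
    qed
  qed
  thus ?thesis using P b1 enc_succ_add enc_succ_mult enc_succ_km unfolding corner_prod_iso_def corner_iso_def by simp
qed

lemma corner_iso_of_prod_lim: assumes al: "is_limit_pt r a" and P: "corner_prod_iso e {b. lt b a} id \<Psi>"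
  shows "corner_iso e a (\<lambda>x. enc_lim (\<Psi> x))"
proof -
  have bij: "bij_betw \<Psi> (corner e) (Bprod_car {b. lt b a} id)" using P unfolding corner_prod_iso_def by blast
  have "bij_betw (enc_lim \<circ> \<Psi>) (corner e) {z. Bcar r a z}" using bij_betw_trans[OF bij enc_lim_bij[OF al]] .
  hence b1: "bij_betw (\<lambda>x. enc_lim (\<Psi> x)) (corner e) {z. Bcar r a z}" by (simp add: comp_def)
  have enc_lim_add: "enc_lim (\<lambda>j p. Z j p + Z' j p) = (\<lambda>p. enc_lim Z p + enc_lim Z' p)" for Z Z'
    unfolding enc_lim_def by (auto split: list.split sum.split)
  have enc_lim_mult: "enc_lim (\<lambda>j p. Z j p * Z' j p) = (\<lambda>p. enc_lim Z p * enc_lim Z' p)" for Z Z'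
    unfolding enc_lim_def by (auto split: list.split sum.split)
  have enc_lim_km: "enc_lim (\<lambda>j p. c * Z j p) = (\<lambda>p. c * enc_lim Z p)" for Z c
    unfolding enc_lim_def by (auto split: list.split sum.split)
  have "enc_lim (\<lambda>j. if j \<in> {b. lt b a} then Bone r (id j) else (\<lambda>p. 0)) = Bone r a"
  proof
    fix p show "enc_lim (\<lambda>j. if j \<in> {b. lt b a} then Bone r (id j) else (\<lambda>p. 0)) p = Bone r a p"
    proof (cases "\<exists>b q. p = Inl b # q")
      case True
      then obtain b q where p: "p = Inl b # q" by blast
      show ?thesis
      proof (cases "lt b a")
        case True thus ?thesis unfolding p enc_lim_Inl Bone_lim_Inl[OF al True] by simp
      next
        case False
        have "Bone r a p = (0::'k)" using Bone_lim_other[OF al] False p by blast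
        thus ?thesis unfolding p enc_lim_Inl using False by simp
      qed
    next
      case False
      have "Bone r a p = (0::'k)" using Bone_lim_other[OF al] False by blast
      thus ?thesis using enc_lim_other False by simp
    qed
  qed
  thus ?thesis using P b1 enc_lim_add enc_lim_mult enc_lim_km unfolding corner_prod_iso_def corner_iso_def by simp
qed

lemma corner_iso_zero: assumes az: "is_zero_pt r a" and e: "atom_at a e" shows "\<exists>\<psi>. corner_iso e a \<psi>"
proof -
  have aF: "a \<in> Field r" and ei: "idem e" and eT: "e \<in> Snext a" using e unfolding atom_at_def by auto
  obtain i where iL: "i \<in> basis_idx a" and pe: "coord a e = unit_vec i" using atom_at_coord[OF e] by blast
  have ec: "e \<in> carrier R" using idem_carr[OF ei] .
  have cT: "x \<in> Snext a" if xc: "x \<in> corner e" for x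
    using corner_D[OF xc] Snext_multr[OF aF eT] by metis
  have rep: "x = scal (coord a x i) \<otimes> e" if xc: "x \<in> corner e" for x
  proof -
    obtain c where "x \<ominus> scal c \<otimes> e \<in> S a" using corner_congruent_scalar[OF e xc] by blast
    hence "x \<ominus> scal c \<otimes> e = \<zero>" using S_zero[OF az] by simp
    hence xe: "x = scal c \<otimes> e" using corner_D[OF xc] ec
      by (metis a_minus_def add.inv_closed scal_closed m_closed minus_equality add.inv_eq_1_iff minus_minus)
    have "coord a x i = c" using xe coord_scal[OF aF eT, of c] pe unfolding unit_vec_def by simp
    thus ?thesis using xe by simp
  qed
  define \<psi> where "\<psi> x = (\<lambda>p::('i + nat) list. if p = [] then coord a x i else 0)" for x
  have inj: "inj_on \<psi> (corner e)"
  proof (rule inj_onI)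
    fix x y assume xc: "x \<in> corner e" and yc: "y \<in> corner e" and "\<psi> x = \<psi> y"
    hence "coord a x i = coord a y i" unfolding \<psi>_def by (metis (mono_tags))
    thus "x = y" using rep[OF xc] rep[OF yc] by simp
  qed
  have into: "\<psi> x \<in> {z. Bcar r a z}" for x unfolding mem_Collect_eq Bcar_zero_iff[OF az] \<psi>_def by simp
  have onto: "{z. Bcar r a z} \<subseteq> \<psi> ` corner e"
  proof
    fix z :: "('i + nat) list \<Rightarrow> 'k" assume "z \<in> {z. Bcar r a z}"
    hence z0: "\<forall>p. p \<noteq> [] \<longrightarrow> z p = 0" using Bcar_zero_iff[OF az, of z] by simp
    define x where "x = scal (z []) \<otimes> e"
    have "e \<otimes> (scal (z []) \<otimes> e) = scal (z []) \<otimes> (e \<otimes> e)" using ec scal_closed by algebra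
    hence xc: "x \<in> corner e" unfolding x_def using ec idem_sq[OF ei]
      by (intro corner_I) simp_all
    have "coord a x i = z []" unfolding x_def using coord_scal[OF aF eT] pe unfolding unit_vec_def by simp
    hence "\<psi> x = z" unfolding \<psi>_def using z0 by (auto simp: fun_eq_iff)
    thus "z \<in> \<psi> ` corner e" using xc by blast
  qed
  have bij: "bij_betw \<psi> (corner e) {z. Bcar r a z}" unfolding bij_betw_def using inj into onto by blast
  have "corner_iso e a \<psi>" unfolding corner_iso_def
  proof (intro conjI ballI allI)
    show "bij_betw \<psi> (corner e) {z. Bcar r a z}" by (rule bij)
    fix x y assume xc: "x \<in> corner e" and yc: "y \<in> corner e"
    show "\<psi> (x \<oplus> y) = (\<lambda>p. \<psi> x p + \<psi> y p)" unfolding \<psi>_def using coord_add[OF aF cT[OF xc] cT[OF yc]] by auto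
    show "\<psi> (x \<otimes> y) = (\<lambda>p. \<psi> x p * \<psi> y p)" unfolding \<psi>_def using coord_mult[OF aF cT[OF xc] cT[OF yc]] by auto
  next
    fix c x assume xc: "x \<in> corner e"
    show "\<psi> (scal c \<otimes> x) = (\<lambda>p. c * \<psi> x p)" unfolding \<psi>_def using coord_scal[OF aF cT[OF xc]] by auto
  next
    have bz: "Bone r a p = (if p = [] then (1::'k) else 0)" for p by (rule Bone_zero[OF az])
    have "Bone r a = (\<lambda>p. if p = [] then (1::'k) else 0)" using bz by (simp add: fun_eq_iff)
    thus "\<psi> e = Bone r a" unfolding \<psi>_def using pe unfolding unit_vec_def by (auto simp: fun_eq_iff)
  qed
  thus ?thesis by blast
qed

section \<open>Transfinite construction of the corner isomorphisms\<close>

lemma idem_below_complement: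
  assumes e: "idem e" and G: "idem G" and eG: "e \<otimes> G = G" and vc: "v \<in> carrier R"
    and ev: "(e \<ominus> G) \<otimes> v = v"
  shows "G \<otimes> v = \<zero>" and "e \<otimes> v = v"
proof -
  have ec: "e \<in> carrier R" and Gc: "G \<in> carrier R" using e G idem_carr by auto
  have f0G: "(e \<ominus> G) \<otimes> G = \<zero>" and ef0: "e \<otimes> (e \<ominus> G) = e \<ominus> G"
    using idem_minus[OF e G eG] by auto
  have "G \<otimes> v = G \<otimes> ((e \<ominus> G) \<otimes> v)" using ev by simp
  also have "\<dots> = ((e \<ominus> G) \<otimes> G) \<otimes> v" using ec Gc vc by algebra
  finally show "G \<otimes> v = \<zero>" using f0G vc by simp
  have "e \<otimes> v = e \<otimes> ((e \<ominus> G) \<otimes> v)" using ev by simp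
  also have "\<dots> = (e \<otimes> (e \<ominus> G)) \<otimes> v" using ec Gc vc by algebra
  finally show "e \<otimes> v = v" using ef0 ev by simp
qed

lemma mult_absorb_add:
  assumes "X \<in> carrier R" "X \<otimes> G = X" "G \<in> carrier R" "v \<in> carrier R" "G \<otimes> v = \<zero>"
  shows "X \<otimes> (G \<oplus> v) = X"
proof -
  have "X \<otimes> v = X \<otimes> (G \<otimes> v)" using assms m_assoc[of X G v] by simp
  hence "X \<otimes> v = \<zero>" using assms by simp
  thus ?thesis using assms by (simp add: r_distr)
qed

lemma atom_extend: assumes bF: "b \<in> Field r" and f: "idem f" and d: "idem d" and fd: "f \<otimes> d = d"
    and dS: "d \<in> S b" and w: "atom_at b w" and fw: "(f \<ominus> d) \<otimes> w = w"
  shows "atom_at b (d \<oplus> w)" "f \<otimes> (d \<oplus> w) = d \<oplus> w" "(d \<oplus> w) \<otimes> d = d"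
proof -
  have dc: "d \<in> carrier R" using idem_carr[OF d] .
  have wi: "idem w" and wT: "w \<in> Snext b" using w unfolding atom_at_def by auto
  have wc: "w \<in> carrier R" using idem_carr[OF wi] .
  have dw: "d \<otimes> w = \<zero>" and f_w: "f \<otimes> w = w" using idem_below_complement[OF f d fd wc fw] .
  have dwi: "idem (d \<oplus> w)" using idem_add[OF d wi dw] .
  have dT: "d \<in> Snext b" using S_sub_Snext[OF bF] dS by blast
  have dwT: "d \<oplus> w \<in> Snext b" using Snext_add[OF bF dT wT] .
  have "coord b d = (\<lambda>i. 0)" using coord_zero_iff[OF bF dT] dS by simp
  hence "coord b (d \<oplus> w) = coord b w" using coord_add[OF bF dT wT] by simp
  thus "atom_at b (d \<oplus> w)" using w dwi dwT unfolding atom_at_def by simp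
  show "f \<otimes> (d \<oplus> w) = d \<oplus> w" using fd f_w r_distr[OF dc wc idem_carr[OF f]] by simp
  have "(d \<oplus> w) \<otimes> d = d \<otimes> d \<oplus> d \<otimes> w" using dc wc by algebra
  thus "(d \<oplus> w) \<otimes> d = d" using dw idem_sq[OF d] dc by simp
qed

text \<open>A finite stage (F, gf, G) of the construction of an orthogonal family of atoms below e,
  with G the sum of the family so far.\<close>
definition orth_atoms :: "'a \<Rightarrow> 'i \<Rightarrow> 'j set \<Rightarrow> ('j \<Rightarrow> 'i) \<Rightarrow> 'j set \<Rightarrow> ('j \<Rightarrow> 'a) \<Rightarrow> 'a \<Rightarrow> bool" where
  "orth_atoms e \<alpha> I h F gf G \<longleftrightarrow> finite F \<and> F \<subseteq> I \<and> G = finsum R gf F \<and> idem G \<and> e \<otimes> G = G \<and> G \<in> S \<alpha> \<and>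
     (\<forall>j\<in>F. atom_at (h j) (gf j) \<and> gf j \<otimes> G = gf j \<and> e \<otimes> gf j = gf j) \<and>
     (\<forall>j\<in>F. \<forall>j'\<in>F. j \<noteq> j' \<longrightarrow> gf j \<otimes> gf j' = \<zero>)"

lemma orth_atoms_empty: assumes "idem e" "\<alpha> \<in> Field r" shows "orth_atoms e \<alpha> I h {} gf \<zero>"
  unfolding orth_atoms_def using idem_zero assms zero_in_S idem_carr by auto

lemma orth_atoms_insert: assumes inv: "orth_atoms e \<alpha> I h F gf G" and ei: "idem e" and aF: "\<alpha> \<in> Field r"
    and jF: "j \<notin> F" and jI: "j \<in> I" and v: "atom_at (h j) v" and ev: "(e \<ominus> G) \<otimes> v = v" and vS: "v \<in> S \<alpha>"
  shows "orth_atoms e \<alpha> I h (insert j F) (gf(j := v)) (G \<oplus> v)"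
    and "\<And>X. X \<in> carrier R \<Longrightarrow> X \<otimes> G = X \<Longrightarrow> X \<otimes> (G \<oplus> v) = X"
proof -
  have fin: "finite F" and FI: "F \<subseteq> I" and Gs: "G = finsum R gf F" and Gi: "idem G" and eG: "e \<otimes> G = G"
    and GS: "G \<in> S \<alpha>" and old: "\<forall>j\<in>F. atom_at (h j) (gf j) \<and> gf j \<otimes> G = gf j \<and> e \<otimes> gf j = gf j"
    and orth: "\<forall>j\<in>F. \<forall>j'\<in>F. j \<noteq> j' \<longrightarrow> gf j \<otimes> gf j' = \<zero>"
    using inv unfolding orth_atoms_def by auto
  have ec: "e \<in> carrier R" and Gc: "G \<in> carrier R" using ei Gi idem_carr by auto
  have vi: "idem v" using v unfolding atom_at_def by blast
  have vc: "v \<in> carrier R" using idem_carr[OF vi] .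
  have Gv: "G \<otimes> v = \<zero>" and ev': "e \<otimes> v = v" using idem_below_complement[OF ei Gi eG vc ev] .
  have vG: "v \<otimes> G = \<zero>" using Gv m_comm[OF vc Gc] by simp
  show Xlem: "X \<otimes> (G \<oplus> v) = X" if "X \<in> carrier R" "X \<otimes> G = X" for X
    using mult_absorb_add[OF that Gc vc Gv] .
  have gfc: "gf \<in> F \<rightarrow> carrier R" using old idem_carr unfolding atom_at_def by blast
  have "finsum R (gf(j := v)) (insert j F) = (gf(j := v)) j \<oplus> finsum R (gf(j := v)) F"
    using finsum_insert[OF fin jF] gfc jF vc by (auto simp: Pi_def)
  also have "finsum R (gf(j := v)) F = finsum R gf F"
    using jF gfc by (intro finsum_cong') auto
  finally have e1: "finsum R (gf(j := v)) (insert j F) = v \<oplus> finsum R gf F" by (simp only: fun_upd_same)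
  have fs: "G \<oplus> v = finsum R (gf(j := v)) (insert j F)" unfolding e1 using Gs a_comm[OF Gc vc] by simp
  have newi: "idem (G \<oplus> v)" using idem_add[OF Gi vi Gv] .
  have neweG: "e \<otimes> (G \<oplus> v) = G \<oplus> v" using eG ev' r_distr[OF Gc vc ec] by simp
  have newS: "G \<oplus> v \<in> S \<alpha>" using S_add[OF aF GS vS] .
  have vv: "v \<otimes> (G \<oplus> v) = v" using vG idem_sq[OF vi] r_distr[OF Gc vc vc] vc by simp
  have newold: "\<forall>k\<in>insert j F. atom_at (h k) ((gf(j := v)) k) \<and> (gf(j := v)) k \<otimes> (G \<oplus> v) = (gf(j := v)) k \<and> e \<otimes> (gf(j := v)) k = (gf(j := v)) k"
  proof
    fix k assume k: "k \<in> insert j F"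
    show "atom_at (h k) ((gf(j := v)) k) \<and> (gf(j := v)) k \<otimes> (G \<oplus> v) = (gf(j := v)) k \<and> e \<otimes> (gf(j := v)) k = (gf(j := v)) k"
    proof (cases "k = j")
      case True thus ?thesis using v vv ev' by simp
    next
      case False
      hence kF: "k \<in> F" using k by blast
      have "gf k \<in> carrier R" using gfc kF by blast
      thus ?thesis using False old kF Xlem by simp
    qed
  qed
  have neworth: "\<forall>k\<in>insert j F. \<forall>k'\<in>insert j F. k \<noteq> k' \<longrightarrow> (gf(j := v)) k \<otimes> (gf(j := v)) k' = \<zero>"
  proof (intro ballI impI)
    fix k k' assume k: "k \<in> insert j F" and k': "k' \<in> insert j F" and kk: "k \<noteq> k'"
    have vg: "v \<otimes> gf l = \<zero>" if lF: "l \<in> F" for l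
    proof -
      have gl: "gf l \<otimes> G = gf l" and glc: "gf l \<in> carrier R" using old lF gfc by auto
      have "v \<otimes> gf l = v \<otimes> (gf l \<otimes> G)" using gl by simp
      also have "\<dots> = gf l \<otimes> (v \<otimes> G)" using vc glc Gc by algebra
      finally show ?thesis using vG glc by simp
    qed
    show "(gf(j := v)) k \<otimes> (gf(j := v)) k' = \<zero>"
    proof (cases "k = j")
      case True
      hence "k' \<in> F" "k' \<noteq> j" using k' kk by auto
      thus ?thesis using True vg by simp
    next
      case False
      hence kF: "k \<in> F" using k by blast
      show ?thesis
      proof (cases "k' = j")
        case True
        have "gf k \<in> carrier R" using gfc kF by blast
        thus ?thesis using True False vg[OF kF] m_comm[OF vc] by simp
      next
        case False2: False
        hence "k' \<in> F" using k' by blast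
        thus ?thesis using orth kF kk False False2 by simp
      qed
    qed
  qed
  show "orth_atoms e \<alpha> I h (insert j F) (gf(j := v)) (G \<oplus> v)"
    unfolding orth_atoms_def using fin FI jI fs newi neweG newS newold neworth by auto
qed

lemma orth_atoms_absorb: assumes inv: "orth_atoms e \<alpha> I h F gf G" and ei: "idem e" and cc: "c \<in> carrier R"
    and vc: "v \<in> carrier R" and ev: "(e \<ominus> G) \<otimes> v = v" and vd: "v \<otimes> (c \<otimes> (e \<ominus> G)) = c \<otimes> (e \<ominus> G)"
  shows "c \<otimes> e \<otimes> (G \<oplus> v) = c \<otimes> e"
proof -
  have Gi: "idem G" and eG: "e \<otimes> G = G" using inv unfolding orth_atoms_def by auto
  have ec: "e \<in> carrier R" and Gc: "G \<in> carrier R" using ei Gi idem_carr by auto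
  have ef0: "e \<otimes> (e \<ominus> G) = e \<ominus> G" using idem_minus[OF ei Gi eG] by auto
  have "c \<otimes> e \<otimes> v = c \<otimes> (e \<otimes> (e \<ominus> G)) \<otimes> v"
  proof -
    have "c \<otimes> e \<otimes> v = c \<otimes> e \<otimes> ((e \<ominus> G) \<otimes> v)" using ev by simp
    also have "\<dots> = c \<otimes> (e \<otimes> (e \<ominus> G)) \<otimes> v" using cc ec Gc vc by algebra
    finally show ?thesis .
  qed
  also have "\<dots> = v \<otimes> (c \<otimes> (e \<ominus> G))" using ef0 cc ec Gc vc by (simp add: m_ac)
  also have "\<dots> = c \<otimes> (e \<ominus> G)" using vd .
  finally have cev: "c \<otimes> e \<otimes> v = c \<otimes> (e \<ominus> G)" .
  have "c \<otimes> e \<otimes> (G \<oplus> v) = c \<otimes> e \<otimes> G \<oplus> c \<otimes> e \<otimes> v" using cc ec Gc vc by algebra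
  also have "\<dots> = c \<otimes> (e \<otimes> G) \<oplus> c \<otimes> (e \<ominus> G)" using cev cc ec Gc by (simp add: m_assoc)
  also have "\<dots> = c \<otimes> G \<oplus> c \<otimes> (e \<ominus> G)" using eG by simp
  also have "\<dots> = c \<otimes> e" using cc ec Gc by algebra
  finally show ?thesis .
qed

lemma basis_seq_carr: assumes "\<alpha> \<in> Field r" shows "basis_seq \<alpha> k \<in> carrier R"
proof -
  have "basis_seq \<alpha> k \<in> insert \<zero> (basis_below \<alpha>)" using basis_seq_range[of \<alpha>] by blast
  moreover have "basis_below \<alpha> \<subseteq> carrier R" unfolding basis_below_def using basis_idem_carr lt_Field by blast
  ultimately show ?thesis using zero_closed by (metis insertE subsetD)
qed

lemma corner_prod_iso_of_exhaustion:
  fixes I :: "'j set" and h :: "'j \<Rightarrow> 'i" and FF :: "nat \<Rightarrow> 'j set" and gg :: "nat \<Rightarrow> 'j \<Rightarrow> 'a"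
    and GG :: "nat \<Rightarrow> 'a"
  assumes e: "atom_at \<alpha> e" and Iinf: "infinite I"
    and inv: "\<And>m. orth_atoms e \<alpha> I h (FF m) (gg m) (GG m)"
    and mono: "\<And>m. FF m \<subseteq> FF (Suc m)"
    and stab: "\<And>m j. j \<in> FF m \<Longrightarrow> gg (Suc m) j = gg m j"
    and exh: "\<And>j. j \<in> I \<Longrightarrow> \<exists>m. j \<in> FF m"
    and cov: "\<And>m k. k < m \<Longrightarrow> basis_seq \<alpha> k \<otimes> e \<otimes> GG m = basis_seq \<alpha> k \<otimes> e"
    and IH: "\<And>j g. j \<in> I \<Longrightarrow> atom_at (h j) g \<Longrightarrow> \<exists>\<psi>. corner_iso g (h j) \<psi>"
  shows "\<exists>\<Psi>. corner_prod_iso e I h \<Psi>"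
proof -
  have aF: "\<alpha> \<in> Field r" and ei: "idem e" using e unfolding atom_at_def by auto
  have ec: "e \<in> carrier R" using idem_carr[OF ei] .
  have monoN: "FF m \<subseteq> FF m'" if "m \<le> m'" for m m'
    using that by (induction rule: dec_induct) (use mono in blast)+
  have stabN: "gg m' j = gg m j" if "j \<in> FF m" "m \<le> m'" for m m' j
    using that(2,1)
  proof (induction rule: dec_induct)
    case base thus ?case by simp
  next
    case (step n) thus ?case using stab monoN by (metis subsetD)
  qed
  define mj where "mj j = (SOME m. j \<in> FF m)" for j
  define gfin where "gfin j = gg (mj j) j" for j
  have mjF: "j \<in> FF (mj j)" if jI: "j \<in> I" for j
    unfolding mj_def using exh[OF jI] by (rule someI_ex)
  have gfin_eq: "gfin j = gg M j" if jI: "j \<in> I" and jM: "j \<in> FF M" for j M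
  proof -
    have "gg (max (mj j) M) j = gg (mj j) j" by (rule stabN[OF mjF[OF jI] max.cobounded1])
    moreover have "gg (max (mj j) M) j = gg M j" by (rule stabN[OF jM max.cobounded2])
    ultimately show ?thesis unfolding gfin_def by simp
  qed
  have gprops: "atom_at (h j) (gfin j) \<and> e \<otimes> gfin j = gfin j" if jI: "j \<in> I" for j
    using inv[of "mj j"] mjF[OF jI] unfolding orth_atoms_def gfin_def by blast
  have g: "idem (gfin j) \<and> e \<otimes> gfin j = gfin j \<and> gfin j \<noteq> \<zero>" if jI: "j \<in> I" for j
  proof -
    have t: "atom_at (h j) (gfin j)" using gprops[OF jI] by blast
    have "h j \<in> Field r" using t unfolding atom_at_def by blast
    hence "gfin j \<noteq> \<zero>" using atom_at_notS[OF t] zero_in_S by metis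
    thus ?thesis using gprops[OF jI] t unfolding atom_at_def by blast
  qed
  have orth: "gfin j \<otimes> gfin j' = \<zero>" if jI: "j \<in> I" and j'I: "j' \<in> I" and jj: "j \<noteq> j'" for j j'
  proof -
    define M where "M = max (mj j) (mj j')"
    have jM: "j \<in> FF M" using monoN[of "mj j" M] mjF[OF jI] unfolding M_def by auto
    have j'M: "j' \<in> FF M" using monoN[of "mj j'" M] mjF[OF j'I] unfolding M_def by auto
    have "gg M j \<otimes> gg M j' = \<zero>" using inv[of M] jM j'M jj unfolding orth_atoms_def by blast
    thus ?thesis using gfin_eq[OF jI jM] gfin_eq[OF j'I j'M] by simp
  qed
  define \<psi> where "\<psi> j = (SOME \<psi>. corner_iso (gfin j) (h j) \<psi>)" for j
  have iso: "corner_iso (gfin j) (h j) (\<psi> j)" if jI: "j \<in> I" for j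
    unfolding \<psi>_def using IH[OF jI gprops[OF jI, THEN conjunct1]] by (rule someI_ex)
  have cover: "\<exists>F. finite F \<and> F \<subseteq> I \<and> s \<otimes> finsum R gfin F = s" if sS: "s \<in> S \<alpha>" and es: "e \<otimes> s = s" for s
  proof -
    have sc: "s \<in> carrier R" using S_carrI[OF aF sS] .
    have "s \<in> rspan (basis_below \<alpha>)" using S_in_rspan[OF aF sS] .
    moreover have "basis_below \<alpha> \<subseteq> range (basis_seq \<alpha>)" using basis_seq_range[of \<alpha>] by blast
    ultimately obtain M where sM: "s \<in> rspan (basis_seq \<alpha> ` {..<M})" using rspan_finite_prefix by blast
    have Gc: "GG M \<in> carrier R" using inv[of M] idem_carr unfolding orth_atoms_def by blast
    have "s \<otimes> GG M = (e \<otimes> s) \<otimes> GG M" using es by simp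
    also have "\<dots> = s \<otimes> e \<otimes> GG M" using m_comm[OF ec sc] by simp
    also have "\<dots> = s \<otimes> e"
      using rspan_mult_absorbed[OF sM _ ec Gc] basis_seq_carr[OF aF] cov by blast
    also have "\<dots> = s" using es m_comm[OF ec sc] by simp
    finally have sG: "s \<otimes> GG M = s" .
    have fin: "finite (FF M)" and FI: "FF M \<subseteq> I" and Gs: "GG M = finsum R (gg M) (FF M)"
      using inv[of M] unfolding orth_atoms_def by auto
    have "finsum R (gg M) (FF M) = finsum R gfin (FF M)"
    proof (intro finsum_cong')
      show "gfin \<in> FF M \<rightarrow> carrier R" using g FI idem_carr by blast
      fix j assume "j \<in> FF M" thus "gg M j = gfin j" using gfin_eq FI by auto
    qed simp
    thus ?thesis using sG Gs fin FI by auto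
  qed
  show ?thesis by (rule corner_prod_iso_of_orth[OF e Iinf g orth iso cover])
qed

definition atom_under :: "'i \<Rightarrow> 'a \<Rightarrow> 'a" where "atom_under b f = (SOME w. atom_at b w \<and> f \<otimes> w = w)"

lemma atom_under: assumes "b \<in> Field r" "idem f" "f \<notin> S b" shows "atom_at b (atom_under b f) \<and> f \<otimes> atom_under b f = atom_under b f"
proof -
  have "\<exists>w. atom_at b w \<and> f \<otimes> w = w" using exists_atom_under[OF assms] .
  hence "(\<lambda>w. atom_at b w \<and> f \<otimes> w = w) (SOME w. atom_at b w \<and> f \<otimes> w = w)" by (rule someI_ex[of "\<lambda>w. atom_at b w \<and> f \<otimes> w = w"])
  hence "atom_at b (SOME w. atom_at b w \<and> f \<otimes> w = w) \<and> f \<otimes> (SOME w. atom_at b w \<and> f \<otimes> w = w) = (SOME w. atom_at b w \<and> f \<otimes> w = w)" by (simp only:)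
  thus ?thesis by (simp only: atom_under_def)
qed

lemma basis_seq_props: assumes "\<alpha> \<in> Field r"
  shows "idem (basis_seq \<alpha> k) \<and> (basis_seq \<alpha> k = \<zero> \<or> (\<exists>b i. lt b \<alpha> \<and> i \<in> basis_idx b \<and> basis_seq \<alpha> k = basis_idem b i))"
proof -
  have "basis_seq \<alpha> k \<in> insert \<zero> (basis_below \<alpha>)" using basis_seq_range[of \<alpha>] by blast
  thus ?thesis
  proof
    assume "basis_seq \<alpha> k = \<zero>" thus ?thesis using idem_zero by simp
  next
    assume "basis_seq \<alpha> k \<in> basis_below \<alpha>"
    then obtain b i where "lt b \<alpha>" "i \<in> basis_idx b" "basis_seq \<alpha> k = basis_idem b i" using basis_below_props by blast
    moreover have "idem (basis_idem b i)" using basis_idem[OF lt_Field[OF \<open>lt b \<alpha>\<close>, THEN conjunct1] \<open>i \<in> basis_idx b\<close>] by blast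
    ultimately show ?thesis by auto
  qed
qed

lemma diff_notin_S: assumes aF: "\<alpha> \<in> Field r" and eS: "e \<notin> S \<alpha>" and ec: "e \<in> carrier R" and yS: "y \<in> S \<alpha>"
  shows "e \<ominus> y \<notin> S \<alpha>"
proof
  assume "e \<ominus> y \<in> S \<alpha>"
  hence "(e \<ominus> y) \<oplus> y \<in> S \<alpha>" using S_add[OF aF _ yS] by blast
  moreover have "(e \<ominus> y) \<oplus> y = e" using ec S_carrI[OF aF yS] by algebra
  ultimately show False using eS by simp
qed

lemma orth_atoms_cover_step:
  assumes inv: "orth_atoms e \<alpha> I h F gf G" and e: "atom_at \<alpha> e"
    and jF: "j \<notin> F" and jI: "j \<in> I" and j\<alpha>: "lt (h j) \<alpha>"
    and ci: "idem c" and dS: "c \<otimes> (e \<ominus> G) \<in> S (h j)"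
  shows "\<exists>v. orth_atoms e \<alpha> I h (insert j F) (gf(j := v)) (G \<oplus> v) \<and>
    (\<forall>X\<in>carrier R. X \<otimes> G = X \<longrightarrow> X \<otimes> (G \<oplus> v) = X) \<and> c \<otimes> e \<otimes> (G \<oplus> v) = c \<otimes> e"
proof -
  have aF: "\<alpha> \<in> Field r" and ei: "idem e" using e unfolding atom_at_def by auto
  have ec: "e \<in> carrier R" using idem_carr[OF ei] .
  have Gi: "idem G" and eG: "e \<otimes> G = G" and GS: "G \<in> S \<alpha>" using inv unfolding orth_atoms_def by auto
  have Gc: "G \<in> carrier R" using idem_carr[OF Gi] .
  define b where "b = h j"
  have bF: "b \<in> Field r" and b\<alpha>: "lt b \<alpha>" using lt_Field[OF j\<alpha>] j\<alpha> unfolding b_def by auto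
  define f0 where "f0 = e \<ominus> G"
  have f0i: "idem f0" unfolding f0_def using idem_minus[OF ei Gi eG] by blast
  have f0c: "f0 \<in> carrier R" using idem_carr[OF f0i] .
  have cc: "c \<in> carrier R" using idem_carr[OF ci] .
  define d where "d = c \<otimes> f0"
  have di: "idem d" unfolding d_def using idem_mult[OF ci f0i] .
  have dc: "d \<in> carrier R" using idem_carr[OF di] .
  have dSb: "d \<in> S b" using dS unfolding d_def f0_def b_def .
  have "f0 \<otimes> d = c \<otimes> (f0 \<otimes> f0)" unfolding d_def using cc f0c by algebra
  hence f0d: "f0 \<otimes> d = d" using idem_sq[OF f0i] unfolding d_def by simp
  have f1S: "f0 \<ominus> d \<notin> S b"
  proof
    assume "f0 \<ominus> d \<in> S b"
    hence "f0 \<ominus> d \<in> S \<alpha>" using S_mono[OF b\<alpha>] by blast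
    moreover have "f0 \<ominus> d = e \<ominus> (G \<oplus> d)" unfolding f0_def using ec Gc dc by algebra
    moreover have "G \<oplus> d \<in> S \<alpha>" using S_add[OF aF GS] dSb S_mono[OF b\<alpha>] by blast
    ultimately show False using diff_notin_S[OF aF atom_at_notS[OF e] ec] by metis
  qed
  define v where "v = d \<oplus> atom_under b (f0 \<ominus> d)"
  have v: "atom_at b v" "f0 \<otimes> v = v" "v \<otimes> d = d"
    unfolding v_def using atom_extend[OF bF f0i di f0d dSb]
      atom_under[OF bF idem_minus(1)[OF f0i di f0d] f1S] by blast+
  have vS: "v \<in> S \<alpha>" using v(1) Snext_sub_S[OF b\<alpha>] unfolding atom_at_def by blast
  have vc: "v \<in> carrier R" using v(1) idem_carr unfolding atom_at_def by blast
  show ?thesis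
    using orth_atoms_insert[OF inv ei aF jF jI _ _ vS] orth_atoms_absorb[OF inv ei cc vc] v
    unfolding b_def f0_def d_def by blast
qed

lemma orth_atoms_add_index:
  assumes inv: "orth_atoms e \<alpha> I h F gf G" and e: "atom_at \<alpha> e"
    and jI: "j \<in> I" and j\<alpha>: "lt (h j) \<alpha>"
  shows "\<exists>gf' G'. orth_atoms e \<alpha> I h (insert j F) gf' G' \<and> (\<forall>k\<in>F. gf' k = gf k) \<and>
    (\<forall>X\<in>carrier R. X \<otimes> G = X \<longrightarrow> X \<otimes> G' = X)"
proof (cases "j \<in> F")
  case True
  thus ?thesis using inv by (intro exI[of _ gf] exI[of _ G]) (simp add: insert_absorb)
next
  case False
  have "\<zero> \<otimes> (e \<ominus> G) \<in> S (h j)"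
    using inv e zero_in_S lt_Field[OF j\<alpha>] idem_carr unfolding orth_atoms_def atom_at_def by auto
  then obtain v where "orth_atoms e \<alpha> I h (insert j F) (gf(j := v)) (G \<oplus> v)"
      "\<forall>X\<in>carrier R. X \<otimes> G = X \<longrightarrow> X \<otimes> (G \<oplus> v) = X"
    using orth_atoms_cover_step[OF inv e False jI j\<alpha> idem_zero] by blast
  thus ?thesis using False by (intro exI[of _ "gf(j := v)"] exI[of _ "G \<oplus> v"]) auto
qed

definition orth_atoms_ext :: "'j set \<times> ('j \<Rightarrow> 'a) \<times> 'a \<Rightarrow> 'j set \<times> ('j \<Rightarrow> 'a) \<times> 'a \<Rightarrow> bool" where
  "orth_atoms_ext s s' \<longleftrightarrow> fst s \<subseteq> fst s' \<and> (\<forall>j\<in>fst s. fst (snd s') j = fst (snd s) j) \<and>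
     (\<forall>X\<in>carrier R. X \<otimes> snd (snd s) = X \<longrightarrow> X \<otimes> snd (snd s') = X)"

lemma orth_atoms_next:
  assumes e: "atom_at \<alpha> e" and jI: "j \<in> I" and j\<alpha>: "lt (h j) \<alpha>"
    and cover: "\<And>F gf G. orth_atoms e \<alpha> I h F gf G \<Longrightarrow> \<exists>j v. j \<in> I - F \<and>
      orth_atoms e \<alpha> I h (insert j F) (gf(j := v)) (G \<oplus> v) \<and>
      (\<forall>X\<in>carrier R. X \<otimes> G = X \<longrightarrow> X \<otimes> (G \<oplus> v) = X) \<and> c \<otimes> e \<otimes> (G \<oplus> v) = c \<otimes> e"
    and inv: "orth_atoms e \<alpha> I h (fst s) (fst (snd s)) (snd (snd s))"
    and cc: "c \<in> carrier R"
  shows "\<exists>s'. orth_atoms e \<alpha> I h (fst s') (fst (snd s')) (snd (snd s')) \<and> orth_atoms_ext s s' \<and>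
    j \<in> fst s' \<and> c \<otimes> e \<otimes> snd (snd s') = c \<otimes> e"
proof -
  obtain F gf G where s: "s = (F, gf, G)" by (cases s)
  obtain i v where i: "i \<in> I - F" and inv1: "orth_atoms e \<alpha> I h (insert i F) (gf(i := v)) (G \<oplus> v)"
    and keep1: "\<forall>X\<in>carrier R. X \<otimes> G = X \<longrightarrow> X \<otimes> (G \<oplus> v) = X" and cov: "c \<otimes> e \<otimes> (G \<oplus> v) = c \<otimes> e"
    using cover[of F gf G] inv unfolding s by auto
  obtain gf' G' where inv2: "orth_atoms e \<alpha> I h (insert j (insert i F)) gf' G'"
    and agree: "\<forall>k\<in>insert i F. gf' k = (gf(i := v)) k"
    and keep2: "\<forall>X\<in>carrier R. X \<otimes> (G \<oplus> v) = X \<longrightarrow> X \<otimes> G' = X"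
    using orth_atoms_add_index[OF inv1 e jI j\<alpha>] by blast
  have "c \<otimes> e \<in> carrier R" using cc e idem_carr unfolding atom_at_def by auto
  hence "c \<otimes> e \<otimes> G' = c \<otimes> e" using keep2 cov by blast
  moreover have "orth_atoms_ext s (insert j (insert i F), gf', G')"
    unfolding orth_atoms_ext_def s using agree keep1 keep2 i by auto
  ultimately show ?thesis using inv2 by (intro exI[of _ "(insert j (insert i F), gf', G')"]) auto
qed

text \<open>The cover steps are iterated along an enumeration of I and of the basis idempotents below
  \<alpha>, so that in the limit every index is used and every basis idempotent is absorbed.\<close>
lemma corner_prod_iso_of_cover_steps:
  fixes I :: "'j set" and h :: "'j \<Rightarrow> 'i"
  assumes e: "atom_at \<alpha> e" and Iinf: "infinite I" and Icnt: "countable I"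
    and hI: "\<And>j. j \<in> I \<Longrightarrow> lt (h j) \<alpha>"
    and cover: "\<And>m F gf G. orth_atoms e \<alpha> I h F gf G \<Longrightarrow> \<exists>j v. j \<in> I - F \<and>
      orth_atoms e \<alpha> I h (insert j F) (gf(j := v)) (G \<oplus> v) \<and>
      (\<forall>X\<in>carrier R. X \<otimes> G = X \<longrightarrow> X \<otimes> (G \<oplus> v) = X) \<and>
      basis_seq \<alpha> m \<otimes> e \<otimes> (G \<oplus> v) = basis_seq \<alpha> m \<otimes> e"
    and IH: "\<And>j g. j \<in> I \<Longrightarrow> atom_at (h j) g \<Longrightarrow> \<exists>\<psi>. corner_iso g (h j) \<psi>"
  shows "\<exists>\<Psi>. corner_prod_iso e I h \<Psi>"
proof -
  have aF: "\<alpha> \<in> Field r" and ei: "idem e" using e unfolding atom_at_def by auto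
  define enum where "enum = from_nat_into I"
  have enumI: "enum m \<in> I" for m
    unfolding enum_def using from_nat_into Iinf by (metis finite.emptyI)
  let ?inv = "\<lambda>s. orth_atoms e \<alpha> I h (fst s) (fst (snd s)) (snd (snd s))"
  let ?P = "\<lambda>m s s'. ?inv s' \<and> orth_atoms_ext s s' \<and> enum m \<in> fst s' \<and>
    basis_seq \<alpha> m \<otimes> e \<otimes> snd (snd s') = basis_seq \<alpha> m \<otimes> e"
  have next_ex: "\<exists>s'. ?P m s s'" if "?inv s" for m s
    using orth_atoms_next[OF e enumI hI[OF enumI] cover that basis_seq_carr[OF aF]] by blast
  define st where "st = rec_nat ({}, \<lambda>_. \<zero>, \<zero>) (\<lambda>m s. SOME s'. ?P m s s')"
  have st0: "st 0 = ({}, \<lambda>_. \<zero>, \<zero>)" and stS: "st (Suc m) = (SOME s'. ?P m (st m) s')" for m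
    unfolding st_def by simp_all
  have inv: "?inv (st m) \<and> ?P m (st m) (st (Suc m))" for m
  proof (induction m)
    case 0
    have "?inv (st 0)" unfolding st0 using orth_atoms_empty[OF ei aF] by simp
    thus ?case unfolding stS using someI_ex[OF next_ex] by blast
  next
    case (Suc m)
    hence "?inv (st (Suc m))" by blast
    thus ?case unfolding stS[of "Suc m"] using someI_ex[OF next_ex] by blast
  qed
  have ext: "orth_atoms_ext (st m) (st (Suc m))" for m using inv by blast
  have cov: "basis_seq \<alpha> k \<otimes> e \<otimes> snd (snd (st m)) = basis_seq \<alpha> k \<otimes> e" if "k < m" for k m
    using that
  proof (induction m)
    case (Suc m)
    have "basis_seq \<alpha> k \<otimes> e \<in> carrier R" using basis_seq_carr[OF aF] ei idem_carr by blast
    thus ?case using Suc inv[of m] ext[of m] unfolding orth_atoms_ext_def by (cases "k = m") auto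
  qed simp
  show ?thesis
  proof (rule corner_prod_iso_of_exhaustion[OF e Iinf])
    show "orth_atoms e \<alpha> I h (fst (st m)) (fst (snd (st m))) (snd (snd (st m)))" for m using inv by blast
    show "fst (st m) \<subseteq> fst (st (Suc m))" for m using ext[of m] unfolding orth_atoms_ext_def by blast
    show "fst (snd (st (Suc m))) j = fst (snd (st m)) j" if "j \<in> fst (st m)" for m j
      using ext[of m] that unfolding orth_atoms_ext_def by blast
    show "\<exists>m. j \<in> fst (st m)" if jI: "j \<in> I" for j
    proof -
      obtain m where "enum m = j" using from_nat_into_surj[OF Icnt jI] unfolding enum_def by blast
      thus ?thesis using inv[of m] by blast
    qed
  qed (use cov IH in blast)+
qed

lemma basis_seq_succ_level: assumes ba: "is_succ_of r \<beta> \<alpha>"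
  shows "basis_seq \<alpha> m \<in> Snext \<beta> \<and> card (supp (coord \<beta> (basis_seq \<alpha> m))) \<le> 1"
proof -
  have aF: "\<alpha> \<in> Field r" and bF: "\<beta> \<in> Field r" using lt_Field[OF succ_lt[OF ba]] by auto
  have "basis_seq \<alpha> m = \<zero> \<or> (\<exists>b i. lt b \<alpha> \<and> i \<in> basis_idx b \<and> basis_seq \<alpha> m = basis_idem b i)"
    using basis_seq_props[OF aF] by blast
  thus ?thesis
  proof
    assume c0: "basis_seq \<alpha> m = \<zero>"
    have "supp (coord \<beta> \<zero>) = {}" using supp_empty_iff[OF bF Snext_zero[OF bF]] zero_in_S[OF bF] by simp
    thus ?thesis using c0 Snext_zero[OF bF] by simp
  next
    assume "\<exists>b i. lt b \<alpha> \<and> i \<in> basis_idx b \<and> basis_seq \<alpha> m = basis_idem b i"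
    then obtain b i where b: "lt b \<alpha>" and iL: "i \<in> basis_idx b" and cu: "basis_seq \<alpha> m = basis_idem b i" by blast
    have ub: "basis_idem b i \<in> Snext b" and pu: "coord b (basis_idem b i) = unit_vec i"
      using basis_idem[OF conjunct1[OF lt_Field[OF b]] iL] by auto
    from succ_below[OF ba b] show ?thesis
    proof
      assume "b = \<beta>"
      thus ?thesis using ub pu cu supp_unit_vec by simp
    next
      assume bb: "lt b \<beta>"
      have cS: "basis_seq \<alpha> m \<in> S \<beta>" using Snext_sub_S[OF bb] ub unfolding cu by blast
      hence cT: "basis_seq \<alpha> m \<in> Snext \<beta>" using S_sub_Snext[OF bF] by blast
      thus ?thesis using supp_empty_iff[OF bF cT] cS by simp
    qed
  qed
qed

text \<open>At a successor \<alpha> = \<beta> + 1, the part d of the next basis idempotent not yet absorbed either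
  lies in S \<beta> (then it is completed to an atom at \<beta>), or it is itself an atom at \<beta>.\<close>
lemma succ_cover_step:
  assumes ba: "is_succ_of r \<beta> \<alpha>" and e: "atom_at \<alpha> e"
    and inv: "orth_atoms e \<alpha> (UNIV :: nat set) (\<lambda>_. \<beta>) F gf G"
  shows "\<exists>j v. j \<in> UNIV - F \<and> orth_atoms e \<alpha> UNIV (\<lambda>_. \<beta>) (insert j F) (gf(j := v)) (G \<oplus> v) \<and>
    (\<forall>X\<in>carrier R. X \<otimes> G = X \<longrightarrow> X \<otimes> (G \<oplus> v) = X) \<and>
    basis_seq \<alpha> m \<otimes> e \<otimes> (G \<oplus> v) = basis_seq \<alpha> m \<otimes> e"
proof -
  have aF: "\<alpha> \<in> Field r" and ei: "idem e" using e unfolding atom_at_def by auto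
  have bF: "\<beta> \<in> Field r" using lt_Field[OF succ_lt[OF ba]] by blast
  have Gi: "idem G" and eG: "e \<otimes> G = G" and finF: "finite F" using inv unfolding orth_atoms_def by auto
  obtain j where jF: "j \<notin> F" using finF infinite_UNIV_nat by (metis UNIV_I finite_subset subsetI)
  define c where "c = basis_seq \<alpha> m"
  have ci: "idem c" unfolding c_def using basis_seq_props[OF aF] by blast
  have cc: "c \<in> carrier R" using idem_carr[OF ci] .
  have cT: "c \<in> Snext \<beta>" and csupp: "card (supp (coord \<beta> c)) \<le> 1"
    using basis_seq_succ_level[OF ba] unfolding c_def by auto
  define f0 where "f0 = e \<ominus> G"
  have f0i: "idem f0" unfolding f0_def using idem_minus[OF ei Gi eG] by blast
  have f0c: "f0 \<in> carrier R" using idem_carr[OF f0i] .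
  define d where "d = c \<otimes> f0"
  show ?thesis
  proof (cases "d \<in> S \<beta>")
    case True
    thus ?thesis using orth_atoms_cover_step[OF inv e jF UNIV_I succ_lt[OF ba] ci] jF
      unfolding c_def d_def f0_def by blast
  next
    case False
    have di: "idem d" unfolding d_def using idem_mult[OF ci f0i] .
    have dc: "d \<in> carrier R" using idem_carr[OF di] .
    have dT: "d \<in> Snext \<beta>" unfolding d_def using Snext_multr[OF bF cT f0c] .
    have "card (supp (coord \<beta> d)) \<le> card (supp (coord \<beta> c))"
      unfolding d_def using supp_absorb[OF bF cT ci f0c] supp_finite[OF bF cT] card_mono by blast
    moreover have "card (supp (coord \<beta> d)) > 0"
      using supp_empty_iff[OF bF dT] False supp_finite[OF bF dT] by (simp add: card_gt_0_iff)
    ultimately have "card (supp (coord \<beta> d)) = 1" using csupp by linarith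
    hence d_atom: "atom_at \<beta> d" unfolding atom_at_def using bF di dT by blast
    have "f0 \<otimes> d = c \<otimes> (f0 \<otimes> f0)" unfolding d_def using cc f0c by algebra
    hence f0d: "f0 \<otimes> d = d" using idem_sq[OF f0i] unfolding d_def by simp
    have dS: "d \<in> S \<alpha>" using dT S_succ[OF ba] by simp
    show ?thesis
      using orth_atoms_insert[OF inv ei aF jF UNIV_I _ _ dS] orth_atoms_absorb[OF inv ei cc dc]
        d_atom f0d idem_sq[OF di] jF unfolding d_def f0_def c_def by auto
  qed
qed

lemma corner_iso_succ_step: assumes ba: "is_succ_of r \<beta> \<alpha>" and e: "atom_at \<alpha> e"
    and IH: "\<And>g. atom_at \<beta> g \<Longrightarrow> \<exists>\<psi>. corner_iso g \<beta> \<psi>"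
  shows "\<exists>\<psi>. corner_iso e \<alpha> \<psi>"
proof -
  have "\<exists>\<Psi>. corner_prod_iso e (UNIV :: nat set) (\<lambda>_. \<beta>) \<Psi>"
    using corner_prod_iso_of_cover_steps[OF e infinite_UNIV_nat countableI_type _ succ_cover_step[OF ba e] IH]
      succ_lt[OF ba] by blast
  thus ?thesis using corner_iso_of_prod_succ[OF ba] by blast
qed

lemma above_infinite: assumes al: "is_limit_pt r \<alpha>" and b': "lt b' \<alpha>" shows "infinite {b. lt b' b \<and> lt b \<alpha>}"
proof -
  define nx where "nx x = (SOME c. lt x c \<and> lt c \<alpha>)" for x
  have nx: "lt x (nx x) \<and> lt (nx x) \<alpha>" if "lt x \<alpha>" for x
  proof -
    have "\<exists>c. lt x c \<and> lt c \<alpha>" using limit_between[OF al that] .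
    hence "(\<lambda>c. lt x c \<and> lt c \<alpha>) (SOME c. lt x c \<and> lt c \<alpha>)" by (rule someI_ex[of "\<lambda>c. lt x c \<and> lt c \<alpha>"])
    hence "lt x (SOME c. lt x c \<and> lt c \<alpha>) \<and> lt (SOME c. lt x c \<and> lt c \<alpha>) \<alpha>" by (simp only:)
    thus ?thesis by (simp only: nx_def)
  qed
  define sq where "sq = rec_nat (nx b') (\<lambda>n x. nx x)"
  have sq0: "sq 0 = nx b'" and sqS: "sq (Suc n) = nx (sq n)" for n unfolding sq_def by simp_all
  have sqa: "lt b' (sq n) \<and> lt (sq n) \<alpha>" for n
  proof (induction n)
    case 0 thus ?case using nx[OF b'] sq0 by simp
  next
    case (Suc n) thus ?case using nx[of "sq n"] sqS[of n] lt_trans by metis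
  qed
  have inc: "lt (sq m) (sq n)" if "m < n" for m n
    using that
  proof (induction n)
    case 0 thus ?case by simp
  next
    case (Suc n)
    have step: "lt (sq n) (sq (Suc n))" using nx[of "sq n"] sqa[of n] sqS[of n] by simp
    show ?case
    proof (cases "m = n")
      case True thus ?thesis using step by simp
    next
      case False
      hence "m < n" using Suc.prems by simp
      thus ?thesis using Suc.IH step lt_trans by blast
    qed
  qed
  have "inj sq"
  proof (rule injI)
    fix m n assume eq: "sq m = sq n"
    show "m = n"
    proof (rule ccontr)
      assume "m \<noteq> n"
      hence "m < n \<or> n < m" by arith
      thus False using inc eq lt_irrefl by metis
    qed
  qed
  hence "infinite (range sq)" using range_inj_infinite by blast
  moreover have "range sq \<subseteq> {b. lt b' b \<and> lt b \<alpha>}" using sqa by blast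
  ultimately show ?thesis using infinite_super by blast
qed

lemma limit_cover_step:
  assumes al: "is_limit_pt r \<alpha>" and e: "atom_at \<alpha> e"
    and inv: "orth_atoms e \<alpha> {b. lt b \<alpha>} id F gf G"
  shows "\<exists>j v. j \<in> {b. lt b \<alpha>} - F \<and> orth_atoms e \<alpha> {b. lt b \<alpha>} id (insert j F) (gf(j := v)) (G \<oplus> v) \<and>
    (\<forall>X\<in>carrier R. X \<otimes> G = X \<longrightarrow> X \<otimes> (G \<oplus> v) = X) \<and>
    basis_seq \<alpha> m \<otimes> e \<otimes> (G \<oplus> v) = basis_seq \<alpha> m \<otimes> e"
proof -
  have aF: "\<alpha> \<in> Field r" and ei: "idem e" using e unfolding atom_at_def by auto
  have Gi: "idem G" and finF: "finite F" using inv unfolding orth_atoms_def by auto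
  define c where "c = basis_seq \<alpha> m"
  have ci: "idem c" unfolding c_def using basis_seq_props[OF aF] by blast
  have "c = \<zero> \<or> (\<exists>b i. lt b \<alpha> \<and> i \<in> basis_idx b \<and> c = basis_idem b i)"
    using basis_seq_props[OF aF] unfolding c_def by blast
  hence cS: "c \<in> S \<alpha>"
    using zero_in_S[OF aF] basis_idem lt_Field Snext_sub_S by blast
  define d where "d = c \<otimes> (e \<ominus> G)"
  have dS: "d \<in> S \<alpha>" unfolding d_def using S_multr[OF aF cS] ei Gi idem_carr by simp
  \<comment> \<open>As \<alpha> is a limit, there are infinitely many levels b < \<alpha> with d \<in> S b.\<close>
  have "\<exists>b. b \<notin> F \<and> lt b \<alpha> \<and> d \<in> S b"
  proof -
    from S_below[OF aF dS] show ?thesis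
    proof
      assume d0: "d = \<zero>"
      obtain b0 where "lt b0 \<alpha>" using limit_has_below[OF al] by blast
      then obtain b where "b \<in> {b. lt b0 b \<and> lt b \<alpha>} - F"
        using Diff_infinite_finite[OF finF above_infinite[OF al]] by (metis finite.emptyI ex_in_conv)
      thus ?thesis using d0 zero_in_S lt_Field by blast
    next
      assume "\<exists>b'. lt b' \<alpha> \<and> d \<in> Snext b'"
      then obtain b' where b': "lt b' \<alpha>" "d \<in> Snext b'" by blast
      obtain b where "b \<in> {b. lt b' b \<and> lt b \<alpha>} - F"
        using Diff_infinite_finite[OF finF above_infinite[OF al b'(1)]] by (metis finite.emptyI ex_in_conv)
      thus ?thesis using Snext_sub_S b'(2) by blast
    qed
  qed
  then obtain b where bF: "b \<notin> F" and b\<alpha>: "lt b \<alpha>" and dSb: "d \<in> S b" by blast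
  show ?thesis
    using orth_atoms_cover_step[of e \<alpha> "{b. lt b \<alpha>}" id F gf G b c] inv e bF b\<alpha> ci dSb
    unfolding d_def c_def by auto
qed

lemma corner_iso_limit_step: assumes al: "is_limit_pt r \<alpha>" and e: "atom_at \<alpha> e"
    and IH: "\<And>b g. lt b \<alpha> \<Longrightarrow> atom_at b g \<Longrightarrow> \<exists>\<psi>. corner_iso g b \<psi>"
  shows "\<exists>\<psi>. corner_iso e \<alpha> \<psi>"
proof -
  obtain b0 where "lt b0 \<alpha>" using limit_has_below[OF al] by blast
  hence "infinite {b. lt b0 b \<and> lt b \<alpha>}" by (rule above_infinite[OF al])
  hence Iinf: "infinite {b. lt b \<alpha>}" by (rule infinite_super[rotated]) blast
  have "{b. lt b \<alpha>} \<subseteq> Field r" using lt_Field by blast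
  hence Icnt: "countable {b. lt b \<alpha>}" using cnt by (rule countable_subset)
  have "\<exists>\<Psi>. corner_prod_iso e {b. lt b \<alpha>} id \<Psi>"
  proof (rule corner_prod_iso_of_cover_steps[OF e Iinf Icnt])
    show "\<And>m F gf G. orth_atoms e \<alpha> {b. lt b \<alpha>} id F gf G \<Longrightarrow> \<exists>j v. j \<in> {b. lt b \<alpha>} - F \<and>
      orth_atoms e \<alpha> {b. lt b \<alpha>} id (insert j F) (gf(j := v)) (G \<oplus> v) \<and>
      (\<forall>X\<in>carrier R. X \<otimes> G = X \<longrightarrow> X \<otimes> (G \<oplus> v) = X) \<and>
      basis_seq \<alpha> m \<otimes> e \<otimes> (G \<oplus> v) = basis_seq \<alpha> m \<otimes> e"
      by (rule limit_cover_step[OF al e])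
  qed (use IH in auto)
  thus ?thesis using corner_iso_of_prod_lim[OF al] by blast
qed

lemma corner_iso_exists: "atom_at a e \<Longrightarrow> \<exists>\<psi>. corner_iso e a \<psi>"
proof (induction a arbitrary: e rule: lt_induct)
  case (1 a)
  have e: "atom_at a e" and aF: "a \<in> Field r" using "1.prems" unfolding atom_at_def by auto
  consider "is_zero_pt r a" | b where "is_succ_of r b a" | "is_limit_pt r a"
    using zero_succ_or_limit[OF aF] by blast
  thus ?case
  proof cases
    case 1 thus ?thesis using corner_iso_zero e by blast
  next
    case (2 b) thus ?thesis using corner_iso_succ_step[OF 2 e] "1.IH"[OF succ_lt[OF 2]] by blast
  next
    case 3 thus ?thesis using corner_iso_limit_step[OF 3 e] "1.IH" by blast
  qed
qed

section \<open>Decomposition of the unit\<close>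

lemma layer_card_le: assumes aF: "a \<in> Field r" and P1: "is_layer_map a \<phi>1 A" and P2: "is_layer_map a \<phi>2 B" and finB: "finite B"
  shows "finite A \<and> card A \<le> card B"
proof -
  define D where "D = {S a +> x | x. x \<in> Snext a}"
  have b1: "bij_betw \<phi>1 D (fin_supp A)" and b2: "bij_betw \<phi>2 D (fin_supp B)"
    using P1 P2 unfolding is_layer_map_def D_def by auto
  define \<rho> where "\<rho> = \<phi>2 \<circ> inv_into D \<phi>1"
  have brho: "bij_betw \<rho> (fin_supp A) (fin_supp B)"
    unfolding \<rho>_def using bij_betw_trans[OF bij_betw_inv_into[OF b1] b2] .
  have rep: "\<exists>x\<in>Snext a. z = \<phi>1 (S a +> x) \<and> \<rho> z = \<phi>2 (S a +> x)" if zA: "z \<in> fin_supp A" for z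
  proof -
    obtain d where dD: "d \<in> D" and zd: "z = \<phi>1 d" using zA b1 unfolding bij_betw_def by blast
    obtain x where xT: "x \<in> Snext a" and dx: "d = S a +> x" using dD unfolding D_def by blast
    have "inv_into D \<phi>1 z = d" using bij_betw_inv_into_left[OF b1 dD] zd by simp
    thus ?thesis using xT dx zd unfolding \<rho>_def by auto
  qed
  have mult1: "\<phi>1 (S a +> (x \<otimes> y)) = (\<lambda>i. \<phi>1 (S a +> x) i * \<phi>1 (S a +> y) i)" if "x \<in> Snext a" "y \<in> Snext a" for x y
    using P1 that unfolding is_layer_map_def by blast
  have mult2: "\<phi>2 (S a +> (x \<otimes> y)) = (\<lambda>i. \<phi>2 (S a +> x) i * \<phi>2 (S a +> y) i)" if "x \<in> Snext a" "y \<in> Snext a" for x y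
    using P2 that unfolding is_layer_map_def by blast
  have add1: "\<phi>1 (S a +> (x \<oplus> y)) = (\<lambda>i. \<phi>1 (S a +> x) i + \<phi>1 (S a +> y) i)" if "x \<in> Snext a" "y \<in> Snext a" for x y
    using P1 that unfolding is_layer_map_def by blast
  have add2: "\<phi>2 (S a +> (x \<oplus> y)) = (\<lambda>i. \<phi>2 (S a +> x) i + \<phi>2 (S a +> y) i)" if "x \<in> Snext a" "y \<in> Snext a" for x y
    using P2 that unfolding is_layer_map_def by blast
  have rho_at: "\<rho> (\<phi>1 (S a +> x)) = \<phi>2 (S a +> x)" if xT: "x \<in> Snext a" for x
  proof -
    have "S a +> x \<in> D" unfolding D_def using xT by blast
    thus ?thesis unfolding \<rho>_def using bij_betw_inv_into_left[OF b1] by simp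
  qed
  show ?thesis
  proof (rule fin_supp_embedding_card_le[OF bij_betw_imp_inj_on[OF brho] _ _ _ finB])
    show "\<rho> ` fin_supp A \<subseteq> fin_supp B" using brho unfolding bij_betw_def by blast
  next
    fix z z' :: "nat \<Rightarrow> 'k" assume zA: "z \<in> fin_supp A" and z'A: "z' \<in> fin_supp A"
    obtain x where xT: "x \<in> Snext a" and zx: "z = \<phi>1 (S a +> x)" using rep[OF zA] by blast
    obtain y where yT: "y \<in> Snext a" and zy: "z' = \<phi>1 (S a +> y)" using rep[OF z'A] by blast
    have xyT: "x \<otimes> y \<in> Snext a" using Snext_multr[OF aF xT Snext_carrI[OF aF yT]] .
    have xpyT: "x \<oplus> y \<in> Snext a" using Snext_add[OF aF xT yT] .
    show "\<rho> (\<lambda>i. z i * z' i) = (\<lambda>i. \<rho> z i * \<rho> z' i)"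
      using mult1[OF xT yT] mult2[OF xT yT] rho_at[OF xT] rho_at[OF yT] rho_at[OF xyT] zx zy by simp
    show "\<rho> (\<lambda>i. z i + z' i) = (\<lambda>i. \<rho> z i + \<rho> z' i)"
      using add1[OF xT yT] add2[OF xT yT] rho_at[OF xT] rho_at[OF yT] rho_at[OF xpyT] zx zy by simp
  qed
qed

lemma Snext_top: "Snext \<sigma> = carrier R" using topsoc by simp

lemma card_basis_idx_top: fixes L :: "nat set" assumes L: "finite L" "layer_iso R sm (S \<sigma>) (Snext \<sigma>) L"
  shows "finite (basis_idx \<sigma>) \<and> card (basis_idx \<sigma>) = card L"
proof -
  obtain \<phi>2 where P2: "is_layer_map \<sigma> \<phi>2 L" using L(2) layer_iso_iff_is_layer_map by blast
  have P1: "is_layer_map \<sigma> (layer_map \<sigma>) (basis_idx \<sigma>)" using is_layer_map_layer_map[OF top(1)] .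
  have A: "finite (basis_idx \<sigma>) \<and> card (basis_idx \<sigma>) \<le> card L" using layer_card_le[OF top(1) P1 P2 L(1)] .
  have B: "card L \<le> card (basis_idx \<sigma>)" using layer_card_le[OF top(1) P2 P1] A by blast
  show ?thesis using A B by simp
qed

definition set_ind :: "nat set \<Rightarrow> nat \<Rightarrow> 'k" where "set_ind X = (\<lambda>i. if i \<in> X then 1 else 0)"

lemma coord_one: "coord \<sigma> \<one> = set_ind (basis_idx \<sigma>)"
proof
  fix i
  show "coord \<sigma> \<one> i = set_ind (basis_idx \<sigma>) i"
  proof (cases "i \<in> basis_idx \<sigma>")
    case True
    have uT: "basis_idem \<sigma> i \<in> Snext \<sigma>" and pu: "coord \<sigma> (basis_idem \<sigma> i) = unit_vec i" using basis_idem[OF top(1) True] by auto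
    have oT: "\<one> \<in> Snext \<sigma>" using Snext_top by simp
    have "coord \<sigma> (\<one> \<otimes> basis_idem \<sigma> i) = (\<lambda>j. coord \<sigma> \<one> j * coord \<sigma> (basis_idem \<sigma> i) j)" using coord_mult[OF top(1) oT uT] .
    hence "unit_vec i = (\<lambda>j. coord \<sigma> \<one> j * unit_vec i j)" using pu basis_idem_carr[OF top(1) True] by simp
    hence "unit_vec i i = coord \<sigma> \<one> i * unit_vec i i" by metis
    thus ?thesis using True unfolding unit_vec_def set_ind_def by simp
  next
    case False
    have "coord \<sigma> \<one> \<in> fin_supp (basis_idx \<sigma>)" using coord_in_fin_supp[OF top(1)] Snext_top by simp
    thus ?thesis using False fin_supp_outside[of "coord \<sigma> \<one>"] unfolding set_ind_def by simp
  qed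
qed

text \<open>Peeling off one atom X u at a time, where u is a basis idempotent of the top layer.\<close>
lemma atom_decomposition:
  assumes "0 < k" "finite A" "card A = k" "idem X" "coord \<sigma> X = set_ind A"
  shows "\<exists>eps. (\<forall>j<k. atom_at \<sigma> (eps j) \<and> X \<otimes> eps j = eps j) \<and>
    (\<forall>j<k. \<forall>j'<k. j \<noteq> j' \<longrightarrow> eps j \<otimes> eps j' = \<zero>) \<and> finsum R eps {..<k} = X"
  using assms
proof (induction k arbitrary: A X rule: nat_induct_non_zero)
  case 1
  then obtain i where "A = {i}" using card_1_singletonE by blast
  hence "coord \<sigma> X = unit_vec i" using "1.prems"(4) unfolding set_ind_def unit_vec_def by auto
  hence "atom_at \<sigma> X" using atom_atI[OF top(1) "1.prems"(3)] Snext_top idem_carr[OF "1.prems"(3)] by simp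
  moreover have "finsum R (\<lambda>_. X) {..<1::nat} = X"
    using idem_carr[OF "1.prems"(3)] by (simp add: lessThan_Suc finsum_insert)
  ultimately show ?case using idem_sq[OF "1.prems"(3)] by (intro exI[of _ "\<lambda>_. X"]) auto
next
  case (Suc k)
  have Xi: "idem X" and cX: "coord \<sigma> X = set_ind A" using Suc.prems(3,4) .
  have Xc: "X \<in> carrier R" using idem_carr[OF Xi] .
  have "A \<noteq> {}" using Suc.prems(2) card_gt_0_iff[of A] by simp
  then obtain i where iA: "i \<in> A" by blast
  have "coord \<sigma> X \<in> fin_supp (basis_idx \<sigma>)" by (rule coord_in_fin_supp[OF top(1)]) (simp add: Snext_top Xc)
  moreover have "coord \<sigma> X i \<noteq> 0" using cX iA unfolding set_ind_def by simp
  ultimately have iL: "i \<in> basis_idx \<sigma>" using fin_supp_outside[of "coord \<sigma> X"] by blast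
  define u where "u = basis_idem \<sigma> i"
  have ui: "idem u" and pu: "coord \<sigma> u = unit_vec i" using basis_idem[OF top(1) iL] unfolding u_def by auto
  have uc: "u \<in> carrier R" using idem_carr[OF ui] .
  define e0 where "e0 = X \<otimes> u"
  have e0i: "idem e0" unfolding e0_def using idem_mult[OF Xi ui] .
  have e0c: "e0 \<in> carrier R" using idem_carr[OF e0i] .
  have "coord \<sigma> e0 = (\<lambda>j. set_ind A j * unit_vec i j)"
    unfolding e0_def using coord_mult[OF top(1)] Snext_top Xc uc cX pu by simp
  also have "\<dots> = unit_vec i" using iA unfolding set_ind_def unit_vec_def by auto
  finally have ce0: "coord \<sigma> e0 = unit_vec i" .
  have e0_atom: "atom_at \<sigma> e0" using atom_atI[OF top(1) e0i _ ce0] e0c Snext_top by simp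
  have Xe0: "X \<otimes> e0 = e0" unfolding e0_def using idem_absorb[OF Xi uc] .
  define X' where "X' = X \<ominus> e0"
  have X'i: "idem X'" and X'e0: "X' \<otimes> e0 = \<zero>" and XX': "X \<otimes> X' = X'"
    using idem_minus[OF Xi e0i Xe0] unfolding X'_def by auto
  have X'c: "X' \<in> carrier R" using idem_carr[OF X'i] .
  have "coord \<sigma> X' = (\<lambda>j. set_ind A j - unit_vec i j)"
    unfolding X'_def using coord_minus[OF top(1)] Snext_top Xc e0c cX ce0 by simp
  also have "\<dots> = set_ind (A - {i})" using iA unfolding set_ind_def unit_vec_def by auto
  finally obtain eps' where eps': "\<forall>j<k. atom_at \<sigma> (eps' j) \<and> X' \<otimes> eps' j = eps' j"
      "\<forall>j<k. \<forall>j'<k. j \<noteq> j' \<longrightarrow> eps' j \<otimes> eps' j' = \<zero>" "finsum R eps' {..<k} = X'"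
    using Suc.IH[of "A - {i}" X'] Suc.hyps Suc.prems iA X'i by auto
  have eps'c: "eps' j \<in> carrier R" if "j < k" for j using eps'(1) that idem_carr unfolding atom_at_def by blast
  have orth_e0: "eps' j \<otimes> e0 = \<zero>" if jk: "j < k" for j
  proof -
    have "eps' j \<otimes> e0 = (X' \<otimes> eps' j) \<otimes> e0" using eps'(1) jk by simp
    also have "\<dots> = eps' j \<otimes> (X' \<otimes> e0)" using X'c eps'c[OF jk] e0c by algebra
    finally show ?thesis using X'e0 eps'c[OF jk] by simp
  qed
  define eps where "eps = eps'(k := e0)"
  have "\<forall>j<Suc k. atom_at \<sigma> (eps j) \<and> X \<otimes> eps j = eps j"
  proof (intro allI impI)
    fix j assume "j < Suc k"
    show "atom_at \<sigma> (eps j) \<and> X \<otimes> eps j = eps j"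
    proof (cases "j = k")
      case False
      hence jk: "j < k" using \<open>j < Suc k\<close> by simp
      have "X \<otimes> eps' j = X \<otimes> (X' \<otimes> eps' j)" using eps'(1) jk by simp
      also have "\<dots> = (X \<otimes> X') \<otimes> eps' j" using Xc X'c eps'c[OF jk] by (simp add: m_assoc)
      finally show ?thesis using XX' eps'(1) jk False unfolding eps_def by simp
    qed (use e0_atom Xe0 eps_def in simp)
  qed
  moreover have "\<forall>j<Suc k. \<forall>j'<Suc k. j \<noteq> j' \<longrightarrow> eps j \<otimes> eps j' = \<zero>"
    using eps'(2) orth_e0 eps'c e0c m_comm unfolding eps_def less_Suc_eq by fastforce
  moreover have "finsum R eps {..<k} = finsum R eps' {..<k}"
    unfolding eps_def using eps'c by (intro finsum_cong') auto
  hence "finsum R eps {..<Suc k} = e0 \<oplus> finsum R eps' {..<k}"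
    using eps'c e0c unfolding lessThan_Suc by (simp add: finsum_insert Pi_def eps_def)
  moreover have "e0 \<oplus> X' = X" unfolding X'_def using Xc e0c by algebra
  ultimately show ?case using eps'(3) by (intro exI[of _ eps]) auto
qed

lemma one_decomposition: assumes "finite (basis_idx \<sigma>)" "card (basis_idx \<sigma>) = n" "0 < n"
  shows "\<exists>eps. (\<forall>k<n. atom_at \<sigma> (eps k)) \<and> (\<forall>j<n. \<forall>j'<n. j \<noteq> j' \<longrightarrow> eps j \<otimes> eps j' = \<zero>) \<and>
    finsum R eps {..<n} = \<one>"
proof -
  have "idem \<one>" unfolding idem_def by simp
  thus ?thesis using atom_decomposition[of n "basis_idx \<sigma>" \<one>] assms coord_one by auto
qed

end

locale unit_decomposition = layered_algebra R sm r S \<sigma>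
  for R :: "('a, 'b) ring_scheme" (structure) and sm :: "'k::field \<Rightarrow> 'a \<Rightarrow> 'a"
    and r :: "'i rel" and S :: "'i \<Rightarrow> 'a set" and \<sigma> :: 'i +
  fixes n :: nat and eps :: "nat \<Rightarrow> 'a" and \<psi> :: "nat \<Rightarrow> 'a \<Rightarrow> ('i + nat) list \<Rightarrow> 'k"
  assumes eps_idem: "\<And>k. k < n \<Longrightarrow> idem (eps k)"
    and eps_orth: "\<And>j k. j < n \<Longrightarrow> k < n \<Longrightarrow> j \<noteq> k \<Longrightarrow> eps j \<otimes> eps k = \<zero>"
    and eps_sum: "finsum R eps {..<n} = \<one>"
    and eps_iso: "\<And>k. k < n \<Longrightarrow> corner_iso (eps k) \<sigma> (\<psi> k)"
begin

definition Phi :: "'a \<Rightarrow> nat \<times> ('i + nat) list \<Rightarrow> 'k" where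
  "Phi x = (\<lambda>(k, p). if k < n then \<psi> k (eps k \<otimes> x) p else 0)"

lemma eps_carr: "k < n \<Longrightarrow> eps k \<in> carrier R"
  using eps_idem idem_carr by blast

lemma eps_corner: "k < n \<Longrightarrow> x \<in> carrier R \<Longrightarrow> eps k \<otimes> x \<in> corner (eps k)"
  using corner_mult eps_idem by blast

lemmas eps_isoD = corner_isoD[OF eps_iso]

lemma Phi_component: "k < n \<Longrightarrow> (\<lambda>p. Phi x (k, p)) = \<psi> k (eps k \<otimes> x)"
  unfolding Phi_def by simp

lemma sum_eps_mult: "x \<in> carrier R \<Longrightarrow> finsum R (\<lambda>k. eps k \<otimes> x) {..<n} = x"
  using finsum_ldistr[of "{..<n}" x eps] eps_carr eps_sum by (simp add: Pi_def)

lemma Phi_inj: "inj_on Phi (carrier R)"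
proof (rule inj_onI)
  fix x y assume xc: "x \<in> carrier R" and yc: "y \<in> carrier R" and eq: "Phi x = Phi y"
  have "eps k \<otimes> x = eps k \<otimes> y" if kn: "k < n" for k
  proof -
    have "\<psi> k (eps k \<otimes> x) = \<psi> k (eps k \<otimes> y)" using Phi_component[OF kn] eq by metis
    thus ?thesis using bij_betw_imp_inj_on[OF eps_isoD(1)[OF kn]] eps_corner[OF kn xc] eps_corner[OF kn yc]
      by (simp add: inj_on_eq_iff)
  qed
  hence "finsum R (\<lambda>k. eps k \<otimes> x) {..<n} = finsum R (\<lambda>k. eps k \<otimes> y) {..<n}"
    using yc eps_carr by (intro finsum_cong') auto
  thus "x = y" using sum_eps_mult[OF xc] sum_eps_mult[OF yc] by simp
qed

lemma Phi_in_Bn_car: "x \<in> carrier R \<Longrightarrow> Phi x \<in> Bn_car r \<sigma> n"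
  unfolding Bn_car_def using Phi_component bij_betw_apply[OF eps_isoD(1) eps_corner]
  by (auto simp: Phi_def)

lemma Phi_surj: "Bn_car r \<sigma> n \<subseteq> Phi ` carrier R"
proof
  fix y :: "nat \<times> ('i + nat) list \<Rightarrow> 'k" assume yB: "y \<in> Bn_car r \<sigma> n"
  define z where "z k = inv_into (corner (eps k)) (\<psi> k) (\<lambda>p. y (k, p))" for k
  have z: "z k \<in> corner (eps k) \<and> \<psi> k (z k) = (\<lambda>p. y (k, p))" if kn: "k < n" for k
    unfolding z_def using eps_isoD(1)[OF kn] yB kn unfolding Bn_car_def
    by (metis (mono_tags, lifting) bij_betw_imp_surj_on inv_into_into bij_betw_inv_into_right mem_Collect_eq)
  have zp: "\<And>k. k \<in> {..<n} \<Longrightarrow> z k \<in> carrier R \<and> eps k \<otimes> z k = z k" using z corner_D by blast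
  define x where "x = finsum R z {..<n}"
  have xc: "x \<in> carrier R" unfolding x_def using finsum_closed zp by (simp add: Pi_def)
  have ex: "eps k \<otimes> x = z k" if kn: "k < n" for k
    using orth_idem_finsum[where g=eps and I="{..<n}" and F="{..<n}", OF _ _ _ _ zp] eps_idem eps_orth kn
    unfolding x_def by auto
  have "Phi x = y"
  proof
    fix kp show "Phi x kp = y kp"
      using ex z yB unfolding Phi_def Bn_car_def by (cases kp) (auto simp: fun_eq_iff)
  qed
  thus "y \<in> Phi ` carrier R" using xc by blast
qed

lemma Phi_add: "x \<in> carrier R \<Longrightarrow> y \<in> carrier R \<Longrightarrow> Phi (x \<oplus> y) = (\<lambda>i. Phi x i + Phi y i)"
  using eps_isoD(2)[OF _ eps_corner eps_corner] r_distr eps_carr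
  unfolding Phi_def by (auto simp: fun_eq_iff)

lemma Phi_mult:
  assumes xc: "x \<in> carrier R" and yc: "y \<in> carrier R"
  shows "Phi (x \<otimes> y) = (\<lambda>i. Phi x i * Phi y i)"
proof
  fix kp show "Phi (x \<otimes> y) kp = Phi x kp * Phi y kp"
  proof (cases kp)
    case (Pair k p)
    show ?thesis
    proof (cases "k < n")
      case True
      have "(eps k \<otimes> x) \<otimes> (eps k \<otimes> y) = (eps k \<otimes> eps k) \<otimes> (x \<otimes> y)" using xc yc eps_carr[OF True] by algebra
      hence "eps k \<otimes> (x \<otimes> y) = (eps k \<otimes> x) \<otimes> (eps k \<otimes> y)" using idem_sq[OF eps_idem[OF True]] by simp
      thus ?thesis unfolding Pair Phi_def using True eps_isoD(3)[OF True eps_corner[OF True xc] eps_corner[OF True yc]] by simp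
    qed (simp add: Pair Phi_def)
  qed
qed

lemma Phi_sm: "x \<in> carrier R \<Longrightarrow> Phi (sm c x) = (\<lambda>i. c * Phi x i)"
  using eps_isoD(4)[OF _ eps_corner] eps_carr scal_closed[of c]
  unfolding Phi_def sm_eq by (auto simp: fun_eq_iff m_lcomm)

lemma Phi_one: "Phi \<one> = Bn_one r \<sigma> n"
  using eps_isoD(5) eps_carr unfolding Phi_def Bn_one_def by (auto simp: fun_eq_iff)

lemma iso_to_Bn_Phi: "iso_to_Bn R sm r \<sigma> n"
proof -
  have "bij_betw Phi (carrier R) (Bn_car r \<sigma> n)"
    unfolding bij_betw_def using Phi_inj Phi_in_Bn_car Phi_surj by blast
  thus ?thesis unfolding iso_to_Bn_def using Phi_add Phi_mult Phi_sm Phi_one by (intro exI[of _ Phi]) simp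
qed

end

context layered_algebra begin

lemma iso_to_Bn_of_decomposition:
  assumes "\<forall>k<n. atom_at \<sigma> (eps k)" and "\<forall>j<n. \<forall>j'<n. j \<noteq> j' \<longrightarrow> eps j \<otimes> eps j' = \<zero>"
    and "finsum R eps {..<n} = \<one>"
  shows "iso_to_Bn R sm r \<sigma> n"
proof -
  have "\<forall>k. \<exists>\<psi>. k < n \<longrightarrow> corner_iso (eps k) \<sigma> \<psi>" using corner_iso_exists assms(1) by blast
  then obtain \<psi> where "\<And>k. k < n \<Longrightarrow> corner_iso (eps k) \<sigma> (\<psi> k)" by metis
  then interpret unit_decomposition R sm r S \<sigma> n eps \<psi>
    using assms by unfold_locales (auto simp: atom_at_def)
  show ?thesis by (rule iso_to_Bn_Phi)
qed

end

theorem theorem7p1: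
  fixes R :: "('a, 'b) ring_scheme"
    and sm :: "'k::field \<Rightarrow> 'a \<Rightarrow> 'a"
    and r :: "'i rel" and \<sigma> :: 'i and S :: "'i \<Rightarrow> 'a set" and n :: nat
  assumes alg: "K_algebra R sm"
    and vnr: "von_Neumann_regular R"
    and wo: "Well_order r"
    and top: "\<sigma> \<in> Field r" "\<forall>a\<in>Field r. (a, \<sigma>) \<in> r"
    and soc: "socle_seq R r S"
    and loewy: "\<forall>a\<in>Field r. S a \<noteq> carrier R" "soc_over R (S \<sigma>) = carrier R"
    and countable_sigma: "countable (Field r)"
    and layers: "\<forall>a\<in>Field r. \<exists>L :: nat set. L \<noteq> {} \<and> layer_iso R sm (S a) (soc_over R (S a)) L"
    and top_dim: "\<exists>L :: nat set. finite L \<and> card L = n \<and> layer_iso R sm (S \<sigma>) (soc_over R (S \<sigma>)) L"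
    and n_pos: "0 < n"
  shows "iso_to_Bn R sm r \<sigma> n"
proof -
  have "layered_algebra R sm r S \<sigma>"
    unfolding layered_algebra_def layered_algebra_axioms_def
    using alg vnr wo top soc loewy(2) countable_sigma layers by (auto simp: K_algebra_def)
  then interpret layered_algebra R sm r S \<sigma> .
  obtain L :: "nat set" where "finite L" "card L = n" "layer_iso R sm (S \<sigma>) (Snext \<sigma>) L"
    using top_dim by blast
  hence "finite (basis_idx \<sigma>)" "card (basis_idx \<sigma>) = n" using card_basis_idx_top by auto
  then obtain eps where "\<forall>k<n. atom_at \<sigma> (eps k)"
      "\<forall>j<n. \<forall>j'<n. j \<noteq> j' \<longrightarrow> eps j \<otimes>\<^bsub>R\<^esub> eps j' = \<zero>\<^bsub>R\<^esub>" "finsum R eps {..<n} = \<one>\<^bsub>R\<^esub>"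
    using one_decomposition n_pos by blast
  thus ?thesis by (rule iso_to_Bn_of_decomposition)
qed

end
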